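(* The operators $L=A^*A$, $R=B^*B$, $C=(AB)^3$ are invertible, symmetric and grading-preserving, and satisfy $ACA=BCB=C^{-1}$, $LCL^{-1}=RCR^{-1}=C$, $ALA=L^{-1}$, $BRB=R^{-1}$, $ARA=L^{-1}RC^{-1}$, $BLB=R^{-1}LC$.
   Context: Let $\mathcal C$ be a strict monoidal category with tensor product $\boxtimes$ and unit object $\mathbb I$ which is an Ab-category (all Hom-sets are abelian groups, composition and $\boxtimes$ are biadditive) whose ground ring $\mathsf k=\operatorname{End}(\mathbb I)$ is a field; each $\operatorname{Hom}(V,W)$ is a $\mathsf k$-vector space via $kf=k\boxtimes f$, and $\boxtimes$ is $\mathsf k$-bilinear on morphisms. An object $V$ is simple if $\operatorname{End}(V)=\mathsf k\,\mathrm{Id}_V$; for such $V$ and $f\in\operatorname{End}(V)$, $\langle f\rangle\in\mathsf k$ denotes the scalar with $f=\langle f\rangle\mathrm{Id}_V$. For objects $V_i$ write $H^{ij}_k=\operatorname{Hom}(V_k,V_i\boxtimes V_j)$ and $H^k_{ij}=\operatorname{Hom}(V_i\boxtimes V_j,V_k)$. A $\Psi$-system in $\mathcal C$ consists of (1) a family of simple objects $\{V_i\}_{i\in I}$ with $\operatorname{Hom}(V_i,V_j)=0$ for $i\neq j$; (2) an involution $i\mapsto i^*$ of $I$; (3) morphisms $b_i:\mathbb I\to V_i\boxtimes V_{i^*}$, $d_i:V_i\boxtimes V_{i^*}\to\mathbb I$ ($i\in I$) with $(\mathrm{Id}_{V_i}\boxtimes d_{i^*})(b_i\boxtimes\mathrm{Id}_{V_i})=\mathrm{Id}_{V_i}$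 and $(d_i\boxtimes\mathrm{Id}_{V_i})(\mathrm{Id}_{V_i}\boxtimes b_{i^*})=\mathrm{Id}_{V_i}$; (4) for all $i,j\in I$ such that $H^{ij}_k\neq0$ for some $k\in I$, the morphism $\mathrm{Id}_{V_i\boxtimes V_j}$ lies in the image of the linear map $\bigoplus_{k\in I}H^{ij}_k\otimes_{\mathsf k}H^k_{ij}\to\operatorname{End}(V_i\boxtimes V_j)$, $x\otimes y\mapsto x\circ y$. Fix a $\Psi$-system in $\mathcal C$. Let $\hat H=\bigoplus_{i,j,k\in I}H^k_{ij}$, $\check H=\bigoplus_{i,j,k\in I}H^{ij}_k$, $H=\hat H\oplus\check H$, and let $\pi^k_{ij}:H\to H^k_{ij}$, $\pi^{ij}_k:H\to H^{ij}_k$ be the projections. Define $A,B\in\operatorname{End}_{\mathsf k}(H)$ by $Ax=\sum_{i,j,k\in I}\big((\mathrm{Id}_{V_{i^*}}\boxtimes\pi^k_{ij}x)(b_{i^*}\boxtimes\mathrm{Id}_{V_j})+(d_{i^*}\boxtimes\mathrm{Id}_{V_j})(\mathrm{Id}_{V_{i^*}}\boxtimes\pi^{ij}_kx)\big)$, $Bx=\sum_{i,j,k\in I}\big((\pi^k_{ij}x\boxtimes\mathrm{Id}_{V_{j^*}})(\mathrm{Id}_{V_i}\boxtimes b_j)+(\mathrm{Id}_{V_i}\boxtimes d_j)(\pi^{ij}_kx\boxtimes\mathrm{Id}_{V_{j^*}})\big)$. Define the symmetric bilinear form on $H$: $\langle x,y\rangle=\sum_{i,j,k\in I}\big(\langle\pi^k_{ij}x\circ\pi^{ij}_ky\rangle+\langle\pi^k_{ij}y\circ\pi^{ij}_kx\rangle\big)$.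 A transpose of $f\in\operatorname{End}(H)$ is the (unique) $f^*\in\operatorname{End}(H)$ with $\langle fx,y\rangle=\langle x,f^*y\rangle$ for all $x,y\in H$; $A^*$, $B^*$ denote the transposes of $A$, $B$ (which exist). An operator $f$ is symmetric if $f^*=f$, and grading-preserving if $f(H^{ij}_k)\subset H^{ij}_k$ and $f(H^k_{ij})\subset H^k_{ij}$ for all $i,j,k\in I$. *)

theory Defs
  imports Main
begin

text \<open>A category is given by a type of objects 'o and a type of morphisms 'm, each morphism
having a domain and codomain.  mcomp g f is the composite g \<circ> f.\<close>

record ('o,'m) mcat =
  mdom :: "'m \<Rightarrow> 'o"
  mcod :: "'m \<Rightarrow> 'o"
  mid :: "'o \<Rightarrow> 'm"
  mcomp :: "'m \<Rightarrow> 'm \<Rightarrow> 'm"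
  otens :: "'o \<Rightarrow> 'o \<Rightarrow> 'o"
  mtens :: "'m \<Rightarrow> 'm \<Rightarrow> 'm"
  unito :: 'o
  mzero :: "'o \<Rightarrow> 'o \<Rightarrow> 'm"
  madd :: "'m \<Rightarrow> 'm \<Rightarrow> 'm"
  mneg :: "'m \<Rightarrow> 'm"

definition hom :: "('o,'m) mcat \<Rightarrow> 'o \<Rightarrow> 'o \<Rightarrow> 'm set" where
  "hom C V W = {f. mdom C f = V \<and> mcod C f = W}"

definition strict_monoidal_ab_cat :: "('o,'m) mcat \<Rightarrow> bool" where
  "strict_monoidal_ab_cat C \<longleftrightarrow>
   \<comment> \<open>category\<close>
   (\<forall>V. mid C V \<in> hom C V V) \<and>
   (\<forall>U V W f g. f \<in> hom C U V \<longrightarrow> g \<in> hom C V W \<longrightarrow> mcomp C g f \<in> hom C U W) \<and>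
   (\<forall>U V f. f \<in> hom C U V \<longrightarrow> mcomp C (mid C V) f = f \<and> mcomp C f (mid C U) = f) \<and>
   (\<forall>U V W X f g h. f \<in> hom C U V \<longrightarrow> g \<in> hom C V W \<longrightarrow> h \<in> hom C W X \<longrightarrow>
        mcomp C h (mcomp C g f) = mcomp C (mcomp C h g) f) \<and>
   \<comment> \<open>strict monoidal structure\<close>
   (\<forall>U V W. otens C (otens C U V) W = otens C U (otens C V W)) \<and>
   (\<forall>V. otens C (unito C) V = V \<and> otens C V (unito C) = V) \<and>
   (\<forall>U V U' V' f g. f \<in> hom C U V \<longrightarrow> g \<in> hom C U' V' \<longrightarrow>
        mtens C f g \<in> hom C (otens C U U') (otens C V V')) \<and>
   (\<forall>f g h. mtens C (mtens C f g) h = mtens C f (mtens C g h)) \<and>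
   (\<forall>f. mtens C (mid C (unito C)) f = f \<and> mtens C f (mid C (unito C)) = f) \<and>
   (\<forall>U V. mtens C (mid C U) (mid C V) = mid C (otens C U V)) \<and>
   (\<forall>U V W U' V' W' f g f' g'. f \<in> hom C U V \<longrightarrow> g \<in> hom C V W \<longrightarrow>
        f' \<in> hom C U' V' \<longrightarrow> g' \<in> hom C V' W' \<longrightarrow>
        mtens C (mcomp C g f) (mcomp C g' f') = mcomp C (mtens C g g') (mtens C f f')) \<and>
   \<comment> \<open>Ab-category: Hom-sets are abelian groups\<close>
   (\<forall>V W. mzero C V W \<in> hom C V W) \<and>
   (\<forall>V W f g. f \<in> hom C V W \<longrightarrow> g \<in> hom C V W \<longrightarrow> madd C f g \<in> hom C V W) \<and>
   (\<forall>V W f. f \<in> hom C V W \<longrightarrow> mneg C f \<in> hom C V W) \<and>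
   (\<forall>V W f g h. f \<in> hom C V W \<longrightarrow> g \<in> hom C V W \<longrightarrow> h \<in> hom C V W \<longrightarrow>
        madd C (madd C f g) h = madd C f (madd C g h)) \<and>
   (\<forall>V W f g. f \<in> hom C V W \<longrightarrow> g \<in> hom C V W \<longrightarrow> madd C f g = madd C g f) \<and>
   (\<forall>V W f. f \<in> hom C V W \<longrightarrow> madd C (mzero C V W) f = f) \<and>
   (\<forall>V W f. f \<in> hom C V W \<longrightarrow> madd C (mneg C f) f = mzero C V W) \<and>
   \<comment> \<open>composition is biadditive\<close>
   (\<forall>U V W f g g'. f \<in> hom C U V \<longrightarrow> g \<in> hom C V W \<longrightarrow> g' \<in> hom C V W \<longrightarrow>
        mcomp C (madd C g g') f = madd C (mcomp C g f) (mcomp C g' f)) \<and>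
   (\<forall>U V W f f' g. f \<in> hom C U V \<longrightarrow> f' \<in> hom C U V \<longrightarrow> g \<in> hom C V W \<longrightarrow>
        mcomp C g (madd C f f') = madd C (mcomp C g f) (mcomp C g f')) \<and>
   \<comment> \<open>tensor product is biadditive\<close>
   (\<forall>U V U' V' f f' g. f \<in> hom C U V \<longrightarrow> f' \<in> hom C U V \<longrightarrow> g \<in> hom C U' V' \<longrightarrow>
        mtens C (madd C f f') g = madd C (mtens C f g) (mtens C f' g)) \<and>
   (\<forall>U V U' V' f g g'. f \<in> hom C U V \<longrightarrow> g \<in> hom C U' V' \<longrightarrow> g' \<in> hom C U' V' \<longrightarrow>
        mtens C f (madd C g g') = madd C (mtens C f g) (mtens C f g')) \<and>
   \<comment> \<open>the ground ring k = End(I) is a field\<close>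
   (\<forall>k\<in>hom C (unito C) (unito C). \<forall>k'\<in>hom C (unito C) (unito C). mcomp C k k' = mcomp C k' k) \<and>
   mid C (unito C) \<noteq> mzero C (unito C) (unito C) \<and>
   (\<forall>k\<in>hom C (unito C) (unito C). k \<noteq> mzero C (unito C) (unito C) \<longrightarrow>
        (\<exists>k'\<in>hom C (unito C) (unito C). mcomp C k' k = mid C (unito C))) \<and>
   \<comment> \<open>the tensor product is k-bilinear (k f = k \<boxtimes> f)\<close>
   (\<forall>k f g. k \<in> hom C (unito C) (unito C) \<longrightarrow> mtens C f (mtens C k g) = mtens C k (mtens C f g))"

definition msum :: "('o,'m) mcat \<Rightarrow> 'o \<Rightarrow> 'o \<Rightarrow> ('a \<Rightarrow> 'm) \<Rightarrow> 'a set \<Rightarrow> 'm" where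
  "msum C V W g S = Finite_Set.fold (\<lambda>a acc. madd C (g a) acc) (mzero C V W) S"

definition simple_obj :: "('o,'m) mcat \<Rightarrow> 'o \<Rightarrow> bool" where
  "simple_obj C V \<longleftrightarrow> mid C V \<noteq> mzero C V V \<and>
     (\<forall>f\<in>hom C V V. \<exists>c\<in>hom C (unito C) (unito C). f = mtens C c (mid C V))"

definition scal :: "('o,'m) mcat \<Rightarrow> 'o \<Rightarrow> 'm \<Rightarrow> 'm" where
  "scal C V f = (THE c. c \<in> hom C (unito C) (unito C) \<and> f = mtens C c (mid C V))"

definition psi_system :: "('o,'m) mcat \<Rightarrow> 'i set \<Rightarrow> ('i \<Rightarrow> 'o) \<Rightarrow> ('i \<Rightarrow> 'i)
     \<Rightarrow> ('i \<Rightarrow> 'm) \<Rightarrow> ('i \<Rightarrow> 'm) \<Rightarrow> bool" where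
  "psi_system C I V st b d \<longleftrightarrow>
   strict_monoidal_ab_cat C \<and>
   (\<forall>i\<in>I. simple_obj C (V i)) \<and>
   (\<forall>i\<in>I. \<forall>j\<in>I. i \<noteq> j \<longrightarrow> (\<forall>f\<in>hom C (V i) (V j). f = mzero C (V i) (V j))) \<and>
   (\<forall>i\<in>I. st i \<in> I \<and> st (st i) = i) \<and>
   (\<forall>i\<in>I. b i \<in> hom C (unito C) (otens C (V i) (V (st i))) \<and>
           d i \<in> hom C (otens C (V i) (V (st i))) (unito C)) \<and>
   (\<forall>i\<in>I. mcomp C (mtens C (mid C (V i)) (d (st i))) (mtens C (b i) (mid C (V i))) = mid C (V i) \<and>
           mcomp C (mtens C (d i) (mid C (V i))) (mtens C (mid C (V i)) (b (st i))) = mid C (V i)) \<and>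
   (\<forall>i\<in>I. \<forall>j\<in>I.
      (\<exists>k\<in>I. \<exists>f\<in>hom C (V k) (otens C (V i) (V j)). f \<noteq> mzero C (V k) (otens C (V i) (V j))) \<longrightarrow>
      (\<exists>ts. (\<forall>(k,x,y)\<in>set ts. k \<in> I \<and> x \<in> hom C (V k) (otens C (V i) (V j))
                                 \<and> y \<in> hom C (otens C (V i) (V j)) (V k)) \<and>
            foldr (\<lambda>(k,x,y) acc. madd C (mcomp C x y) acc) ts
                  (mzero C (otens C (V i) (V j)) (otens C (V i) (V j)))
              = mid C (otens C (V i) (V j))))"

text \<open>An element x of H = \<hat>H \<oplus> \<check>H is a pair: fst x i j k is the component in
H^k_{ij} = Hom(V_i \<boxtimes> V_j, V_k), snd x i j k the component in H^{ij}_k = Hom(V_k, V_i \<boxtimes> V_j);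
only finitely many components are nonzero (direct sum), components outside I are undefined.\<close>

type_synonym ('i,'m) hel = "('i \<Rightarrow> 'i \<Rightarrow> 'i \<Rightarrow> 'm) \<times> ('i \<Rightarrow> 'i \<Rightarrow> 'i \<Rightarrow> 'm)"

definition hz :: "('o,'m) mcat \<Rightarrow> ('i \<Rightarrow> 'o) \<Rightarrow> 'i \<Rightarrow> 'i \<Rightarrow> 'i \<Rightarrow> 'm" where
  "hz C V i j k = mzero C (otens C (V i) (V j)) (V k)"

definition cz :: "('o,'m) mcat \<Rightarrow> ('i \<Rightarrow> 'o) \<Rightarrow> 'i \<Rightarrow> 'i \<Rightarrow> 'i \<Rightarrow> 'm" where
  "cz C V i j k = mzero C (V k) (otens C (V i) (V j))"

definition hsupp :: "('o,'m) mcat \<Rightarrow> 'i set \<Rightarrow> ('i \<Rightarrow> 'o) \<Rightarrow> ('i,'m) hel \<Rightarrow> ('i \<times> 'i \<times> 'i) set" where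
  "hsupp C I V x = {(i,j,k). i \<in> I \<and> j \<in> I \<and> k \<in> I \<and>
       (fst x i j k \<noteq> hz C V i j k \<or> snd x i j k \<noteq> cz C V i j k)}"

definition Hsp :: "('o,'m) mcat \<Rightarrow> 'i set \<Rightarrow> ('i \<Rightarrow> 'o) \<Rightarrow> ('i,'m) hel set" where
  "Hsp C I V = {x.
     (\<forall>i j k. if i \<in> I \<and> j \<in> I \<and> k \<in> I
        then fst x i j k \<in> hom C (otens C (V i) (V j)) (V k) \<and> snd x i j k \<in> hom C (V k) (otens C (V i) (V j))
        else fst x i j k = undefined \<and> snd x i j k = undefined) \<and>
     finite (hsupp C I V x)}"

text \<open>The operator A, computed componentwise: the summand coming from \<pi>^k_{ij} x lies in
H^{i* k}_j, the one coming from \<pi>^{ij}_k x lies in H^j_{i* k}.\<close>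
definition opA :: "('o,'m) mcat \<Rightarrow> 'i set \<Rightarrow> ('i \<Rightarrow> 'o) \<Rightarrow> ('i \<Rightarrow> 'i) \<Rightarrow> ('i \<Rightarrow> 'm) \<Rightarrow> ('i \<Rightarrow> 'm)
     \<Rightarrow> ('i,'m) hel \<Rightarrow> ('i,'m) hel" where
  "opA C I V st b d x =
    ((\<lambda>a e c. if a \<in> I \<and> e \<in> I \<and> c \<in> I then
        mcomp C (mtens C (d a) (mid C (V c))) (mtens C (mid C (V a)) (snd x (st a) c e))
      else undefined),
     (\<lambda>a e c. if a \<in> I \<and> e \<in> I \<and> c \<in> I then
        mcomp C (mtens C (mid C (V a)) (fst x (st a) c e)) (mtens C (b a) (mid C (V c)))
      else undefined))"

text \<open>The operator B, computed componentwise: the summand coming from \<pi>^k_{ij} x lies in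
H^{k j*}_i, the one coming from \<pi>^{ij}_k x lies in H^i_{k j*}.\<close>
definition opB :: "('o,'m) mcat \<Rightarrow> 'i set \<Rightarrow> ('i \<Rightarrow> 'o) \<Rightarrow> ('i \<Rightarrow> 'i) \<Rightarrow> ('i \<Rightarrow> 'm) \<Rightarrow> ('i \<Rightarrow> 'm)
     \<Rightarrow> ('i,'m) hel \<Rightarrow> ('i,'m) hel" where
  "opB C I V st b d x =
    ((\<lambda>a e c. if a \<in> I \<and> e \<in> I \<and> c \<in> I then
        mcomp C (mtens C (mid C (V c)) (d (st e))) (mtens C (snd x c (st e) a) (mid C (V e)))
      else undefined),
     (\<lambda>a e c. if a \<in> I \<and> e \<in> I \<and> c \<in> I then
        mcomp C (mtens C (fst x c (st e) a) (mid C (V e))) (mtens C (mid C (V c)) (b (st e)))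
      else undefined))"

definition hform :: "('o,'m) mcat \<Rightarrow> 'i set \<Rightarrow> ('i \<Rightarrow> 'o) \<Rightarrow> ('i,'m) hel \<Rightarrow> ('i,'m) hel \<Rightarrow> 'm" where
  "hform C I V x y = msum C (unito C) (unito C)
     (\<lambda>(i,j,k). madd C (scal C (V k) (mcomp C (fst x i j k) (snd y i j k)))
                       (scal C (V k) (mcomp C (fst y i j k) (snd x i j k))))
     (hsupp C I V x \<union> hsupp C I V y)"

definition op_transpose :: "'h set \<Rightarrow> ('h \<Rightarrow> 'h \<Rightarrow> 'k) \<Rightarrow> ('h \<Rightarrow> 'h) \<Rightarrow> ('h \<Rightarrow> 'h)" where
  "op_transpose H fm f = (SOME g. (\<forall>y\<in>H. g y \<in> H) \<and> (\<forall>x\<in>H. \<forall>y\<in>H. fm (f x) y = fm x (g y)))"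

definition symmetric_op :: "'h set \<Rightarrow> ('h \<Rightarrow> 'h \<Rightarrow> 'k) \<Rightarrow> ('h \<Rightarrow> 'h) \<Rightarrow> bool" where
  "symmetric_op H fm f \<longleftrightarrow> (\<forall>x\<in>H. op_transpose H fm f x = f x)"

definition hat_part :: "('o,'m) mcat \<Rightarrow> 'i set \<Rightarrow> ('i \<Rightarrow> 'o) \<Rightarrow> 'i \<Rightarrow> 'i \<Rightarrow> 'i \<Rightarrow> ('i,'m) hel set" where
  "hat_part C I V i j k = {x \<in> Hsp C I V. \<forall>a\<in>I. \<forall>e\<in>I. \<forall>c\<in>I.
      snd x a e c = cz C V a e c \<and> ((a,e,c) \<noteq> (i,j,k) \<longrightarrow> fst x a e c = hz C V a e c)}"

definition check_part :: "('o,'m) mcat \<Rightarrow> 'i set \<Rightarrow> ('i \<Rightarrow> 'o) \<Rightarrow> 'i \<Rightarrow> 'i \<Rightarrow> 'i \<Rightarrow> ('i,'m) hel set" where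
  "check_part C I V i j k = {x \<in> Hsp C I V. \<forall>a\<in>I. \<forall>e\<in>I. \<forall>c\<in>I.
      fst x a e c = hz C V a e c \<and> ((a,e,c) \<noteq> (i,j,k) \<longrightarrow> snd x a e c = cz C V a e c)}"

definition grading_preserving :: "('o,'m) mcat \<Rightarrow> 'i set \<Rightarrow> ('i \<Rightarrow> 'o)
     \<Rightarrow> (('i,'m) hel \<Rightarrow> ('i,'m) hel) \<Rightarrow> bool" where
  "grading_preserving C I V f \<longleftrightarrow> (\<forall>i\<in>I. \<forall>j\<in>I. \<forall>k\<in>I.
      f ` check_part C I V i j k \<subseteq> check_part C I V i j k \<and>
      f ` hat_part C I V i j k \<subseteq> hat_part C I V i j k)"

end

theory Submission
  imports Defs
begin

text \<open>
  The operators \<open>A\<close> and \<open>B\<close> act on \<open>H = \<Oplus> H^k_{ij} \<oplus> \<Oplus> H^{ij}_k\<close> componentwise: each moves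
  one leg of a morphism across the tensor product with a coevaluation \<open>b\<close> or evaluation \<open>d\<close>,
  exchanging a summand \<open>H^k_{ij}\<close> with a summand \<open>H^{pi(ijk)}\<close> of the other kind.  The proof
  establishes three facts about them:
  (1) \<open>A\<^sup>2 = B\<^sup>2 = 1\<close> (zigzag identities);
  (2) the transpose of \<open>ABA\<close> is \<open>BAB\<close> (a partial-trace identity for simple objects);
  (3) the form on \<open>H\<close> is nondegenerate and \<open>A\<close>, \<open>B\<close> have transposes \<open>A\<^sup>*\<close>, \<open>B\<^sup>*\<close> which are
      again componentwise operators (duality of \<open>H^k_{ij}\<close> and \<open>H^{ij}_k\<close>, from condition (4)).
  All conclusions of the lemma except the grading are consequences of (1)-(3) alone; this is
  proved first, for an arbitrary pair of involutions with these properties (locale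
  \<open>involutive_pair\<close>).  Finally \<open>L\<close>, \<open>R\<close>, \<open>C\<close> preserve the grading because each is a
  composite of two swaps over the same involutive permutation of index triples.
\<close>

section \<open>Nondegenerate forms and pairs of involutions\<close>

text \<open>A symmetric pairing on a set \<open>H\<close> (no linearity is needed) which is nondegenerate: an element
  is determined by its pairings.  Transposes with respect to it are therefore unique.\<close>

locale nondegenerate_form =
  fixes H :: "'h set" and fm :: "'h \<Rightarrow> 'h \<Rightarrow> 'k"
  assumes fm_sym: "x \<in> H \<Longrightarrow> y \<in> H \<Longrightarrow> fm x y = fm y x"
    and fm_nondeg: "x \<in> H \<Longrightarrow> x' \<in> H \<Longrightarrow> (\<And>y. y \<in> H \<Longrightarrow> fm y x = fm y x') \<Longrightarrow> x = x'"
begin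

lemma transpose_eqI:
  assumes G_H: "\<And>y. y \<in> H \<Longrightarrow> G y \<in> H"
    and G_transp: "\<And>x y. x \<in> H \<Longrightarrow> y \<in> H \<Longrightarrow> fm (F x) y = fm x (G y)"
    and y: "y \<in> H"
  shows "op_transpose H fm F y = G y"
proof -
  let ?is_transp = "\<lambda>g. (\<forall>y\<in>H. g y \<in> H) \<and> (\<forall>x\<in>H. \<forall>y\<in>H. fm (F x) y = fm x (g y))"
  have "?is_transp G" using G_H G_transp by blast
  then have T: "?is_transp (op_transpose H fm F)"
    unfolding op_transpose_def by (rule someI[where P = ?is_transp])
  show ?thesis
    by (rule fm_nondeg) (use T y G_H G_transp in auto)
qed

lemma symmetric_opI:
  assumes "\<And>y. y \<in> H \<Longrightarrow> F y \<in> H" "\<And>x y. x \<in> H \<Longrightarrow> y \<in> H \<Longrightarrow> fm (F x) y = fm x (F y)"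
  shows "symmetric_op H fm F"
  unfolding symmetric_op_def using transpose_eqI[of F F] assms by blast

end

lemma inverse_pair_on:
  assumes "\<And>x. x \<in> H \<Longrightarrow> F x \<in> H" "\<And>x. x \<in> H \<Longrightarrow> G x \<in> H"
    and "\<And>x. x \<in> H \<Longrightarrow> G (F x) = x" "\<And>x. x \<in> H \<Longrightarrow> F (G x) = x"
  shows "bij_betw F H H" and "x \<in> H \<Longrightarrow> the_inv_into H F x = G x"
proof -
  show bij: "bij_betw F H H" by (rule bij_betw_byWitness[where f' = G]) (use assms in auto)
  show "x \<in> H \<Longrightarrow> the_inv_into H F x = G x"
    using the_inv_into_f_eq[OF bij_betw_imp_inj_on[OF bij]] assms by blast
qed

locale involutive_pair = nondegenerate_form H fm for H :: "'h set" and fm :: "'h \<Rightarrow> 'h \<Rightarrow> 'k" +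
  fixes A B At Bt :: "'h \<Rightarrow> 'h"
  assumes A_H: "x \<in> H \<Longrightarrow> A x \<in> H" and B_H: "x \<in> H \<Longrightarrow> B x \<in> H"
    and At_H: "x \<in> H \<Longrightarrow> At x \<in> H" and Bt_H: "x \<in> H \<Longrightarrow> Bt x \<in> H"
    and A_A: "x \<in> H \<Longrightarrow> A (A x) = x" and B_B: "x \<in> H \<Longrightarrow> B (B x) = x"
    and A_transp: "x \<in> H \<Longrightarrow> y \<in> H \<Longrightarrow> fm (A x) y = fm x (At y)"
    and B_transp: "x \<in> H \<Longrightarrow> y \<in> H \<Longrightarrow> fm (B x) y = fm x (Bt y)"
    and braid_transp: "x \<in> H \<Longrightarrow> y \<in> H \<Longrightarrow> fm (A (B (A x))) y = fm x (B (A (B y)))"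
begin

lemmas closed = A_H B_H At_H Bt_H

lemma At_At: assumes y: "y \<in> H" shows "At (At y) = y"
proof (rule fm_nondeg[OF At_H[OF At_H[OF y]] y])
  fix x assume x: "x \<in> H"
  have "fm x (At (At y)) = fm (A (A x)) y"
    using A_transp fm_sym closed x y by metis
  then show "fm x (At (At y)) = fm x y" using A_A[OF x] by simp
qed

lemma Bt_Bt: assumes y: "y \<in> H" shows "Bt (Bt y) = y"
proof (rule fm_nondeg[OF Bt_H[OF Bt_H[OF y]] y])
  fix x assume x: "x \<in> H"
  have "fm x (Bt (Bt y)) = fm (B (B x)) y"
    using B_transp fm_sym closed x y by metis
  then show "fm x (Bt (Bt y)) = fm x y" using B_B[OF x] by simp
qed

lemma At_Bt_At: assumes y: "y \<in> H" shows "At (Bt (At y)) = B (A (B y))"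
proof (rule fm_nondeg)
  fix x assume x: "x \<in> H"
  have "fm x (At (Bt (At y))) = fm (A (B (A x))) y"
    using A_transp B_transp closed x y by simp
  also have "\<dots> = fm x (B (A (B y)))" using braid_transp[OF x y] .
  finally show "fm x (At (Bt (At y))) = fm x (B (A (B y)))" .
qed (use y closed in simp_all)

lemma Bt_At_Bt: assumes y: "y \<in> H" shows "Bt (At (Bt y)) = A (B (A y))"
proof (rule fm_nondeg)
  fix x assume x: "x \<in> H"
  have "fm x (Bt (At (Bt y))) = fm (B (A (B x))) y"
    using A_transp B_transp closed x y by simp
  also have "\<dots> = fm (A (B (A y))) x" using braid_transp[OF y] fm_sym closed x y by metis
  finally show "fm x (Bt (At (Bt y))) = fm x (A (B (A y)))" using fm_sym closed x y by metis
qed (use y closed in simp_all)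

lemma transpose_A: "y \<in> H \<Longrightarrow> op_transpose H fm A y = At y"
  by (rule transpose_eqI[OF At_H A_transp])

lemma transpose_B: "y \<in> H \<Longrightarrow> op_transpose H fm B y = Bt y"
  by (rule transpose_eqI[OF Bt_H B_transp])

definition Lop :: "'h \<Rightarrow> 'h" where "Lop = op_transpose H fm A \<circ> A"
definition Rop :: "'h \<Rightarrow> 'h" where "Rop = op_transpose H fm B \<circ> B"
definition Cop :: "'h \<Rightarrow> 'h" where "Cop = A \<circ> B \<circ> A \<circ> B \<circ> A \<circ> B"

lemma Lop_eq: "x \<in> H \<Longrightarrow> Lop x = At (A x)"
  by (simp add: Lop_def transpose_A A_H)

lemma Rop_eq: "x \<in> H \<Longrightarrow> Rop x = Bt (B x)"
  by (simp add: Rop_def transpose_B B_H)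

lemma Cop_eq: "Cop x = A (B (A (B (A (B x)))))"
  by (simp add: Cop_def)

lemma bij_Lop: "bij_betw Lop H H"
  and inv_Lop: "x \<in> H \<Longrightarrow> the_inv_into H Lop x = A (At x)"
  using inverse_pair_on[where F = Lop and G = "\<lambda>x. A (At x)"] by (simp_all add: Lop_eq A_A At_At closed)

lemma bij_Rop: "bij_betw Rop H H"
  and inv_Rop: "x \<in> H \<Longrightarrow> the_inv_into H Rop x = B (Bt x)"
  using inverse_pair_on[where F = Rop and G = "\<lambda>x. B (Bt x)"] by (simp_all add: Rop_eq B_B Bt_Bt closed)

lemma bij_Cop: "bij_betw Cop H H"
  and inv_Cop: "x \<in> H \<Longrightarrow> the_inv_into H Cop x = B (A (B (A (B (A x)))))"
  using inverse_pair_on[where F = Cop and G = "\<lambda>x. B (A (B (A (B (A x)))))"] by (simp_all add: Cop_eq A_A B_B closed)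

text \<open>\<open>L\<close>, \<open>R\<close> and \<open>C\<close> are symmetric; for \<open>C\<close> this is where the braid relation enters.\<close>

lemma symmetric_Lop: "symmetric_op H fm Lop"
proof (rule symmetric_opI)
  fix x y assume x: "x \<in> H" and y: "y \<in> H"
  have "fm (Lop x) y = fm y (At (A x))" using fm_sym closed x y by (simp add: Lop_eq)
  also have "\<dots> = fm (A x) (A y)" using A_transp fm_sym closed x y by metis
  also have "\<dots> = fm x (Lop y)" using A_transp closed x y by (simp add: Lop_eq)
  finally show "fm (Lop x) y = fm x (Lop y)" .
qed (simp add: Lop_eq closed)

lemma symmetric_Rop: "symmetric_op H fm Rop"
proof (rule symmetric_opI)
  fix x y assume x: "x \<in> H" and y: "y \<in> H"
  have "fm (Rop x) y = fm y (Bt (B x))" using fm_sym closed x y by (simp add: Rop_eq)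
  also have "\<dots> = fm (B x) (B y)" using B_transp fm_sym closed x y by metis
  also have "\<dots> = fm x (Rop y)" using B_transp closed x y by (simp add: Rop_eq)
  finally show "fm (Rop x) y = fm x (Rop y)" .
qed (simp add: Rop_eq closed)

lemma symmetric_Cop: "symmetric_op H fm Cop"
proof (rule symmetric_opI)
  fix x y assume x: "x \<in> H" and y: "y \<in> H"
  have "fm (Cop x) y = fm x (Bt (At (Bt (At (Bt (At y))))))"
    using A_transp B_transp closed x y by (simp add: Cop_eq)
  also have "Bt (At (Bt (At (Bt (At y))))) = Cop y"
    using Bt_At_Bt At_Bt_At closed y by (simp add: Cop_eq)
  finally show "fm (Cop x) y = fm x (Cop y)" .
qed (simp add: Cop_eq closed)

lemma A_Cop_A: "x \<in> H \<Longrightarrow> A (Cop (A x)) = the_inv_into H Cop x"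
  by (simp add: inv_Cop Cop_eq A_A closed)

lemma B_Cop_B: "x \<in> H \<Longrightarrow> B (Cop (B x)) = the_inv_into H Cop x"
  by (simp add: inv_Cop Cop_eq B_B closed)

lemma Lop_conj_Cop: assumes x: "x \<in> H" shows "Lop (Cop (the_inv_into H Lop x)) = Cop x"
proof -
  have "Lop (Cop (the_inv_into H Lop x)) = At (B (A (B (A (B (A (At x)))))))"
    using x by (simp add: inv_Lop Lop_eq Cop_eq A_A closed)
  also have "\<dots> = Bt (At (Bt (At (Bt (At x)))))"
    using x by (simp add: At_Bt_At[symmetric] Bt_At_Bt[symmetric] At_At closed)
  also have "\<dots> = Cop x"
    using x by (simp add: At_Bt_At Bt_At_Bt Cop_eq closed)
  finally show ?thesis .
qed

lemma Rop_conj_Cop: assumes x: "x \<in> H" shows "Rop (Cop (the_inv_into H Rop x)) = Cop x"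
proof -
  have "Rop (Cop (the_inv_into H Rop x)) = Bt (B (A (B (A (B (A (Bt x)))))))"
    using x by (simp add: inv_Rop Rop_eq Cop_eq B_B closed)
  also have "\<dots> = Bt (At (Bt (At (Bt (At x)))))"
    using x by (simp add: At_Bt_At[symmetric] Bt_At_Bt[symmetric] Bt_Bt closed)
  also have "\<dots> = Cop x"
    using x by (simp add: At_Bt_At Bt_At_Bt Cop_eq closed)
  finally show ?thesis .
qed

lemma A_Lop_A: "x \<in> H \<Longrightarrow> A (Lop (A x)) = the_inv_into H Lop x"
  by (simp add: inv_Lop Lop_eq A_A closed)

lemma B_Rop_B: "x \<in> H \<Longrightarrow> B (Rop (B x)) = the_inv_into H Rop x"
  by (simp add: inv_Rop Rop_eq B_B closed)

lemma A_Rop_A: assumes x: "x \<in> H"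
  shows "A (Rop (A x)) = the_inv_into H Lop (Rop (the_inv_into H Cop x))"
proof -
  have "the_inv_into H Lop (Rop (the_inv_into H Cop x)) = A (At (Bt (A (B (A (B (A x)))))))"
    using x by (simp add: inv_Lop inv_Cop Rop_eq B_B closed)
  also have "A (B (A (B (A x)))) = Bt (At (Bt (B (A x))))"
    using x by (simp add: Bt_At_Bt closed)
  also have "A (At (Bt (Bt (At (Bt (B (A x))))))) = A (Bt (B (A x)))"
    using x by (simp add: Bt_Bt At_At closed)
  finally show ?thesis using x by (simp add: Rop_eq closed)
qed

lemma B_Lop_B: assumes x: "x \<in> H"
  shows "B (Lop (B x)) = the_inv_into H Rop (Lop (Cop x))"
proof -
  have "the_inv_into H Rop (Lop (Cop x)) = B (Bt (At (B (A (B (A (B x)))))))"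
    using x by (simp add: inv_Rop Lop_eq Cop_eq A_A closed)
  also have "B (A (B (A (B x)))) = At (Bt (At (A (B x))))"
    using x by (simp add: At_Bt_At closed)
  also have "B (Bt (At (At (Bt (At (A (B x))))))) = B (At (A (B x)))"
    using x by (simp add: Bt_Bt At_At closed)
  finally show ?thesis using x by (simp add: Lop_eq closed)
qed

end

section \<open>Strict monoidal Ab-categories\<close>

locale smcat =
  fixes C :: "('o,'m) mcat"
  assumes smc: "strict_monoidal_ab_cat C"
begin

abbreviation dm where "dm \<equiv> mdom C"
abbreviation cd where "cd \<equiv> mcod C"
abbreviation idm where "idm \<equiv> mid C"
abbreviation cp where "cp \<equiv> mcomp C"
abbreviation tn where "tn \<equiv> mtens C"
abbreviation ot where "ot \<equiv> otens C"
abbreviation un where "un \<equiv> unito C"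
abbreviation zr where "zr \<equiv> mzero C"
abbreviation ad where "ad \<equiv> madd C"
abbreviation ng where "ng \<equiv> mneg C"

lemma hom_iff: "f \<in> hom C V W \<longleftrightarrow> dm f = V \<and> cd f = W"
  by (simp add: hom_def)

lemma in_hom_self: "f \<in> hom C (dm f) (cd f)" by (simp add: hom_def)

lemmas ax = smc[unfolded strict_monoidal_ab_cat_def]

lemma ax_id_hom: "(\<forall>V. mid C V \<in> hom C V V)"
  using ax by (elim conjE) assumption

lemma ax_comp_hom: "(\<forall>U V W f g. f \<in> hom C U V \<longrightarrow> g \<in> hom C V W \<longrightarrow> mcomp C g f \<in> hom C U W)"
  using ax by (elim conjE) assumption

lemma ax_comp_id: "(\<forall>U V f. f \<in> hom C U V \<longrightarrow> mcomp C (mid C V) f = f \<and> mcomp C f (mid C U) = f)"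
  using ax by (elim conjE) assumption

lemma ax_comp_assoc: "(\<forall>U V W X f g h. f \<in> hom C U V \<longrightarrow> g \<in> hom C V W \<longrightarrow> h \<in> hom C W X \<longrightarrow>
        mcomp C h (mcomp C g f) = mcomp C (mcomp C h g) f)"
  using ax by (elim conjE) assumption

lemma ax_otens_assoc: "(\<forall>U V W. otens C (otens C U V) W = otens C U (otens C V W))"
  using ax by (elim conjE) assumption

lemma ax_otens_unit: "(\<forall>V. otens C (unito C) V = V \<and> otens C V (unito C) = V)"
  using ax by (elim conjE) assumption

lemma ax_tens_hom: "(\<forall>U V U' V' f g. f \<in> hom C U V \<longrightarrow> g \<in> hom C U' V' \<longrightarrow>
        mtens C f g \<in> hom C (otens C U U') (otens C V V'))"
  using ax by (elim conjE) assumption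

lemma ax_tens_assoc: "(\<forall>f g h. mtens C (mtens C f g) h = mtens C f (mtens C g h))"
  using ax by (elim conjE) assumption

lemma ax_tens_unit: "(\<forall>f. mtens C (mid C (unito C)) f = f \<and> mtens C f (mid C (unito C)) = f)"
  using ax by (elim conjE) assumption

lemma ax_tens_id: "(\<forall>U V. mtens C (mid C U) (mid C V) = mid C (otens C U V))"
  using ax by (elim conjE) assumption

lemma ax_interchange: "(\<forall>U V W U' V' W' f g f' g'. f \<in> hom C U V \<longrightarrow> g \<in> hom C V W \<longrightarrow>
        f' \<in> hom C U' V' \<longrightarrow> g' \<in> hom C V' W' \<longrightarrow>
        mtens C (mcomp C g f) (mcomp C g' f') = mcomp C (mtens C g g') (mtens C f f'))"
  using ax by (elim conjE) assumption

lemma ax_zero_hom: "(\<forall>V W. mzero C V W \<in> hom C V W)"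
  using ax by (elim conjE) assumption

lemma ax_add_hom: "(\<forall>V W f g. f \<in> hom C V W \<longrightarrow> g \<in> hom C V W \<longrightarrow> madd C f g \<in> hom C V W)"
  using ax by (elim conjE) assumption

lemma ax_neg_hom: "(\<forall>V W f. f \<in> hom C V W \<longrightarrow> mneg C f \<in> hom C V W)"
  using ax by (elim conjE) assumption

lemma ax_add_assoc: "(\<forall>V W f g h. f \<in> hom C V W \<longrightarrow> g \<in> hom C V W \<longrightarrow> h \<in> hom C V W \<longrightarrow>
        madd C (madd C f g) h = madd C f (madd C g h))"
  using ax by (elim conjE) assumption

lemma ax_add_comm: "(\<forall>V W f g. f \<in> hom C V W \<longrightarrow> g \<in> hom C V W \<longrightarrow> madd C f g = madd C g f)"
  using ax by (elim conjE) assumption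

lemma ax_add_zero: "(\<forall>V W f. f \<in> hom C V W \<longrightarrow> madd C (mzero C V W) f = f)"
  using ax by (elim conjE) assumption

lemma ax_add_neg: "(\<forall>V W f. f \<in> hom C V W \<longrightarrow> madd C (mneg C f) f = mzero C V W)"
  using ax by (elim conjE) assumption

lemma ax_comp_add_l: "(\<forall>U V W f g g'. f \<in> hom C U V \<longrightarrow> g \<in> hom C V W \<longrightarrow> g' \<in> hom C V W \<longrightarrow>
        mcomp C (madd C g g') f = madd C (mcomp C g f) (mcomp C g' f))"
  using ax by (elim conjE) assumption

lemma ax_comp_add_r: "(\<forall>U V W f f' g. f \<in> hom C U V \<longrightarrow> f' \<in> hom C U V \<longrightarrow> g \<in> hom C V W \<longrightarrow>
        mcomp C g (madd C f f') = madd C (mcomp C g f) (mcomp C g f'))"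
  using ax by (elim conjE) assumption

lemma ax_tens_add_l: "(\<forall>U V U' V' f f' g. f \<in> hom C U V \<longrightarrow> f' \<in> hom C U V \<longrightarrow> g \<in> hom C U' V' \<longrightarrow>
        mtens C (madd C f f') g = madd C (mtens C f g) (mtens C f' g))"
  using ax by (elim conjE) assumption

lemma ax_tens_add_r: "(\<forall>U V U' V' f g g'. f \<in> hom C U V \<longrightarrow> g \<in> hom C U' V' \<longrightarrow> g' \<in> hom C U' V' \<longrightarrow>
        mtens C f (madd C g g') = madd C (mtens C f g) (mtens C f g'))"
  using ax by (elim conjE) assumption

lemma ax_scalar_comm: "(\<forall>k\<in>hom C (unito C) (unito C). \<forall>k'\<in>hom C (unito C) (unito C). mcomp C k k' = mcomp C k' k)"
  using ax by (elim conjE) assumption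

lemma ax_scalar_inverse: "(\<forall>k\<in>hom C (unito C) (unito C). k \<noteq> mzero C (unito C) (unito C) \<longrightarrow>
        (\<exists>k'\<in>hom C (unito C) (unito C). mcomp C k' k = mid C (unito C)))"
  using ax by (elim conjE) assumption

lemma ax_scalar_tens: "(\<forall>k f g. k \<in> hom C (unito C) (unito C) \<longrightarrow> mtens C f (mtens C k g) = mtens C k (mtens C f g))"
  using ax by (elim conjE) assumption

lemma id_dm[simp]: "dm (idm V) = V" and id_cd[simp]: "cd (idm V) = V"
  using ax_id_hom by (auto simp: hom_def)

lemma cp_dm[simp]: "cd f = dm g \<Longrightarrow> dm (cp g f) = dm f"
  and cp_cd[simp]: "cd f = dm g \<Longrightarrow> cd (cp g f) = cd g"
proof -
  assume "cd f = dm g"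
  then have "cp g f \<in> hom C (dm f) (cd g)" using ax_comp_hom
    by (auto simp: hom_def)
  then show "dm (cp g f) = dm f" "cd (cp g f) = cd g" by (auto simp: hom_def)
qed

lemma cp_id_l[simp]: "cd f = V \<Longrightarrow> cp (idm V) f = f"
  using ax_comp_id by (auto simp: hom_def)
lemma cp_id_r[simp]: "dm f = V \<Longrightarrow> cp f (idm V) = f"
  using ax_comp_id by (auto simp: hom_def)

lemma cp_assoc: "cd f = dm g \<Longrightarrow> cd g = dm h \<Longrightarrow> cp h (cp g f) = cp (cp h g) f"
  using ax_comp_assoc by (auto simp: hom_def)

lemma ot_assoc[simp]: "ot (ot U V) W = ot U (ot V W)"
  using ax_otens_assoc by auto
lemma ot_un[simp]: "ot un V = V" "ot V un = V"
  using ax_otens_unit by auto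

lemma tn_dm[simp]: "dm (tn f g) = ot (dm f) (dm g)"
  and tn_cd[simp]: "cd (tn f g) = ot (cd f) (cd g)"
proof -
  have "tn f g \<in> hom C (ot (dm f) (dm g)) (ot (cd f) (cd g))"
    using ax_tens_hom in_hom_self[of f] in_hom_self[of g] by blast
  then show "dm (tn f g) = ot (dm f) (dm g)" "cd (tn f g) = ot (cd f) (cd g)" by (auto simp: hom_def)
qed

lemma tn_assoc[simp]: "tn (tn f g) h = tn f (tn g h)" using ax_tens_assoc by auto
lemma tn_un[simp]: "tn (idm un) f = f" "tn f (idm un) = f" using ax_tens_unit by auto
lemma tn_id[simp]: "tn (idm U) (idm V) = idm (ot U V)" using ax_tens_id by auto

lemma interchange: "cd f = dm g \<Longrightarrow> cd f' = dm g' \<Longrightarrow>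
   tn (cp g f) (cp g' f') = cp (tn g g') (tn f f')"
  using ax_interchange by (auto simp: hom_def)

lemma zr_dm[simp]: "dm (zr V W) = V" and zr_cd[simp]: "cd (zr V W) = W"
  using ax_zero_hom by (auto simp: hom_def)

lemma ad_dm[simp]: "dm f = dm g \<Longrightarrow> cd f = cd g \<Longrightarrow> dm (ad f g) = dm f"
  and ad_cd[simp]: "dm f = dm g \<Longrightarrow> cd f = cd g \<Longrightarrow> cd (ad f g) = cd f"
proof -
  assume "dm f = dm g" "cd f = cd g"
  then have "ad f g \<in> hom C (dm f) (cd f)" using ax_add_hom in_hom_self[of f] in_hom_self[of g]
    by (metis hom_iff)
  then show "dm (ad f g) = dm f" "cd (ad f g) = cd f" by (auto simp: hom_def)
qed

lemma ng_dm[simp]: "dm (ng f) = dm f" and ng_cd[simp]: "cd (ng f) = cd f"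
proof -
  have "ng f \<in> hom C (dm f) (cd f)" using ax_neg_hom in_hom_self[of f] by blast
  then show "dm (ng f) = dm f" "cd (ng f) = cd f" by (auto simp: hom_def)
qed

lemma ad_assoc: "dm f = dm g \<Longrightarrow> cd f = cd g \<Longrightarrow> dm h = dm g \<Longrightarrow> cd h = cd g \<Longrightarrow>
   ad (ad f g) h = ad f (ad g h)"
  using ax_add_assoc by (auto simp: hom_def)
lemma ad_comm: "dm f = dm g \<Longrightarrow> cd f = cd g \<Longrightarrow> ad f g = ad g f"
  using ax_add_comm by (auto simp: hom_def)
lemma ad_zl[simp]: "ad (zr (dm f) (cd f)) f = f"
  using ax_add_zero by (auto simp: hom_def)
lemma ad_zl'[simp]: "dm f = V \<Longrightarrow> cd f = W \<Longrightarrow> ad (zr V W) f = f"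
  using ad_zl by auto
lemma ad_zr'[simp]: "dm f = V \<Longrightarrow> cd f = W \<Longrightarrow> ad f (zr V W) = f"
  using ad_zl ad_comm by (metis zr_cd zr_dm)
lemma ad_ng: "ad (ng f) f = zr (dm f) (cd f)"
  using ax_add_neg by (auto simp: hom_def)

lemma cp_ad_l: "cd f = dm g \<Longrightarrow> dm g' = dm g \<Longrightarrow> cd g' = cd g \<Longrightarrow>
   cp (ad g g') f = ad (cp g f) (cp g' f)"
  using ax_comp_add_l by (auto simp: hom_def)
lemma cp_ad_r: "cd f = dm g \<Longrightarrow> dm f' = dm f \<Longrightarrow> cd f' = cd f \<Longrightarrow>
   cp g (ad f f') = ad (cp g f) (cp g f')"
  using ax_comp_add_r by (auto simp: hom_def)
lemma tn_ad_l: "dm f' = dm f \<Longrightarrow> cd f' = cd f \<Longrightarrow> tn (ad f f') g = ad (tn f g) (tn f' g)"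
  using ax_tens_add_l in_hom_self[of g] by (auto simp: hom_def)
lemma tn_ad_r: "dm g' = dm g \<Longrightarrow> cd g' = cd g \<Longrightarrow> tn f (ad g g') = ad (tn f g) (tn f g')"
  using ax_tens_add_r in_hom_self[of f] by (auto simp: hom_def)

lemma ad_cancel: assumes "dm f = dm g" "cd f = cd g" "dm h = dm g" "cd h = cd g" "ad f h = ad g h"
  shows "f = g"
proof -
  have z: "ad h (ng h) = zr (dm g) (cd g)" using assms ad_ng ad_comm[of h "ng h"] by simp
  have "f = ad f (ad h (ng h))" using assms z by simp
  also have "\<dots> = ad (ad f h) (ng h)" using assms(1-4) by (simp add: ad_assoc)
  also have "\<dots> = ad (ad g h) (ng h)" using assms by simp
  also have "\<dots> = ad g (ad h (ng h))" using assms(1-4) by (simp add: ad_assoc)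
  also have "\<dots> = g" using z by simp
  finally show ?thesis .
qed

lemma ad_self_zero: assumes "ad f f = f" shows "f = zr (dm f) (cd f)"
  using ad_cancel[of f "zr (dm f) (cd f)" f] assms by simp

lemma cp_zr_r[simp]: "dm f = U \<Longrightarrow> cp f (zr V U) = zr V (cd f)"
proof -
  assume a: "dm f = U"
  have "cp f (zr V U) = cp f (ad (zr V U) (zr V U))" by simp
  also have "\<dots> = ad (cp f (zr V U)) (cp f (zr V U))" by (rule cp_ad_r) (simp_all add: a)
  finally show ?thesis using ad_self_zero[of "cp f (zr V U)"] a by simp
qed
lemma cp_zr_l[simp]: "cd f = U \<Longrightarrow> cp (zr U W) f = zr (dm f) W"
proof -
  assume a: "cd f = U"
  have "cp (zr U W) f = cp (ad (zr U W) (zr U W)) f" by simp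
  also have "\<dots> = ad (cp (zr U W) f) (cp (zr U W) f)" by (rule cp_ad_l) (simp_all add: a)
  finally show ?thesis using ad_self_zero[of "cp (zr U W) f"] a by simp
qed
lemma tn_zr_l[simp]: "tn (zr U W) g = zr (ot U (dm g)) (ot W (cd g))"
proof -
  have "tn (zr U W) g = tn (ad (zr U W) (zr U W)) g" by simp
  also have "\<dots> = ad (tn (zr U W) g) (tn (zr U W) g)" by (rule tn_ad_l) simp_all
  finally show ?thesis using ad_self_zero[of "tn (zr U W) g"] by simp
qed
lemma tn_zr_r[simp]: "tn f (zr U W) = zr (ot (dm f) U) (ot (cd f) W)"
proof -
  have "tn f (zr U W) = tn f (ad (zr U W) (zr U W))" by simp
  also have "\<dots> = ad (tn f (zr U W)) (tn f (zr U W))" by (rule tn_ad_r) simp_all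
  finally show ?thesis using ad_self_zero[of "tn f (zr U W)"] by simp
qed

definition is_scalar :: "'m \<Rightarrow> bool" where "is_scalar c \<longleftrightarrow> dm c = un \<and> cd c = un"

lemma scalar_dm[simp]: "is_scalar c \<Longrightarrow> dm c = un" and scalar_cd[simp]: "is_scalar c \<Longrightarrow> cd c = un"
  by (auto simp: is_scalar_def)

lemma scalar_id[simp]: "is_scalar (idm un)" and scalar_zr[simp]: "is_scalar (zr un un)"
  unfolding is_scalar_def by auto

lemma scalar_ad[simp]: "is_scalar c \<Longrightarrow> is_scalar c' \<Longrightarrow> is_scalar (ad c c')" unfolding is_scalar_def by simp
lemma scalar_ng[simp]: "is_scalar c \<Longrightarrow> is_scalar (ng c)" unfolding is_scalar_def by simp
lemma scalar_cp[simp]: "is_scalar c \<Longrightarrow> is_scalar c' \<Longrightarrow> is_scalar (cp c c')" unfolding is_scalar_def by simp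

lemma tn_scalar_scalar: assumes "is_scalar c" "is_scalar c'" shows "tn c c' = cp c c'"
proof -
  have "tn c c' = tn (cp c (idm un)) (cp (idm un) c')" using assms by simp
  also have "\<dots> = cp (tn c (idm un)) (tn (idm un) c')"
    by (rule interchange) (use assms in simp_all)
  finally show ?thesis by simp
qed

lemma tn_cp_scalar: assumes "is_scalar c" "is_scalar c'" shows "tn (cp c c') f = tn c (tn c' f)"
  by (simp add: tn_scalar_scalar[OF assms, symmetric])

lemma scalar_comm: assumes "is_scalar c" "is_scalar c'" shows "cp c c' = cp c' c"
  using ax_scalar_comm assms unfolding hom_def is_scalar_def by auto

lemma cp_scalar_l: assumes "is_scalar c" "cd f = dm g" shows "cp (tn c g) f = tn c (cp g f)"
proof -
  have "tn c (cp g f) = tn (cp c (idm un)) (cp g f)" using assms by simp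
  also have "\<dots> = cp (tn c g) (tn (idm un) f)"
    by (rule interchange) (use assms in simp_all)
  finally show ?thesis by simp
qed

lemma cp_scalar_r: assumes "is_scalar c" "cd f = dm g" shows "cp g (tn c f) = tn c (cp g f)"
proof -
  have "tn c (cp g f) = tn (cp (idm un) c) (cp g f)" using assms by simp
  also have "\<dots> = cp (tn (idm un) g) (tn c f)"
    by (rule interchange) (use assms in simp_all)
  finally show ?thesis by simp
qed

lemma tn_scalar_r: assumes "is_scalar c" shows "tn f (tn c g) = tn c (tn f g)"
  using ax_scalar_tens assms unfolding hom_def is_scalar_def by auto

lemma scalar_inv: assumes "is_scalar c" "c \<noteq> zr un un" obtains c' where "is_scalar c'" "cp c' c = idm un"
  using ax_scalar_inverse assms unfolding hom_def is_scalar_def by auto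

lemma tn_scalar_cancel: assumes "is_scalar c" "is_scalar c'" "tn c (idm V) = tn c' (idm V)" "idm V \<noteq> zr V V"
  shows "c = c'"
proof (rule ccontr)
  assume ne: "c \<noteq> c'"
  define e where "e = ad c (ng c')"
  have se: "is_scalar e" using assms by (simp add: e_def)
  have enz: "e \<noteq> zr un un"
  proof
    assume "e = zr un un"
    then have "ad c (ng c') = ad c' (ng c')"
      using assms ad_ng[of c'] ad_comm[of "ng c'" c'] by (simp add: e_def)
    then have "ad (ng c') c = ad (ng c') c'" using assms ad_comm by simp
    then show False using ne ad_cancel[of c c' "ng c'"] assms ad_comm by simp
  qed
  have "tn e (idm V) = ad (tn c (idm V)) (tn (ng c') (idm V))"
    unfolding e_def by (rule tn_ad_l) (use assms in simp_all)
  also have "\<dots> = ad (tn c' (idm V)) (tn (ng c') (idm V))" using assms by simp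
  also have "\<dots> = tn (ad c' (ng c')) (idm V)"
    by (rule tn_ad_l[symmetric]) (use assms in simp_all)
  also have "ad c' (ng c') = zr un un" using assms ad_ng[of c'] ad_comm[of "ng c'" c'] by simp
  finally have z: "tn e (idm V) = zr V V" by simp
  obtain e' where e': "is_scalar e'" "cp e' e = idm un" using scalar_inv[OF se enz] by blast
  have "idm V = tn (cp e' e) (idm V)" using e' by simp
  also have "\<dots> = tn e' (tn e (idm V))" by (rule tn_cp_scalar[OF e'(1) se])
  also have "\<dots> = zr V V" using z e' by simp
  finally show False using assms(4) by simp
qed

lemma simple_id_nz: "simple_obj C V \<Longrightarrow> idm V \<noteq> zr V V"
  by (simp add: simple_obj_def)

lemma simple_endo: assumes "simple_obj C V" "dm f = V" "cd f = V"
  obtains c where "is_scalar c" "f = tn c (idm V)"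
  using assms unfolding simple_obj_def hom_def is_scalar_def by auto

lemma scal_prop: assumes "simple_obj C V" "dm f = V" "cd f = V"
  shows "is_scalar (scal C V f)" "f = tn (scal C V f) (idm V)"
proof -
  obtain c where c: "is_scalar c" "f = tn c (idm V)" using simple_endo assms by blast
  have "(THE c. c \<in> hom C un un \<and> f = tn c (idm V)) = c"
  proof (rule the_equality)
    show "c \<in> hom C un un \<and> f = tn c (idm V)" using c by (simp add: hom_def)
    show "c' = c" if "c' \<in> hom C un un \<and> f = tn c' (idm V)" for c'
      using that c tn_scalar_cancel simple_id_nz[OF assms(1)] unfolding hom_def is_scalar_def by auto
  qed
  then have "scal C V f = c" by (simp add: scal_def)
  then show "is_scalar (scal C V f)" "f = tn (scal C V f) (idm V)" using c by auto
qed

lemma scal_scalar: "simple_obj C V \<Longrightarrow> dm f = V \<Longrightarrow> cd f = V \<Longrightarrow> is_scalar (scal C V f)"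
  using scal_prop by blast

lemma scal_tn_id: assumes "simple_obj C V" "is_scalar c" shows "scal C V (tn c (idm V)) = c"
proof -
  have "tn c (idm V) = tn (scal C V (tn c (idm V))) (idm V)"
    by (rule scal_prop(2)) (use assms in simp_all)
  then show ?thesis
    using tn_scalar_cancel[of c "scal C V (tn c (idm V))" V] scal_scalar[of V "tn c (idm V)"] assms simple_id_nz
    by simp
qed

lemma scal_zr: "simple_obj C V \<Longrightarrow> scal C V (zr V V) = zr un un"
  using scal_tn_id[of V "zr un un"] by simp

lemma scal_ad: assumes "simple_obj C V" "dm f = V" "cd f = V" "dm g = V" "cd g = V"
  shows "scal C V (ad f g) = ad (scal C V f) (scal C V g)"
proof -
  let ?a = "scal C V f" and ?b = "scal C V g"
  have "ad f g = ad (tn ?a (idm V)) (tn ?b (idm V))" using scal_prop assms by metis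
  also have "\<dots> = tn (ad ?a ?b) (idm V)"
    by (rule tn_ad_l[symmetric]) (use scal_scalar assms in simp_all)
  finally show ?thesis using scal_tn_id scal_scalar assms by simp
qed

lemma scal_tn: assumes "simple_obj C V" "dm f = V" "cd f = V" "is_scalar c"
  shows "scal C V (tn c f) = cp c (scal C V f)"
proof -
  let ?a = "scal C V f"
  have "tn c f = tn c (tn ?a (idm V))" using scal_prop assms by metis
  also have "\<dots> = tn (cp c ?a) (idm V)" using scal_scalar assms tn_cp_scalar by simp
  finally show ?thesis using scal_tn_id scal_scalar assms by simp
qed

definition typed :: "'o \<Rightarrow> 'o \<Rightarrow> 'm \<Rightarrow> bool" where
  "typed U U' f \<longleftrightarrow> dm f = U \<and> cd f = U'"

definition msum_step :: "'o \<Rightarrow> 'o \<Rightarrow> ('a \<Rightarrow> 'm) \<Rightarrow> 'a \<Rightarrow> 'm \<Rightarrow> 'm" where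
  "msum_step U U' g a acc = ad (if typed U U' (g a) then g a else zr U U') (if typed U U' acc then acc else zr U U')"

lemma msum_step_typed: "typed U U' (msum_step U U' g a acc)"
  unfolding msum_step_def typed_def by auto

lemma msum_step_comm: "comp_fun_commute (msum_step U U' g)"
proof
  fix x y
  show "msum_step U U' g y \<circ> msum_step U U' g x = msum_step U U' g x \<circ> msum_step U U' g y"
  proof
    fix z
    let ?gx = "if typed U U' (g x) then g x else zr U U'"
    let ?gy = "if typed U U' (g y) then g y else zr U U'"
    let ?z = "if typed U U' z then z else zr U U'"
    have t: "typed U U' ?gx" "typed U U' ?gy" "typed U U' ?z" unfolding typed_def by auto
    have "(msum_step U U' g y \<circ> msum_step U U' g x) z = ad ?gy (ad ?gx ?z)"
      using msum_step_typed[of U U' g x z] by (simp add: msum_step_def)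
    also have "\<dots> = ad (ad ?gy ?gx) ?z" using t unfolding typed_def by (simp add: ad_assoc)
    also have "ad ?gy ?gx = ad ?gx ?gy" using t unfolding typed_def by (simp add: ad_comm)
    also have "ad (ad ?gx ?gy) ?z = ad ?gx (ad ?gy ?z)" using t unfolding typed_def by (simp add: ad_assoc)
    also have "\<dots> = (msum_step U U' g x \<circ> msum_step U U' g y) z"
      using msum_step_typed[of U U' g y z] by (simp add: msum_step_def)
    finally show "(msum_step U U' g y \<circ> msum_step U U' g x) z = (msum_step U U' g x \<circ> msum_step U U' g y) z" .
  qed
qed

lemma msum_alt: assumes "\<forall>a\<in>S. typed U U' (g a)"
  shows "msum C U U' g S = Finite_Set.fold (msum_step U U' g) (zr U U') S"
  unfolding msum_def
  by (rule fold_closed_eq[where B="{b. typed U U' b}"]) (use assms in \<open>auto simp: msum_step_def typed_def\<close>)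

lemma msum_empty[simp]: "msum C U U' g {} = zr U U'"
  by (simp add: msum_def)

lemma msum_typed: assumes "finite S" "\<forall>a\<in>S. typed U U' (g a)"
  shows "typed U U' (msum C U U' g S)"
proof (cases "S = {}")
  case True then show ?thesis by (simp add: typed_def)
next
  case False
  then obtain x S' where S: "S = insert x S'" "x \<notin> S'" by (metis Set.set_insert all_not_in_conv)
  have "msum C U U' g S = msum_step U U' g x (Finite_Set.fold (msum_step U U' g) (zr U U') S')"
    using msum_alt[OF assms(2)] comp_fun_commute_on.fold_insert[OF msum_step_comm[unfolded comp_fun_commute_def']] S assms(1) by simp
  then show ?thesis using msum_step_typed by simp
qed

lemma msum_insert: assumes "finite S" "x \<notin> S" "\<forall>a\<in>insert x S. typed U U' (g a)"
  shows "msum C U U' g (insert x S) = ad (g x) (msum C U U' g S)"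
proof -
  have "msum C U U' g (insert x S) = msum_step U U' g x (Finite_Set.fold (msum_step U U' g) (zr U U') S)"
    using msum_alt[OF assms(3)] comp_fun_commute_on.fold_insert[OF msum_step_comm[unfolded comp_fun_commute_def']] assms by simp
  also have "Finite_Set.fold (msum_step U U' g) (zr U U') S = msum C U U' g S"
    using msum_alt[of S U U' g] assms by simp
  finally show ?thesis using msum_typed[of S U U' g] assms by (simp add: msum_step_def)
qed

lemma msum_cong: assumes "finite S" "\<forall>a\<in>S. g a = h a"
  shows "msum C U U' g S = msum C U U' h S"
  unfolding msum_def by (rule fold_closed_eq[where B=UNIV]) (use assms in auto)

lemma msum_insert_zero: assumes "finite S" "g x = zr U U'" "\<forall>a\<in>S. typed U U' (g a)"
  shows "msum C U U' g (insert x S) = msum C U U' g S"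
proof (cases "x \<in> S")
  case True then show ?thesis by (simp add: insert_absorb)
next
  case False
  have "msum C U U' g (insert x S) = ad (g x) (msum C U U' g S)"
    using assms False by (intro msum_insert) (auto simp: typed_def)
  also have "\<dots> = msum C U U' g S" using assms(2) msum_typed[OF assms(1,3)]
    unfolding typed_def by simp
  finally show ?thesis .
qed

lemma msum_zero_ext_aux: assumes "finite D" "finite S" "\<forall>a\<in>D. g a = zr U U'"
  "\<forall>a\<in>S. typed U U' (g a)"
  shows "msum C U U' g (S \<union> D) = msum C U U' g S"
  using assms
proof (induction D rule: finite_induct)
  case empty then show ?case by simp
next
  case (insert x F)
  have "S \<union> insert x F = insert x (S \<union> F)" by auto
  then have "msum C U U' g (S \<union> insert x F) = msum C U U' g (S \<union> F)"
    using insert.prems insert.hyps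
    by (simp only:) (rule msum_insert_zero, auto simp: typed_def)
  also have "\<dots> = msum C U U' g S" using insert by auto
  finally show ?case .
qed

lemma msum_zero_ext: assumes "finite S'" "S \<subseteq> S'" "\<forall>a\<in>S'-S. g a = zr U U'"
  "\<forall>a\<in>S. typed U U' (g a)"
  shows "msum C U U' g S' = msum C U U' g S"
proof -
  have "S' = S \<union> (S' - S)" using assms(2) by auto
  then show ?thesis using msum_zero_ext_aux[of "S' - S" S g U U'] assms
    by (metis finite_Diff finite_subset)
qed

lemma msum_reindex: assumes "finite S" "inj_on p S" "\<forall>a\<in>p ` S. typed U U' (g a)"
  shows "msum C U U' g (p ` S) = msum C U U' (\<lambda>a. g (p a)) S"
  using assms
proof (induction S rule: finite_induct)
  case empty then show ?case by simp
next
  case (insert x F)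
  have "p x \<notin> p ` F" using insert by auto
  then have "msum C U U' g (p ` insert x F) = ad (g (p x)) (msum C U U' g (p ` F))"
    using insert by (simp add: msum_insert)
  also have "msum C U U' g (p ` F) = msum C U U' (\<lambda>a. g (p a)) F" using insert by auto
  also have "ad (g (p x)) \<dots> = msum C U U' (\<lambda>a. g (p a)) (insert x F)"
    using insert by (simp add: msum_insert)
  finally show ?case .
qed

lemma tn_idm_ot: "tn (idm (ot U W)) f = tn (idm U) (tn (idm W) f)"
  by (simp flip: tn_id)

lemma idm_tn_cp: "cd f = dm g \<Longrightarrow> tn (idm W) (cp g f) = cp (tn (idm W) g) (tn (idm W) f)"
  by (metis cp_id_l id_cd id_dm interchange)
lemma cp_tn_idm: "cd f = dm g \<Longrightarrow> tn (cp g f) (idm W) = cp (tn g (idm W)) (tn f (idm W))"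
  by (metis cp_id_l id_cd id_dm interchange)

lemma slide1: "tn f g = cp (tn f (idm (cd g))) (tn (idm (dm f)) g)"
proof -
  have "tn (cp f (idm (dm f))) (cp (idm (cd g)) g) = cp (tn f (idm (cd g))) (tn (idm (dm f)) g)"
    by (rule interchange) simp_all
  then show ?thesis by simp
qed
lemma slide2: "tn f g = cp (tn (idm (cd f)) g) (tn f (idm (dm g)))"
proof -
  have "tn (cp (idm (cd f)) f) (cp g (idm (dm g))) = cp (tn (idm (cd f)) g) (tn f (idm (dm g)))"
    by (rule interchange) simp_all
  then show ?thesis by simp
qed

lemma slide1_cp: "cd K = ot (dm h) (dm f) \<Longrightarrow> cp (tn h (idm (cd f))) (cp (tn (idm (dm h)) f) K) = cp (tn h f) K"
  by (simp add: cp_assoc slide1[of h f, symmetric])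

lemma slide2_cp: "cd K = ot (dm h) (dm f) \<Longrightarrow> cp (tn (idm (cd h)) f) (cp (tn h (idm (dm f))) K) = cp (tn h f) K"
  by (simp add: cp_assoc slide2[of h f, symmetric])

definition lsum :: "'o \<Rightarrow> 'o \<Rightarrow> ('a \<Rightarrow> 'm) \<Rightarrow> 'a list \<Rightarrow> 'm" where
  "lsum U U' F ts = foldr (\<lambda>t acc. ad (F t) acc) ts (zr U U')"

lemma lsum_Nil[simp]: "lsum U U' F [] = zr U U'" and lsum_Cons[simp]: "lsum U U' F (t # ts) = ad (F t) (lsum U U' F ts)"
  by (simp_all add: lsum_def)

lemma lsum_typ: "(\<forall>t\<in>set ts. dm (F t) = U \<and> cd (F t) = U') \<Longrightarrow> dm (lsum U U' F ts) = U \<and> cd (lsum U U' F ts) = U'"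
  by (induction ts) auto

lemma lsum_cong: "(\<forall>t\<in>set ts. F t = G t) \<Longrightarrow> lsum U U' F ts = lsum U U' G ts"
  by (induction ts) auto

lemma lsum_zero: "(\<forall>t\<in>set ts. F t = zr U U') \<Longrightarrow> lsum U U' F ts = zr U U'"
  by (induction ts) auto

lemma lsum_cp_l: assumes "\<forall>t\<in>set ts. dm (F t) = U \<and> cd (F t) = U'" "dm g = U'"
  shows "cp g (lsum U U' F ts) = lsum U (cd g) (\<lambda>t. cp g (F t)) ts"
  using assms
proof (induction ts)
  case Nil then show ?case by simp
next
  case (Cons t ts)
  have "cp g (ad (F t) (lsum U U' F ts)) = ad (cp g (F t)) (cp g (lsum U U' F ts))"
    by (rule cp_ad_r) (use Cons.prems lsum_typ[of ts F U U'] in simp_all)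
  then show ?case using Cons by simp
qed

lemma lsum_cp_r: assumes "\<forall>t\<in>set ts. dm (F t) = U \<and> cd (F t) = U'" "cd f = U"
  shows "cp (lsum U U' F ts) f = lsum (dm f) U' (\<lambda>t. cp (F t) f) ts"
  using assms
proof (induction ts)
  case Nil then show ?case by simp
next
  case (Cons t ts)
  have "cp (ad (F t) (lsum U U' F ts)) f = ad (cp (F t) f) (cp (lsum U U' F ts) f)"
    by (rule cp_ad_l) (use Cons.prems lsum_typ[of ts F U U'] in simp_all)
  then show ?case using Cons by simp
qed

lemma lsum_nz: "lsum U U' F ts \<noteq> zr U U' \<Longrightarrow> \<exists>t\<in>set ts. F t \<noteq> zr U U'"
  using lsum_zero[of ts F U U'] by metis

lemma foldr_lsum: "foldr (\<lambda>(k,x,y) acc. ad (cp x y) acc) ts z = foldr (\<lambda>t acc. ad ((\<lambda>(k,x,y). cp x y) t) acc) ts z"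
proof (induction ts)
  case Nil then show ?case by simp
next
  case (Cons t ts)
  obtain k x y where "t = (k,x,y)" by (cases t)
  then show ?case using Cons by simp
qed

lemma lsum_map: "lsum U U' F (map g ts) = lsum U U' (\<lambda>t. F (g t)) ts"
  by (induction ts) simp_all

lemma lsum_filter:
  assumes "\<forall>t\<in>set ts. dm (F t) = U \<and> cd (F t) = U'" and "\<forall>t\<in>set ts. \<not> P t \<longrightarrow> F t = zr U U'"
  shows "lsum U U' F (filter P ts) = lsum U U' F ts"
  using assms by (induction ts) (auto simp: lsum_typ)

definition scalar_functional :: "('m \<Rightarrow> bool) \<Rightarrow> ('m \<Rightarrow> 'm) \<Rightarrow> bool" where
  "scalar_functional T phi \<longleftrightarrow> (\<forall>f. T f \<longrightarrow> is_scalar (phi f)) \<and>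
     (\<forall>f f'. T f \<longrightarrow> T f' \<longrightarrow> phi (ad f f') = ad (phi f) (phi f')) \<and>
     (\<forall>s f. is_scalar s \<longrightarrow> T f \<longrightarrow> phi (tn s f) = cp s (phi f))"

lemma scalar_functional_zero:
  assumes phi: "scalar_functional T phi" and z: "T (zr U U')"
  shows "phi (zr U U') = zr un un"
proof -
  have "phi (zr U U') = phi (ad (zr U U') (zr U U'))" by simp
  also have "\<dots> = ad (phi (zr U U')) (phi (zr U U'))"
    using phi z unfolding scalar_functional_def by blast
  finally show ?thesis
    using ad_self_zero[of "phi (zr U U')"] phi z unfolding scalar_functional_def by simp
qed

lemma scalar_functional_lsum:
  assumes phi: "scalar_functional T phi"
    and T: "T (zr U U')" "\<And>f f'. T f \<Longrightarrow> T f' \<Longrightarrow> T (ad f f')" "\<And>s f. is_scalar s \<Longrightarrow> T f \<Longrightarrow> T (tn s f)"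
    and ts: "\<forall>t\<in>set ts. is_scalar (s t) \<and> T (m t)"
  shows "phi (lsum U U' (\<lambda>t. tn (s t) (m t)) ts) = lsum un un (\<lambda>t. cp (s t) (phi (m t))) ts"
proof -
  have "T (lsum U U' (\<lambda>t. tn (s t) (m t)) ts) \<and>
      phi (lsum U U' (\<lambda>t. tn (s t) (m t)) ts) = lsum un un (\<lambda>t. cp (s t) (phi (m t))) ts"
    using ts
  proof (induction ts)
    case Nil
    then show ?case using scalar_functional_zero[OF phi T(1)] T(1) by simp
  next
    case (Cons t ts)
    then show ?case using phi T(2,3) unfolding scalar_functional_def by simp
  qed
  then show ?thesis ..
qed
end

section \<open>The space \<open>H\<close> of a Psi-system\<close>

lemma involution_closure:
  assumes inv: "\<And>p. p \<in> T \<Longrightarrow> pi p \<in> T" "\<And>p. p \<in> T \<Longrightarrow> pi (pi p) = p"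
    and S0: "finite S0" "S0 \<subseteq> T"
  shows "finite (S0 \<union> pi ` S0) \<and> S0 \<union> pi ` S0 \<subseteq> T \<and> pi ` (S0 \<union> pi ` S0) = S0 \<union> pi ` S0
    \<and> inj_on pi (S0 \<union> pi ` S0)"
proof (intro conjI)
  let ?S = "S0 \<union> pi ` S0"
  show "finite ?S" "?S \<subseteq> T" using S0 inv by auto
  show "pi ` ?S = ?S"
  proof
    show "pi ` ?S \<subseteq> ?S" using S0 inv by auto
    show "?S \<subseteq> pi ` ?S"
    proof
      fix p assume "p \<in> ?S"
      moreover have "p \<in> T" using \<open>p \<in> ?S\<close> \<open>?S \<subseteq> T\<close> by blast
      ultimately have "pi p \<in> ?S" "p = pi (pi p)" using \<open>pi ` ?S \<subseteq> ?S\<close> inv(2) by auto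
      then show "p \<in> pi ` ?S" by blast
    qed
  qed
  show "inj_on pi ?S"
  proof (rule inj_onI)
    fix p q assume "p \<in> ?S" "q \<in> ?S" "pi p = pi q"
    then show "p = q" using \<open>?S \<subseteq> T\<close> inv(2) by (metis subsetD)
  qed
qed

type_synonym 'i triple = "'i \<times> 'i \<times> 'i"

locale psi = smcat C for C :: "('o,'m) mcat" +
  fixes I :: "'i set" and V :: "'i \<Rightarrow> 'o" and st :: "'i \<Rightarrow> 'i" and b d :: "'i \<Rightarrow> 'm"
  assumes psi: "psi_system C I V st b d"
begin

lemma simpleV: "i \<in> I \<Longrightarrow> simple_obj C (V i)"
  using psi by (simp add: psi_system_def)

lemma orth: "i \<in> I \<Longrightarrow> j \<in> I \<Longrightarrow> i \<noteq> j \<Longrightarrow> dm f = V i \<Longrightarrow> cd f = V j \<Longrightarrow> f = zr (V i) (V j)"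
  using psi unfolding psi_system_def hom_def by blast

lemma st_I[simp]: "i \<in> I \<Longrightarrow> st i \<in> I" and st_st[simp]: "i \<in> I \<Longrightarrow> st (st i) = i"
  using psi by (auto simp: psi_system_def)

lemma b_dm[simp]: "i \<in> I \<Longrightarrow> dm (b i) = un" and b_cd[simp]: "i \<in> I \<Longrightarrow> cd (b i) = ot (V i) (V (st i))"
  and d_dm[simp]: "i \<in> I \<Longrightarrow> dm (d i) = ot (V i) (V (st i))" and d_cd[simp]: "i \<in> I \<Longrightarrow> cd (d i) = un"
  using psi by (auto simp: psi_system_def hom_def)

lemma zig1: "i \<in> I \<Longrightarrow> cp (tn (idm (V i)) (d (st i))) (tn (b i) (idm (V i))) = idm (V i)"
  and zig2: "i \<in> I \<Longrightarrow> cp (tn (d i) (idm (V i))) (tn (idm (V i)) (b (st i))) = idm (V i)"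
  using psi by (auto simp: psi_system_def)

lemma psi_completeness: "i \<in> I \<Longrightarrow> j \<in> I \<Longrightarrow> k \<in> I \<Longrightarrow> dm f = V k \<Longrightarrow> cd f = ot (V i) (V j) \<Longrightarrow>
   f \<noteq> zr (V k) (ot (V i) (V j)) \<Longrightarrow>
   \<exists>ts. (\<forall>(k,x,y)\<in>set ts. k \<in> I \<and> dm x = V k \<and> cd x = ot (V i) (V j) \<and> dm y = ot (V i) (V j) \<and> cd y = V k) \<and>
            foldr (\<lambda>(k,x,y) acc. ad (cp x y) acc) ts (zr (ot (V i) (V j)) (ot (V i) (V j))) = idm (ot (V i) (V j))"
proof -
  assume a: "i \<in> I" "j \<in> I" "k \<in> I" "dm f = V k" "cd f = ot (V i) (V j)" "f \<noteq> zr (V k) (ot (V i) (V j))"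
  have "\<exists>k\<in>I. \<exists>f\<in>hom C (V k) (ot (V i) (V j)). f \<noteq> zr (V k) (ot (V i) (V j))"
    using a by (auto simp: hom_def)
  then show ?thesis using psi a(1,2) unfolding psi_system_def hom_def by blast
qed

abbreviation Trip where "Trip \<equiv> I \<times> I \<times> I"

definition obj_ij :: "'i triple \<Rightarrow> 'o" where "obj_ij p = (case p of (i,j,k) \<Rightarrow> ot (V i) (V j))"
definition obj_k :: "'i triple \<Rightarrow> 'o" where "obj_k p = (case p of (i,j,k) \<Rightarrow> V k)"
lemma obj_ij_simp[simp]: "obj_ij (i,j,k) = ot (V i) (V j)" and obj_k_simp[simp]: "obj_k (i,j,k) = V k"
  by (simp_all add: obj_ij_def obj_k_def)

definition hat_mor where "hat_mor p f \<longleftrightarrow> dm f = obj_ij p \<and> cd f = obj_k p"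
definition check_mor where "check_mor p g \<longleftrightarrow> dm g = obj_k p \<and> cd g = obj_ij p"
abbreviation hat_zero where "hat_zero p \<equiv> zr (obj_ij p) (obj_k p)"
abbreviation check_zero where "check_zero p \<equiv> zr (obj_k p) (obj_ij p)"

lemma hat_mor_zr[simp]: "hat_mor p (hat_zero p)" and check_mor_zr[simp]: "check_mor p (check_zero p)"
  by (simp_all add: hat_mor_def check_mor_def)

definition hat_comp :: "('i,'m) hel \<Rightarrow> 'i triple \<Rightarrow> 'm" where "hat_comp x p = (case p of (i,j,k) \<Rightarrow> fst x i j k)"
definition check_comp :: "('i,'m) hel \<Rightarrow> 'i triple \<Rightarrow> 'm" where "check_comp x p = (case p of (i,j,k) \<Rightarrow> snd x i j k)"
lemma hat_comp_simp[simp]: "hat_comp x (i,j,k) = fst x i j k" and check_comp_simp[simp]: "check_comp x (i,j,k) = snd x i j k"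
  by (simp_all add: hat_comp_def check_comp_def)

abbreviation H where "H \<equiv> Hsp C I V"
abbreviation supp where "supp \<equiv> hsupp C I V"

lemma supp_alt: "supp x = {p \<in> Trip. hat_comp x p \<noteq> hat_zero p \<or> check_comp x p \<noteq> check_zero p}"
  by (auto simp: hsupp_def hz_def cz_def)

lemma supp_Trip: "supp x \<subseteq> Trip" by (auto simp: supp_alt)

lemma H_iff: "x \<in> H \<longleftrightarrow> (\<forall>p\<in>Trip. hat_mor p (hat_comp x p) \<and> check_mor p (check_comp x p)) \<and>
   (\<forall>i j k. \<not> (i \<in> I \<and> j \<in> I \<and> k \<in> I) \<longrightarrow> fst x i j k = undefined \<and> snd x i j k = undefined) \<and>
   finite (supp x)"
proof -
  have e1: "\<And>P A B. (\<forall>i j k. if P i j k then A i j k else B i j k) \<longleftrightarrow>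
     (\<forall>i j k. P i j k \<longrightarrow> A i j k) \<and> (\<forall>i j k. \<not> P i j k \<longrightarrow> B i j k)" by meson
  have e2: "(\<forall>p\<in>Trip. hat_mor p (hat_comp x p) \<and> check_mor p (check_comp x p)) \<longleftrightarrow>
     (\<forall>i j k. i \<in> I \<and> j \<in> I \<and> k \<in> I \<longrightarrow> fst x i j k \<in> hom C (ot (V i) (V j)) (V k) \<and> snd x i j k \<in> hom C (V k) (ot (V i) (V j)))"
    by (auto simp: hat_mor_def check_mor_def hom_def)
  show ?thesis unfolding Hsp_def mem_Collect_eq e1 e2 by blast
qed

lemma H_hat_mor: "x \<in> H \<Longrightarrow> p \<in> Trip \<Longrightarrow> hat_mor p (hat_comp x p)"
  and H_check_mor: "x \<in> H \<Longrightarrow> p \<in> Trip \<Longrightarrow> check_mor p (check_comp x p)"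
  and H_fin: "x \<in> H \<Longrightarrow> finite (supp x)"
  by (auto simp: H_iff)

lemma H_out: "x \<in> H \<Longrightarrow> \<not> (i \<in> I \<and> j \<in> I \<and> k \<in> I) \<Longrightarrow> fst x i j k = undefined \<and> snd x i j k = undefined"
  by (auto simp: H_iff)

lemma H_eqI: assumes "x \<in> H" "y \<in> H" "\<forall>p\<in>Trip. hat_comp x p = hat_comp y p \<and> check_comp x p = check_comp y p" shows "x = y"
proof -
  have "fst x = fst y"
  proof (intro ext)
    fix i j k show "fst x i j k = fst y i j k"
      using assms H_out[of x i j k] H_out[of y i j k] by (cases "i \<in> I \<and> j \<in> I \<and> k \<in> I") force+
  qed
  moreover have "snd x = snd y"
  proof (intro ext)
    fix i j k show "snd x i j k = snd y i j k"
      using assms H_out[of x i j k] H_out[of y i j k] by (cases "i \<in> I \<and> j \<in> I \<and> k \<in> I") force+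
  qed
  ultimately show ?thesis by (simp add: prod_eq_iff)
qed

lemma not_supp: "p \<in> Trip \<Longrightarrow> p \<notin> supp x \<Longrightarrow> hat_comp x p = hat_zero p \<and> check_comp x p = check_zero p"
  by (auto simp: supp_alt)

subsection \<open>Swap operators\<close>

text \<open>A swap operator over an involution \<open>pi\<close> of the index triples builds the hat component at \<open>p\<close>
  from the check component at \<open>pi p\<close> (via \<open>al p\<close>) and vice versa (via \<open>be p\<close>).  \<open>A\<close>, \<open>B\<close>, their
  transposes and the braid words \<open>ABA\<close>, \<open>BAB\<close> are all of this form.\<close>

definition swap_op :: "('i triple \<Rightarrow> 'i triple) \<Rightarrow> ('i triple \<Rightarrow> 'm \<Rightarrow> 'm) \<Rightarrow> ('i triple \<Rightarrow> 'm \<Rightarrow> 'm)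
   \<Rightarrow> ('i,'m) hel \<Rightarrow> ('i,'m) hel" where
  "swap_op pi al be x = ((\<lambda>a e c. if a \<in> I \<and> e \<in> I \<and> c \<in> I then al (a,e,c) (check_comp x (pi (a,e,c))) else undefined),
                    (\<lambda>a e c. if a \<in> I \<and> e \<in> I \<and> c \<in> I then be (a,e,c) (hat_comp x (pi (a,e,c))) else undefined))"

lemma swap_op_hat_comp: "p \<in> Trip \<Longrightarrow> hat_comp (swap_op pi al be x) p = al p (check_comp x (pi p))"
  and swap_op_check_comp: "p \<in> Trip \<Longrightarrow> check_comp (swap_op pi al be x) p = be p (hat_comp x (pi p))"
  by (cases p, simp add: swap_op_def)+

definition is_swap :: "('i triple \<Rightarrow> 'i triple) \<Rightarrow> ('i triple \<Rightarrow> 'm \<Rightarrow> 'm) \<Rightarrow> ('i triple \<Rightarrow> 'm \<Rightarrow> 'm) \<Rightarrow> bool" where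
  "is_swap pi al be \<longleftrightarrow> (\<forall>p\<in>Trip. pi p \<in> Trip \<and> pi (pi p) = p) \<and>
     (\<forall>p\<in>Trip. \<forall>g. check_mor (pi p) g \<longrightarrow> hat_mor p (al p g)) \<and>
     (\<forall>p\<in>Trip. \<forall>f. hat_mor (pi p) f \<longrightarrow> check_mor p (be p f)) \<and>
     (\<forall>p\<in>Trip. al p (check_zero (pi p)) = hat_zero p \<and> be p (hat_zero (pi p)) = check_zero p)"

lemma swap_pi: "is_swap pi al be \<Longrightarrow> p \<in> Trip \<Longrightarrow> pi p \<in> Trip" and swap_pipi: "is_swap pi al be \<Longrightarrow> p \<in> Trip \<Longrightarrow> pi (pi p) = p"
  by (auto simp: is_swap_def)

lemma swap_zero: "is_swap pi al be \<Longrightarrow> p \<in> Trip \<Longrightarrow>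
    al p (check_zero (pi p)) = hat_zero p \<and> be p (hat_zero (pi p)) = check_zero p"
  unfolding is_swap_def by blast

lemma swap_supp: assumes "is_swap pi al be" shows "supp (swap_op pi al be x) \<subseteq> pi ` supp x"
proof
  fix p assume p: "p \<in> supp (swap_op pi al be x)"
  then have pT: "p \<in> Trip" using supp_Trip by blast
  have "pi p \<in> supp x"
  proof (rule ccontr)
    assume "pi p \<notin> supp x"
    then have "hat_comp x (pi p) = hat_zero (pi p)" "check_comp x (pi p) = check_zero (pi p)" using not_supp swap_pi[OF assms pT] by auto
    moreover have "al p (check_zero (pi p)) = hat_zero p \<and> be p (hat_zero (pi p)) = check_zero p" using assms pT unfolding is_swap_def by blast
    ultimately show False using p pT by (simp add: supp_alt swap_op_hat_comp swap_op_check_comp)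
  qed
  then show "p \<in> pi ` supp x" using swap_pipi[OF assms pT] by (metis image_eqI)
qed

lemma swap_H: assumes "is_swap pi al be" "x \<in> H" shows "swap_op pi al be x \<in> H"
  unfolding H_iff
proof (intro conjI ballI allI impI)
  fix p assume p: "p \<in> Trip"
  have pp: "pi p \<in> Trip" using swap_pi[OF assms(1) p] .
  have t1: "\<forall>p\<in>Trip. \<forall>g. check_mor (pi p) g \<longrightarrow> hat_mor p (al p g)"
    and t2: "\<forall>p\<in>Trip. \<forall>f. hat_mor (pi p) f \<longrightarrow> check_mor p (be p f)" using assms(1) unfolding is_swap_def by blast+
  show "hat_mor p (hat_comp (swap_op pi al be x) p)" unfolding swap_op_hat_comp[OF p]
    using t1 p H_check_mor[OF assms(2) pp] by blast
  show "check_mor p (check_comp (swap_op pi al be x) p)" unfolding swap_op_check_comp[OF p]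
    using t2 p H_hat_mor[OF assms(2) pp] by blast
next
  fix i j k assume n: "\<not> (i \<in> I \<and> j \<in> I \<and> k \<in> I)"
  show "fst (swap_op pi al be x) i j k = undefined" "snd (swap_op pi al be x) i j k = undefined"
    unfolding swap_op_def by (simp_all only: fst_conv snd_conv if_not_P[OF n])
next
  show "finite (supp (swap_op pi al be x))"
    by (rule finite_subset[OF swap_supp[OF assms(1)]]) (rule finite_imageI[OF H_fin[OF assms(2)]])
qed

abbreviation fm where "fm \<equiv> hform C I V"

definition form_term :: "('i,'m) hel \<Rightarrow> ('i,'m) hel \<Rightarrow> 'i triple \<Rightarrow> 'm" where
  "form_term x y = (\<lambda>(i,j,k). ad (scal C (V k) (cp (fst x i j k) (snd y i j k)))
                       (scal C (V k) (cp (fst y i j k) (snd x i j k))))"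

abbreviation sc where "sc p f \<equiv> scal C (obj_k p) f"

lemma form_term_alt: "form_term x y p = ad (sc p (cp (hat_comp x p) (check_comp y p))) (sc p (cp (hat_comp y p) (check_comp x p)))"
  by (simp add: form_term_def hat_comp_def check_comp_def split: prod.splits)

lemma fm_def': "fm x y = msum C un un (form_term x y) (supp x \<union> supp y)"
  by (simp add: hform_def form_term_def)

lemma simple_obj_k: "p \<in> Trip \<Longrightarrow> simple_obj C (obj_k p)"
  using simpleV by auto

lemma sc_scalar: "p \<in> Trip \<Longrightarrow> dm f = obj_k p \<Longrightarrow> cd f = obj_k p \<Longrightarrow> is_scalar (sc p f)"
  using scal_scalar simple_obj_k by blast

lemma form_term_scalar: assumes "x \<in> H" "y \<in> H" "p \<in> Trip" shows "is_scalar (form_term x y p)"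
proof -
  have "hat_mor p (hat_comp x p)" "check_mor p (check_comp y p)" "hat_mor p (hat_comp y p)" "check_mor p (check_comp x p)"
    using assms H_hat_mor H_check_mor by auto
  then have "is_scalar (sc p (cp (hat_comp x p) (check_comp y p)))" "is_scalar (sc p (cp (hat_comp y p) (check_comp x p)))"
    using assms(3) unfolding hat_mor_def check_mor_def by (auto intro!: sc_scalar)
  then show ?thesis by (simp add: form_term_alt)
qed

lemma form_term_zero: assumes "p \<in> Trip" "p \<notin> supp x" "p \<notin> supp y" shows "form_term x y p = zr un un"
  using assms not_supp[of p x] not_supp[of p y] scal_zr[OF simple_obj_k[OF assms(1)]]
  by (simp add: form_term_alt)

lemma fm_over: assumes "x \<in> H" "y \<in> H" "finite S" "S \<subseteq> Trip" "supp x \<union> supp y \<subseteq> S"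
  shows "fm x y = msum C un un (form_term x y) S"
  unfolding fm_def'
proof (rule msum_zero_ext[symmetric])
  show "finite S" "supp x \<union> supp y \<subseteq> S" using assms by auto
  show "\<forall>a\<in>S - (supp x \<union> supp y). form_term x y a = zr un un"
    using assms(4) form_term_zero by blast
  show "\<forall>a\<in>supp x \<union> supp y. typed un un (form_term x y a)"
    using form_term_scalar[OF assms(1,2)] supp_Trip unfolding typed_def is_scalar_def by blast
qed

lemma fm_sym: assumes "x \<in> H" "y \<in> H" shows "fm x y = fm y x"
proof -
  have "fm x y = msum C un un (form_term x y) (supp x \<union> supp y)" by (rule fm_def')
  also have "\<dots> = msum C un un (form_term y x) (supp x \<union> supp y)"
  proof (rule msum_cong)
    show "finite (supp x \<union> supp y)" using assms H_fin by auto
    show "\<forall>a\<in>supp x \<union> supp y. form_term x y a = form_term y x a"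
    proof
      fix a assume "a \<in> supp x \<union> supp y"
      then have aT: "a \<in> Trip" using supp_Trip by blast
      have "hat_mor a (hat_comp x a)" "check_mor a (check_comp y a)" "hat_mor a (hat_comp y a)" "check_mor a (check_comp x a)"
        using assms aT H_hat_mor H_check_mor by auto
      then have "is_scalar (sc a (cp (hat_comp x a) (check_comp y a)))" "is_scalar (sc a (cp (hat_comp y a) (check_comp x a)))"
        using aT unfolding hat_mor_def check_mor_def by (auto intro!: sc_scalar)
      then show "form_term x y a = form_term y x a" by (simp add: form_term_alt ad_comm)
    qed
  qed
  also have "\<dots> = fm y x" by (simp add: fm_def' Un_commute)
  finally show ?thesis .
qed

lemma sc_pairing_scalar: "p \<in> Trip \<Longrightarrow> hat_mor p f \<Longrightarrow> check_mor p g \<Longrightarrow> is_scalar (sc p (cp f g))"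
  unfolding hat_mor_def check_mor_def by (auto intro!: sc_scalar)

lemma form_term_swap:
  assumes sw: "is_swap pi al be" and sw': "is_swap pi al' be'"
  and P1: "\<forall>p\<in>Trip. \<forall>f h. hat_mor (pi p) f \<longrightarrow> hat_mor p h \<longrightarrow> sc p (cp h (be p f)) = sc (pi p) (cp f (be' (pi p) h))"
  and P2: "\<forall>p\<in>Trip. \<forall>g g'. check_mor (pi p) g \<longrightarrow> check_mor p g' \<longrightarrow> sc p (cp (al p g) g') = sc (pi p) (cp (al' (pi p) g') g)"
  and x: "x \<in> H" and y: "y \<in> H" and p: "p \<in> Trip"
  shows "form_term (swap_op pi al be x) y p = form_term x (swap_op pi al' be' y) (pi p)"
proof -
  have pp: "pi p \<in> Trip" and pipi: "pi (pi p) = p" using swap_pi[OF sw p] swap_pipi[OF sw p] by auto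
  have ty: "check_mor (pi p) (check_comp x (pi p))" "check_mor p (check_comp y p)" "hat_mor (pi p) (hat_comp x (pi p))" "hat_mor p (hat_comp y p)"
    using H_check_mor H_hat_mor x y p pp by auto
  have e1: "sc p (cp (al p (check_comp x (pi p))) (check_comp y p)) = sc (pi p) (cp (al' (pi p) (check_comp y p)) (check_comp x (pi p)))"
    using P2 p ty by blast
  have e2: "sc p (cp (hat_comp y p) (be p (hat_comp x (pi p)))) = sc (pi p) (cp (hat_comp x (pi p)) (be' (pi p) (hat_comp y p)))"
    using P1 p ty by blast
  have a1: "\<forall>p\<in>Trip. \<forall>g. check_mor (pi p) g \<longrightarrow> hat_mor p (al' p g)"
    and a2: "\<forall>p\<in>Trip. \<forall>f. hat_mor (pi p) f \<longrightarrow> check_mor p (be' p f)" using sw' unfolding is_swap_def by blast+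
  have t1: "hat_mor (pi p) (al' (pi p) (check_comp y p))" using a1 pp ty(2) pipi by auto
  have t2: "check_mor (pi p) (be' (pi p) (hat_comp y p))" using a2 pp ty(4) pipi by auto
  have s1: "is_scalar (sc (pi p) (cp (al' (pi p) (check_comp y p)) (check_comp x (pi p))))" using sc_pairing_scalar[OF pp t1 ty(1)] .
  have s2: "is_scalar (sc (pi p) (cp (hat_comp x (pi p)) (be' (pi p) (hat_comp y p))))" using sc_pairing_scalar[OF pp ty(3) t2] .
  show ?thesis
    unfolding form_term_alt swap_op_hat_comp[OF p] swap_op_check_comp[OF p] swap_op_hat_comp[OF pp] swap_op_check_comp[OF pp] pipi e1 e2
    using s1 s2 by (simp add: ad_comm)
qed

lemma swap_op_transpose:
  assumes sw: "is_swap pi al be" and sw': "is_swap pi al' be'"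
  and P1: "\<forall>p\<in>Trip. \<forall>f h. hat_mor (pi p) f \<longrightarrow> hat_mor p h \<longrightarrow> sc p (cp h (be p f)) = sc (pi p) (cp f (be' (pi p) h))"
  and P2: "\<forall>p\<in>Trip. \<forall>g g'. check_mor (pi p) g \<longrightarrow> check_mor p g' \<longrightarrow> sc p (cp (al p g) g') = sc (pi p) (cp (al' (pi p) g') g)"
  and x: "x \<in> H" and y: "y \<in> H"
  shows "fm (swap_op pi al be x) y = fm x (swap_op pi al' be' y)"
proof -
  let ?X = "swap_op pi al be x" and ?Y = "swap_op pi al' be' y"
  define S where "S = (supp x \<union> supp y) \<union> pi ` (supp x \<union> supp y)"
  have "finite S \<and> S \<subseteq> Trip \<and> pi ` S = S \<and> inj_on pi S"
    unfolding S_def by (rule involution_closure) (use swap_pi[OF sw] swap_pipi[OF sw] H_fin x y supp_Trip in auto)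
  then have fS: "finite S" and ST: "S \<subseteq> Trip" and piS: "pi ` S = S" and injS: "inj_on pi S"
    by auto
  have supp_S: "supp x \<subseteq> S" "supp y \<subseteq> S" "pi ` supp x \<subseteq> S" "pi ` supp y \<subseteq> S"
    unfolding S_def by auto
  have XH: "?X \<in> H" and YH: "?Y \<in> H" using swap_H[OF sw x] swap_H[OF sw' y] .
  have "fm ?X y = msum C un un (form_term ?X y) S"
    by (rule fm_over[OF XH y fS ST]) (use swap_supp[OF sw, of x] supp_S in blast)
  also have "\<dots> = msum C un un (\<lambda>p. form_term x ?Y (pi p)) S"
    by (intro msum_cong[OF fS] ballI form_term_swap[OF sw sw' P1 P2 x y]) (use ST in blast)
  also have "\<dots> = msum C un un (form_term x ?Y) (pi ` S)"
  proof (rule msum_reindex[symmetric, OF fS injS])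
    show "\<forall>a\<in>pi ` S. typed un un (form_term x ?Y a)"
      using form_term_scalar[OF x YH] ST unfolding piS typed_def is_scalar_def by blast
  qed
  also have "\<dots> = fm x ?Y"
    unfolding piS by (rule fm_over[symmetric, OF x YH fS ST]) (use swap_supp[OF sw', of y] supp_S in blast)
  finally show ?thesis .
qed

lemma swap_op_comp3:
  assumes p1: "\<And>p. p \<in> Trip \<Longrightarrow> p1 p \<in> Trip" and p2: "\<And>p. p \<in> Trip \<Longrightarrow> p2 p \<in> Trip"
  shows "swap_op p1 a1 b1 (swap_op p2 a2 b2 (swap_op p3 a3 b3 x)) =
    swap_op (\<lambda>p. p3 (p2 (p1 p))) (\<lambda>p g. a1 p (b2 (p1 p) (a3 (p2 (p1 p)) g))) (\<lambda>p f. b1 p (a2 (p1 p) (b3 (p2 (p1 p)) f))) x"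
proof -
  have h: "\<And>a e c. a \<in> I \<Longrightarrow> e \<in> I \<Longrightarrow> c \<in> I \<Longrightarrow> (a,e,c) \<in> Trip" by simp
  show ?thesis
    unfolding swap_op_def[of p1 a1 b1] swap_op_def[of "\<lambda>p. p3 (p2 (p1 p))"] fst_conv snd_conv
    using swap_op_hat_comp swap_op_check_comp p1 p2 h by (intro prod_eqI ext) auto
qed

lemma swap_op_cong_pi: assumes "\<And>p. p \<in> Trip \<Longrightarrow> pi p = pi' p" shows "swap_op pi al be x = swap_op pi' al be x"
  unfolding swap_op_def using assms by (intro prod_eqI ext) auto

definition swap_invol :: "('i triple \<Rightarrow> 'i triple) \<Rightarrow> ('i triple \<Rightarrow> 'm \<Rightarrow> 'm) \<Rightarrow> ('i triple \<Rightarrow> 'm \<Rightarrow> 'm) \<Rightarrow> bool" where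
  "swap_invol pi al be \<longleftrightarrow> (\<forall>p\<in>Trip. \<forall>f. hat_mor p f \<longrightarrow> al p (be (pi p) f) = f) \<and>
     (\<forall>p\<in>Trip. \<forall>g. check_mor p g \<longrightarrow> be p (al (pi p) g) = g)"

lemma swap_op_invol: assumes sw: "is_swap pi al be" and iv: "swap_invol pi al be" and x: "x \<in> H"
  shows "swap_op pi al be (swap_op pi al be x) = x"
proof (rule H_eqI[OF swap_H[OF sw swap_H[OF sw x]] x], intro ballI conjI)
  fix p assume p: "p \<in> Trip"
  have pp: "pi p \<in> Trip" and ppp: "pi (pi p) = p" using swap_pi[OF sw p] swap_pipi[OF sw p] by auto
  show "hat_comp (swap_op pi al be (swap_op pi al be x)) p = hat_comp x p"
    unfolding swap_op_hat_comp[OF p] swap_op_check_comp[OF pp] ppp using iv H_hat_mor[OF x p] p unfolding swap_invol_def by blast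
  show "check_comp (swap_op pi al be (swap_op pi al be x)) p = check_comp x p"
    unfolding swap_op_check_comp[OF p] swap_op_hat_comp[OF pp] ppp using iv H_check_mor[OF x p] p unfolding swap_invol_def by blast
qed

lemma swap_op_transpose1:
  assumes sw: "is_swap pi al be" and sw': "is_swap pi al' be'" and iv: "swap_invol pi al be" and iv': "swap_invol pi al' be'"
  and P1: "\<forall>p\<in>Trip. \<forall>f h. hat_mor (pi p) f \<longrightarrow> hat_mor p h \<longrightarrow> sc p (cp h (be p f)) = sc (pi p) (cp f (be' (pi p) h))"
  and x: "x \<in> H" and y: "y \<in> H"
  shows "fm (swap_op pi al be x) y = fm x (swap_op pi al' be' y)"
proof (rule swap_op_transpose[OF sw sw' P1 _ x y], intro ballI allI impI)
  fix p g g' assume p: "p \<in> Trip" and g: "check_mor (pi p) g" and g': "check_mor p g'"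
  have pp: "pi p \<in> Trip" and ppp: "pi (pi p) = p" using swap_pi[OF sw p] swap_pipi[OF sw p] by auto
  define f where "f = al p g"
  define h where "h = al' (pi p) g'"
  have fh: "hat_mor p f" using sw p g unfolding is_swap_def f_def by blast
  have hh: "hat_mor (pi p) h" using sw' pp g' ppp unfolding is_swap_def h_def by metis
  have gf: "be (pi p) f = g" using iv pp g ppp unfolding swap_invol_def f_def by metis
  have gh: "be' p h = g'" using iv' p g' unfolding swap_invol_def h_def by blast
  have "sc (pi p) (cp h (be (pi p) f)) = sc (pi (pi p)) (cp f (be' (pi (pi p)) h))"
    using P1 pp hh fh ppp by metis
  then show "sc p (cp (al p g) g') = sc (pi p) (cp (al' (pi p) g') g)"
    using gf gh ppp by (simp add: f_def h_def)
qed

lemma swap_comp3: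
  assumes s1: "is_swap p1 a1 b1" and s2: "is_swap p2 a2 b2"
  shows "is_swap (\<lambda>p. p1 (p2 (p1 p))) (\<lambda>p g. a1 p (b2 (p1 p) (a1 (p2 (p1 p)) g))) (\<lambda>p f. b1 p (a2 (p1 p) (b1 (p2 (p1 p)) f)))"
proof -
  have T1: "\<And>p. p \<in> Trip \<Longrightarrow> p1 p \<in> Trip" "\<And>p. p \<in> Trip \<Longrightarrow> p1 (p1 p) = p"
   and T2: "\<And>p. p \<in> Trip \<Longrightarrow> p2 p \<in> Trip" "\<And>p. p \<in> Trip \<Longrightarrow> p2 (p2 p) = p"
    using s1 s2 unfolding is_swap_def by auto
  have a1: "\<And>p g. p \<in> Trip \<Longrightarrow> check_mor (p1 p) g \<Longrightarrow> hat_mor p (a1 p g)"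
   and b1: "\<And>p f. p \<in> Trip \<Longrightarrow> hat_mor (p1 p) f \<Longrightarrow> check_mor p (b1 p f)"
   and a2: "\<And>p g. p \<in> Trip \<Longrightarrow> check_mor (p2 p) g \<Longrightarrow> hat_mor p (a2 p g)"
   and b2: "\<And>p f. p \<in> Trip \<Longrightarrow> hat_mor (p2 p) f \<Longrightarrow> check_mor p (b2 p f)"
   and z1: "\<And>p. p \<in> Trip \<Longrightarrow> a1 p (check_zero (p1 p)) = hat_zero p \<and> b1 p (hat_zero (p1 p)) = check_zero p"
   and z2: "\<And>p. p \<in> Trip \<Longrightarrow> a2 p (check_zero (p2 p)) = hat_zero p \<and> b2 p (hat_zero (p2 p)) = check_zero p"
    using s1 s2 unfolding is_swap_def by blast+
  show ?thesis unfolding is_swap_def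
  proof (intro conjI ballI allI impI)
    fix p assume p: "p \<in> Trip"
    have q1: "p1 p \<in> Trip" and q2: "p2 (p1 p) \<in> Trip" and q3: "p1 (p2 (p1 p)) \<in> Trip" using T1 T2 p by auto
    show "p1 (p2 (p1 p)) \<in> Trip" using q3 .
    show "p1 (p2 (p1 (p1 (p2 (p1 p))))) = p" using T1 T2 p q1 q2 by simp
    show "a1 p (b2 (p1 p) (a1 (p2 (p1 p)) (check_zero (p1 (p2 (p1 p)))))) = hat_zero p"
      using z1[OF q2] z2[OF q1] z1[OF p] T2(2)[OF q1] by simp
    show "b1 p (a2 (p1 p) (b1 (p2 (p1 p)) (hat_zero (p1 (p2 (p1 p)))))) = check_zero p"
      using z1[OF q2] z2[OF q1] z1[OF p] T2(2)[OF q1] by simp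
  next
    fix p g assume p: "p \<in> Trip" and g: "check_mor (p1 (p2 (p1 p))) g"
    have q1: "p1 p \<in> Trip" and q2: "p2 (p1 p) \<in> Trip" using T1 T2 p by auto
    have "hat_mor (p2 (p1 p)) (a1 (p2 (p1 p)) g)" using a1[OF q2 g] .
    then have "check_mor (p1 p) (b2 (p1 p) (a1 (p2 (p1 p)) g))" using b2[OF q1] by simp
    then show "hat_mor p (a1 p (b2 (p1 p) (a1 (p2 (p1 p)) g)))" using a1[OF p] by simp
  next
    fix p f assume p: "p \<in> Trip" and f: "hat_mor (p1 (p2 (p1 p))) f"
    have q1: "p1 p \<in> Trip" and q2: "p2 (p1 p) \<in> Trip" using T1 T2 p by auto
    have "check_mor (p2 (p1 p)) (b1 (p2 (p1 p)) f)" using b1[OF q2 f] .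
    then have "hat_mor (p1 p) (a2 (p1 p) (b1 (p2 (p1 p)) f))" using a2[OF q1] by simp
    then show "check_mor p (b1 p (a2 (p1 p) (b1 (p2 (p1 p)) f)))" using b1[OF p] by simp
  qed
qed

lemma invol_comp3:
  assumes s1: "is_swap p1 a1 b1" and s2: "is_swap p2 a2 b2" and i1: "swap_invol p1 a1 b1" and i2: "swap_invol p2 a2 b2"
  shows "swap_invol (\<lambda>p. p1 (p2 (p1 p))) (\<lambda>p g. a1 p (b2 (p1 p) (a1 (p2 (p1 p)) g))) (\<lambda>p f. b1 p (a2 (p1 p) (b1 (p2 (p1 p)) f)))"
proof -
  have T1: "\<And>p. p \<in> Trip \<Longrightarrow> p1 p \<in> Trip" "\<And>p. p \<in> Trip \<Longrightarrow> p1 (p1 p) = p"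
   and T2: "\<And>p. p \<in> Trip \<Longrightarrow> p2 p \<in> Trip" "\<And>p. p \<in> Trip \<Longrightarrow> p2 (p2 p) = p"
    using s1 s2 unfolding is_swap_def by auto
  have a1: "\<And>p g. p \<in> Trip \<Longrightarrow> check_mor (p1 p) g \<Longrightarrow> hat_mor p (a1 p g)"
   and b1: "\<And>p f. p \<in> Trip \<Longrightarrow> hat_mor (p1 p) f \<Longrightarrow> check_mor p (b1 p f)"
   and a2: "\<And>p g. p \<in> Trip \<Longrightarrow> check_mor (p2 p) g \<Longrightarrow> hat_mor p (a2 p g)"
   and b2: "\<And>p f. p \<in> Trip \<Longrightarrow> hat_mor (p2 p) f \<Longrightarrow> check_mor p (b2 p f)"
    using s1 s2 unfolding is_swap_def by blast+
  have i1h: "\<And>p f. p \<in> Trip \<Longrightarrow> hat_mor p f \<Longrightarrow> a1 p (b1 (p1 p) f) = f"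
   and i1c: "\<And>p g. p \<in> Trip \<Longrightarrow> check_mor p g \<Longrightarrow> b1 p (a1 (p1 p) g) = g"
   and i2h: "\<And>p f. p \<in> Trip \<Longrightarrow> hat_mor p f \<Longrightarrow> a2 p (b2 (p2 p) f) = f"
   and i2c: "\<And>p g. p \<in> Trip \<Longrightarrow> check_mor p g \<Longrightarrow> b2 p (a2 (p2 p) g) = g"
    using i1 i2 unfolding swap_invol_def by blast+
  show ?thesis unfolding swap_invol_def
  proof (intro conjI ballI allI impI)
    fix p f assume p: "p \<in> Trip" and f: "hat_mor p f"
    have q1: "p1 p \<in> Trip" and q2: "p2 (p1 p) \<in> Trip" using T1 T2 p by auto
    let ?q = "p1 (p2 (p1 p))"
    have e1: "p1 ?q = p2 (p1 p)" using T1 q2 by simp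
    have e2: "p2 (p1 ?q) = p1 p" using e1 T2 q1 by simp
    have f1: "check_mor (p1 p) (b1 (p1 p) f)" using b1[OF q1] f T1 p by simp
    have f2: "hat_mor (p2 (p1 p)) (a2 (p2 (p1 p)) (b1 (p1 p) f))" using a2[OF q2] f1 T2 q1 by simp
    have "a1 (p2 (p1 p)) (b1 ?q (a2 (p2 (p1 p)) (b1 (p1 p) f))) = a2 (p2 (p1 p)) (b1 (p1 p) f)"
      using i1h[OF q2 f2] by simp
    moreover have "b2 (p1 p) (a2 (p2 (p1 p)) (b1 (p1 p) f)) = b1 (p1 p) f" using i2c[OF q1 f1] .
    moreover have "a1 p (b1 (p1 p) f) = f" using i1h[OF p f] .
    ultimately show "a1 p (b2 (p1 p) (a1 (p2 (p1 p)) (b1 ?q (a2 (p1 ?q) (b1 (p2 (p1 ?q)) f))))) = f"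
      using e1 e2 by simp
  next
    fix p g assume p: "p \<in> Trip" and g: "check_mor p g"
    have q1: "p1 p \<in> Trip" and q2: "p2 (p1 p) \<in> Trip" using T1 T2 p by auto
    let ?q = "p1 (p2 (p1 p))"
    have e1: "p1 ?q = p2 (p1 p)" using T1 q2 by simp
    have e2: "p2 (p1 ?q) = p1 p" using e1 T2 q1 by simp
    have g1: "hat_mor (p1 p) (a1 (p1 p) g)" using a1[OF q1] g T1 p by simp
    have g2: "check_mor (p2 (p1 p)) (b2 (p2 (p1 p)) (a1 (p1 p) g))" using b2[OF q2] g1 T2 q1 by simp
    have "b1 (p2 (p1 p)) (a1 ?q (b2 (p2 (p1 p)) (a1 (p1 p) g))) = b2 (p2 (p1 p)) (a1 (p1 p) g)"
      using i1c[OF q2 g2] by simp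
    moreover have "a2 (p1 p) (b2 (p2 (p1 p)) (a1 (p1 p) g)) = a1 (p1 p) g" using i2h[OF q1 g1] .
    moreover have "b1 p (a1 (p1 p) g) = g" using i1c[OF p g] .
    ultimately show "b1 p (a2 (p1 p) (b1 (p2 (p1 p)) (a1 ?q (b2 (p1 ?q) (a1 (p2 (p1 ?q)) g))))) = g"
      using e1 e2 by simp
  qed
qed

text \<open>The component maps of \<open>A\<close> and \<open>B\<close>: \<open>A\<close> moves the first tensor leg with \<open>b\<close> and \<open>d\<close>,
  \<open>B\<close> the second one.\<close>

definition piA :: "'i triple \<Rightarrow> 'i triple" where "piA p = (case p of (a,e,c) \<Rightarrow> (st a, c, e))"
definition alA where "alA p g = (case p of (a,e,c) \<Rightarrow> cp (tn (d a) (idm (V c))) (tn (idm (V a)) g))"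
definition beA where "beA p f = (case p of (a,e,c) \<Rightarrow> cp (tn (idm (V a)) f) (tn (b a) (idm (V c))))"
definition piB :: "'i triple \<Rightarrow> 'i triple" where "piB p = (case p of (a,e,c) \<Rightarrow> (c, st e, a))"
definition alB where "alB p g = (case p of (a,e,c) \<Rightarrow> cp (tn (idm (V c)) (d (st e))) (tn g (idm (V e))))"
definition beB where "beB p f = (case p of (a,e,c) \<Rightarrow> cp (tn f (idm (V e))) (tn (idm (V c)) (b (st e))))"

lemma piA_simp[simp]: "piA (a,e,c) = (st a, c, e)" and piB_simp[simp]: "piB (a,e,c) = (c, st e, a)"
  by (simp_all add: piA_def piB_def)
lemma alA_simp: "alA (a,e,c) g = cp (tn (d a) (idm (V c))) (tn (idm (V a)) g)"
  and beA_simp: "beA (a,e,c) f = cp (tn (idm (V a)) f) (tn (b a) (idm (V c)))"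
  and alB_simp: "alB (a,e,c) g = cp (tn (idm (V c)) (d (st e))) (tn g (idm (V e)))"
  and beB_simp: "beB (a,e,c) f = cp (tn f (idm (V e))) (tn (idm (V c)) (b (st e)))"
  by (simp_all add: alA_def beA_def alB_def beB_def)

lemma opA_eq: "opA C I V st b d x = swap_op piA alA beA x"
  unfolding opA_def swap_op_def by (intro prod_eqI ext) (simp_all add: alA_simp beA_simp)
lemma opB_eq: "opB C I V st b d x = swap_op piB alB beB x"
  unfolding opB_def swap_op_def by (intro prod_eqI ext) (simp_all add: alB_simp beB_simp)

lemma swap_A: "is_swap piA alA beA"
  unfolding is_swap_def
proof (intro conjI ballI allI impI)
  fix p assume p: "p \<in> Trip"
  obtain a e c where pe: "p = (a,e,c)" by (cases p)
  have I: "a \<in> I" "e \<in> I" "c \<in> I" using p pe by auto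
  show "piA p \<in> Trip" "piA (piA p) = p" using I pe by auto
  show "alA p (check_zero (piA p)) = hat_zero p" "beA p (hat_zero (piA p)) = check_zero p"
    using I pe by (simp_all add: alA_simp beA_simp)
  fix g assume "check_mor (piA p) g"
  then show "hat_mor p (alA p g)" using I pe by (simp add: alA_simp hat_mor_def check_mor_def)
next
  fix p f assume p: "p \<in> Trip" and "hat_mor (piA p) f"
  obtain a e c where pe: "p = (a,e,c)" by (cases p)
  have I: "a \<in> I" "e \<in> I" "c \<in> I" using p pe by auto
  show "check_mor p (beA p f)" using I pe \<open>hat_mor (piA p) f\<close> by (simp add: beA_simp hat_mor_def check_mor_def)
qed

lemma swap_B: "is_swap piB alB beB"
  unfolding is_swap_def
proof (intro conjI ballI allI impI)
  fix p assume p: "p \<in> Trip"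
  obtain a e c where pe: "p = (a,e,c)" by (cases p)
  have I: "a \<in> I" "e \<in> I" "c \<in> I" using p pe by auto
  show "piB p \<in> Trip" "piB (piB p) = p" using I pe by auto
  show "alB p (check_zero (piB p)) = hat_zero p" "beB p (hat_zero (piB p)) = check_zero p"
    using I pe by (simp_all add: alB_simp beB_simp)
  fix g assume "check_mor (piB p) g"
  then show "hat_mor p (alB p g)" using I pe by (simp add: alB_simp hat_mor_def check_mor_def)
next
  fix p f assume p: "p \<in> Trip" and "hat_mor (piB p) f"
  obtain a e c where pe: "p = (a,e,c)" by (cases p)
  have I: "a \<in> I" "e \<in> I" "c \<in> I" using p pe by auto
  show "check_mor p (beB p f)" using I pe \<open>hat_mor (piB p) f\<close> by (simp add: beB_simp hat_mor_def check_mor_def)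
qed

text \<open>The zigzag identities make the component maps of \<open>A\<close> and \<open>B\<close> mutually inverse; hence
  \<open>A\<^sup>2 = B\<^sup>2 = 1\<close>.\<close>

lemma A_inv_h: assumes p: "p \<in> Trip" and f: "hat_mor p f" shows "alA p (beA (piA p) f) = f"
proof -
  obtain a e c where pe: "p = (a,e,c)" by (cases p)
  have I: "a \<in> I" "e \<in> I" "c \<in> I" using p pe by auto
  have fd: "dm f = ot (V a) (V e)" "cd f = V c" using f pe by (auto simp: hat_mor_def)
  let ?a' = "st a"
  have "alA p (beA (piA p) f) =
    cp (tn (d a) (idm (V c))) (tn (idm (V a)) (cp (tn (idm (V ?a')) f) (tn (b ?a') (idm (V e)))))"
    using I pe by (simp add: alA_simp beA_simp)
  also have "\<dots> = cp (tn (d a) (idm (V c))) (cp (tn (idm (V a)) (tn (idm (V ?a')) f)) (tn (idm (V a)) (tn (b ?a') (idm (V e)))))"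
    using I fd by (subst idm_tn_cp) simp_all
  also have "\<dots> = cp (cp (tn (d a) (idm (V c))) (tn (idm (V a)) (tn (idm (V ?a')) f))) (tn (idm (V a)) (tn (b ?a') (idm (V e))))"
    using I fd by (subst cp_assoc) simp_all
  also have "cp (tn (d a) (idm (V c))) (tn (idm (V a)) (tn (idm (V ?a')) f)) = tn (d a) f"
  proof -
    have "tn (cp (d a) (idm (ot (V a) (V ?a')))) (cp (idm (V c)) f) = cp (tn (d a) (idm (V c))) (tn (idm (ot (V a) (V ?a'))) f)"
      by (rule interchange) (use I fd in simp_all)
    then show ?thesis using I fd by (simp add: tn_idm_ot)
  qed
  also have "tn (d a) f = cp f (tn (d a) (idm (ot (V a) (V e))))"
    using slide2[of "d a" f] I fd by simp
  also have "cp (cp f (tn (d a) (idm (ot (V a) (V e))))) (tn (idm (V a)) (tn (b ?a') (idm (V e))))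
     = cp f (cp (tn (d a) (idm (ot (V a) (V e)))) (tn (idm (V a)) (tn (b ?a') (idm (V e)))))"
    using I fd by (subst cp_assoc) simp_all
  also have "cp (tn (d a) (idm (ot (V a) (V e)))) (tn (idm (V a)) (tn (b ?a') (idm (V e)))) = idm (ot (V a) (V e))"
  proof -
    have "tn (cp (tn (d a) (idm (V a))) (tn (idm (V a)) (b ?a'))) (idm (V e)) =
       cp (tn (tn (d a) (idm (V a))) (idm (V e))) (tn (tn (idm (V a)) (b ?a')) (idm (V e)))"
      by (rule cp_tn_idm) (use I in simp)
    then show ?thesis using zig2[OF I(1)] by simp
  qed
  finally show ?thesis using fd by simp
qed

lemma A_inv_c: assumes p: "p \<in> Trip" and g: "check_mor p g" shows "beA p (alA (piA p) g) = g"
proof -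
  obtain a e c where pe: "p = (a,e,c)" by (cases p)
  have I: "a \<in> I" "e \<in> I" "c \<in> I" using p pe by auto
  have gd: "dm g = V c" "cd g = ot (V a) (V e)" using g pe by (auto simp: check_mor_def)
  let ?a' = "st a"
  have "beA p (alA (piA p) g) =
    cp (tn (idm (V a)) (cp (tn (d ?a') (idm (V e))) (tn (idm (V ?a')) g))) (tn (b a) (idm (V c)))"
    using I pe by (simp add: alA_simp beA_simp)
  also have "\<dots> = cp (cp (tn (idm (V a)) (tn (d ?a') (idm (V e)))) (tn (idm (V a)) (tn (idm (V ?a')) g))) (tn (b a) (idm (V c)))"
    using I gd by (subst idm_tn_cp) simp_all
  also have "\<dots> = cp (tn (idm (V a)) (tn (d ?a') (idm (V e)))) (cp (tn (idm (V a)) (tn (idm (V ?a')) g)) (tn (b a) (idm (V c))))"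
    using I gd by (subst cp_assoc) simp_all
  also have "cp (tn (idm (V a)) (tn (idm (V ?a')) g)) (tn (b a) (idm (V c))) = tn (b a) g"
  proof -
    have "tn (cp (idm (ot (V a) (V ?a'))) (b a)) (cp g (idm (V c))) = cp (tn (idm (ot (V a) (V ?a'))) g) (tn (b a) (idm (V c)))"
      by (rule interchange) (use I gd in simp_all)
    then show ?thesis using I gd by (simp add: tn_idm_ot)
  qed
  also have "tn (b a) g = cp (tn (b a) (idm (ot (V a) (V e)))) g"
    using slide1[of "b a" g] I gd by simp
  also have "cp (tn (idm (V a)) (tn (d ?a') (idm (V e)))) (cp (tn (b a) (idm (ot (V a) (V e)))) g)
     = cp (cp (tn (idm (V a)) (tn (d ?a') (idm (V e)))) (tn (b a) (idm (ot (V a) (V e))))) g"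
    using I gd by (subst cp_assoc) simp_all
  also have "cp (tn (idm (V a)) (tn (d ?a') (idm (V e)))) (tn (b a) (idm (ot (V a) (V e)))) = idm (ot (V a) (V e))"
  proof -
    have "tn (cp (tn (idm (V a)) (d ?a')) (tn (b a) (idm (V a)))) (idm (V e)) =
       cp (tn (tn (idm (V a)) (d ?a')) (idm (V e))) (tn (tn (b a) (idm (V a))) (idm (V e)))"
      by (rule cp_tn_idm) (use I in simp)
    then show ?thesis using zig1[OF I(1)] I by simp
  qed
  finally show ?thesis using gd by simp
qed

lemma B_inv_h: assumes p: "p \<in> Trip" and f: "hat_mor p f" shows "alB p (beB (piB p) f) = f"
proof -
  obtain a e c where pe: "p = (a,e,c)" by (cases p)
  have I: "a \<in> I" "e \<in> I" "c \<in> I" using p pe by auto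
  have fd: "dm f = ot (V a) (V e)" "cd f = V c" using f pe by (auto simp: hat_mor_def)
  let ?e' = "st e"
  have "alB p (beB (piB p) f) =
    cp (tn (idm (V c)) (d ?e')) (tn (cp (tn f (idm (V ?e'))) (tn (idm (V a)) (b e))) (idm (V e)))"
    using I pe by (simp add: alB_simp beB_simp)
  also have "\<dots> = cp (tn (idm (V c)) (d ?e')) (cp (tn (tn f (idm (V ?e'))) (idm (V e))) (tn (tn (idm (V a)) (b e)) (idm (V e))))"
    using I fd by (subst cp_tn_idm) simp_all
  also have "\<dots> = cp (tn (idm (V c)) (d ?e')) (cp (tn f (idm (ot (V ?e') (V e)))) (tn (idm (V a)) (tn (b e) (idm (V e)))))"
    by simp
  also have "\<dots> = cp (cp (tn (idm (V c)) (d ?e')) (tn f (idm (ot (V ?e') (V e))))) (tn (idm (V a)) (tn (b e) (idm (V e))))"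
    using I fd by (subst cp_assoc) simp_all
  also have "cp (tn (idm (V c)) (d ?e')) (tn f (idm (ot (V ?e') (V e)))) = tn f (d ?e')"
  proof -
    have "tn (cp (idm (V c)) f) (cp (d ?e') (idm (ot (V ?e') (V e)))) = cp (tn (idm (V c)) (d ?e')) (tn f (idm (ot (V ?e') (V e))))"
      by (rule interchange) (use I fd in simp_all)
    then show ?thesis using I fd by simp
  qed
  also have "tn f (d ?e') = cp f (tn (idm (ot (V a) (V e))) (d ?e'))"
    using slide1[of f "d ?e'"] I fd by simp
  also have "cp (cp f (tn (idm (ot (V a) (V e))) (d ?e'))) (tn (idm (V a)) (tn (b e) (idm (V e))))
     = cp f (cp (tn (idm (ot (V a) (V e))) (d ?e')) (tn (idm (V a)) (tn (b e) (idm (V e)))))"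
    using I fd by (subst cp_assoc) simp_all
  also have "cp (tn (idm (ot (V a) (V e))) (d ?e')) (tn (idm (V a)) (tn (b e) (idm (V e)))) = idm (ot (V a) (V e))"
  proof -
    have "tn (idm (V a)) (cp (tn (idm (V e)) (d ?e')) (tn (b e) (idm (V e)))) =
       cp (tn (idm (V a)) (tn (idm (V e)) (d ?e'))) (tn (idm (V a)) (tn (b e) (idm (V e))))"
      by (rule idm_tn_cp) (use I in simp)
    then show ?thesis unfolding tn_idm_ot using zig1[OF I(2)] I by simp
  qed
  finally show ?thesis using fd by simp
qed

lemma B_inv_c: assumes p: "p \<in> Trip" and g: "check_mor p g" shows "beB p (alB (piB p) g) = g"
proof -
  obtain a e c where pe: "p = (a,e,c)" by (cases p)
  have I: "a \<in> I" "e \<in> I" "c \<in> I" using p pe by auto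
  have gd: "dm g = V c" "cd g = ot (V a) (V e)" using g pe by (auto simp: check_mor_def)
  let ?e' = "st e"
  have "beB p (alB (piB p) g) =
    cp (tn (cp (tn (idm (V a)) (d e)) (tn g (idm (V ?e')))) (idm (V e))) (tn (idm (V c)) (b ?e'))"
    using I pe by (simp add: alB_simp beB_simp)
  also have "\<dots> = cp (cp (tn (tn (idm (V a)) (d e)) (idm (V e))) (tn (tn g (idm (V ?e'))) (idm (V e)))) (tn (idm (V c)) (b ?e'))"
    using I gd by (subst cp_tn_idm) simp_all
  also have "\<dots> = cp (cp (tn (idm (V a)) (tn (d e) (idm (V e)))) (tn g (idm (ot (V ?e') (V e))))) (tn (idm (V c)) (b ?e'))"
    by simp
  also have "\<dots> = cp (tn (idm (V a)) (tn (d e) (idm (V e)))) (cp (tn g (idm (ot (V ?e') (V e)))) (tn (idm (V c)) (b ?e')))"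
    using I gd by (subst cp_assoc) simp_all
  also have "cp (tn g (idm (ot (V ?e') (V e)))) (tn (idm (V c)) (b ?e')) = tn g (b ?e')"
  proof -
    have "tn (cp g (idm (V c))) (cp (idm (ot (V ?e') (V e))) (b ?e')) = cp (tn g (idm (ot (V ?e') (V e)))) (tn (idm (V c)) (b ?e'))"
      by (rule interchange) (use I gd in simp_all)
    then show ?thesis using I gd by simp
  qed
  also have "tn g (b ?e') = cp (tn (idm (ot (V a) (V e))) (b ?e')) g"
    using slide2[of g "b ?e'"] I gd by simp
  also have "cp (tn (idm (V a)) (tn (d e) (idm (V e)))) (cp (tn (idm (ot (V a) (V e))) (b ?e')) g)
     = cp (cp (tn (idm (V a)) (tn (d e) (idm (V e)))) (tn (idm (ot (V a) (V e))) (b ?e'))) g"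
    using I gd by (subst cp_assoc) simp_all
  also have "cp (tn (idm (V a)) (tn (d e) (idm (V e)))) (tn (idm (ot (V a) (V e))) (b ?e')) = idm (ot (V a) (V e))"
  proof -
    have "tn (idm (V a)) (cp (tn (d e) (idm (V e))) (tn (idm (V e)) (b ?e'))) =
       cp (tn (idm (V a)) (tn (d e) (idm (V e)))) (tn (idm (V a)) (tn (idm (V e)) (b ?e')))"
      by (rule idm_tn_cp) (use I in simp)
    then show ?thesis unfolding tn_idm_ot using zig2[OF I(2)] I by simp
  qed
  finally show ?thesis using gd by simp
qed

lemma invol_A: "swap_invol piA alA beA" unfolding swap_invol_def using A_inv_h A_inv_c by blast
lemma invol_B: "swap_invol piB alB beB" unfolding swap_invol_def using B_inv_h B_inv_c by blast
subsection \<open>The transpose of \<open>ABA\<close>\<close>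

text \<open>For a simple object the two partial traces of a morphism \<open>W : \<one> \<rightarrow> V_c \<boxtimes> V_{c^*}\<close> agree:
  \<open>W\<close> is recovered from its left partial trace, hence is a scalar multiple of \<open>b_c\<close>.\<close>

lemma trace_recover:
  assumes c: "c \<in> I" and W: "dm W = un" "cd W = ot (V c) (V (st c))"
  shows "cp (tn (cp (tn (idm (V c)) (d (st c))) (tn W (idm (V c)))) (idm (V (st c)))) (b c) = W"
proof -
  let ?c' = "st c"
  have "tn (cp (tn (idm (V c)) (d ?c')) (tn W (idm (V c)))) (idm (V ?c')) =
     cp (tn (tn (idm (V c)) (d ?c')) (idm (V ?c'))) (tn (tn W (idm (V c))) (idm (V ?c')))"
    by (rule cp_tn_idm) (use c W in simp)
  also have "\<dots> = cp (tn (idm (V c)) (tn (d ?c') (idm (V ?c')))) (tn W (idm (ot (V c) (V ?c'))))"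
    by simp
  finally have e1: "cp (tn (cp (tn (idm (V c)) (d ?c')) (tn W (idm (V c)))) (idm (V ?c'))) (b c) =
     cp (cp (tn (idm (V c)) (tn (d ?c') (idm (V ?c')))) (tn W (idm (ot (V c) (V ?c'))))) (b c)" by simp
  also have "\<dots> = cp (tn (idm (V c)) (tn (d ?c') (idm (V ?c')))) (cp (tn W (idm (ot (V c) (V ?c')))) (b c))"
    using c W by (subst cp_assoc) simp_all
  also have "cp (tn W (idm (ot (V c) (V ?c')))) (b c) = tn W (b c)"
  proof -
    have "tn (cp W (idm un)) (cp (idm (ot (V c) (V ?c'))) (b c)) = cp (tn W (idm (ot (V c) (V ?c')))) (tn (idm un) (b c))"
      by (rule interchange) (use c W in simp_all)
    then show ?thesis using c W by simp
  qed
  also have "tn W (b c) = cp (tn (idm (ot (V c) (V ?c'))) (b c)) W"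
    using slide2[of W "b c"] c W by simp
  also have "cp (tn (idm (V c)) (tn (d ?c') (idm (V ?c')))) (cp (tn (idm (ot (V c) (V ?c'))) (b c)) W) =
      cp (cp (tn (idm (V c)) (tn (d ?c') (idm (V ?c')))) (tn (idm (ot (V c) (V ?c'))) (b c))) W"
    using c W by (subst cp_assoc) simp_all
  also have "cp (tn (idm (V c)) (tn (d ?c') (idm (V ?c')))) (tn (idm (ot (V c) (V ?c'))) (b c)) = idm (ot (V c) (V ?c'))"
  proof -
    have "tn (idm (V c)) (cp (tn (d ?c') (idm (V ?c'))) (tn (idm (V ?c')) (b c))) =
       cp (tn (idm (V c)) (tn (d ?c') (idm (V ?c')))) (tn (idm (V c)) (tn (idm (V ?c')) (b c)))"
      by (rule idm_tn_cp) (use c in simp)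
    then show ?thesis unfolding tn_idm_ot using zig2[of ?c'] c by simp
  qed
  finally show ?thesis using W by simp
qed

lemma trace_eq:
  assumes c: "c \<in> I" and W: "dm W = un" "cd W = ot (V c) (V (st c))"
  shows "scal C (V c) (cp (tn (idm (V c)) (d (st c))) (tn W (idm (V c)))) =
         scal C (V (st c)) (cp (tn (d (st c)) (idm (V (st c)))) (tn (idm (V (st c))) W))"
proof -
  let ?c' = "st c"
  let ?u = "cp (tn (idm (V c)) (d ?c')) (tn W (idm (V c)))"
  have ud: "dm ?u = V c" "cd ?u = V c" using c W by simp_all
  define l where "l = scal C (V c) ?u"
  have sl: "is_scalar l" unfolding l_def using scal_scalar[OF simpleV[OF c] ud] .
  have ul: "?u = tn l (idm (V c))" unfolding l_def using scal_prop(2)[OF simpleV[OF c] ud] .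
  have "W = cp (tn ?u (idm (V ?c'))) (b c)" using trace_recover[OF c W] by simp
  also have "\<dots> = cp (tn l (idm (ot (V c) (V ?c')))) (b c)"
    by (subst ul) simp
  also have "\<dots> = tn l (b c)" using cp_scalar_l[OF sl, of "b c" "idm (ot (V c) (V ?c'))"] c by simp
  finally have Wl: "W = tn l (b c)" .
  have "cp (tn (d ?c') (idm (V ?c'))) (tn (idm (V ?c')) W) = cp (tn (d ?c') (idm (V ?c'))) (tn l (tn (idm (V ?c')) (b c)))"
    using Wl tn_scalar_r[OF sl] by simp
  also have "\<dots> = tn l (cp (tn (d ?c') (idm (V ?c'))) (tn (idm (V ?c')) (b c)))"
    by (rule cp_scalar_r[OF sl]) (use c in simp)
  also have "cp (tn (d ?c') (idm (V ?c'))) (tn (idm (V ?c')) (b c)) = idm (V ?c')"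
    using zig2[of ?c'] c by simp
  finally have "cp (tn (d ?c') (idm (V ?c'))) (tn (idm (V ?c')) W) = tn l (idm (V ?c'))" .
  then show ?thesis using scal_tn_id[OF simpleV[OF st_I[OF c]] sl] by (simp add: l_def)
qed

text \<open>Component data of the braid words \<open>ABA\<close> (\<open>X\<close>) and \<open>BAB\<close> (\<open>Y\<close>); both move all three legs,
  so \<open>piX = piY\<close>, and \<open>beX\<close>, \<open>beY\<close> have closed forms.\<close>

definition piX where "piX p = piA (piB (piA p))"
definition alX where "alX p g = alA p (beB (piA p) (alA (piB (piA p)) g))"
definition beX where "beX p f = beA p (alB (piA p) (beA (piB (piA p)) f))"
definition piY where "piY p = piB (piA (piB p))"
definition alY where "alY p g = alB p (beA (piB p) (alB (piA (piB p)) g))"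
definition beY where "beY p f = beB p (alA (piB p) (beB (piA (piB p)) f))"

lemma piX_simp: "a \<in> I \<Longrightarrow> e \<in> I \<Longrightarrow> c \<in> I \<Longrightarrow> piX (a,e,c) = (st e, st a, st c)"
  and piY_simp: "a \<in> I \<Longrightarrow> e \<in> I \<Longrightarrow> c \<in> I \<Longrightarrow> piY (a,e,c) = (st e, st a, st c)"
  by (simp_all add: piX_def piY_def)

lemma beX_form:
  assumes I: "a \<in> I" "e \<in> I" "c \<in> I" and f: "dm f = ot (V (st e)) (V (st a))" "cd f = V (st c)"
  shows "beX (a,e,c) f = cp (tn (idm (ot (V a) (V e))) (d (st c)))
     (tn (cp (tn (idm (V a)) (tn (idm (V e)) f)) (cp (tn (idm (V a)) (tn (b e) (idm (V (st a))))) (b a))) (idm (V c)))"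
proof -
  let ?a' = "st a" and ?e' = "st e" and ?c' = "st c"
  let ?g = "cp (tn (idm (V e)) f) (tn (b e) (idm (V ?a')))"
  have gd: "dm ?g = V ?a'" "cd ?g = ot (V e) (V ?c')" using I f by simp_all
  have "beX (a,e,c) f = cp (tn (idm (V a)) (cp (tn (idm (V e)) (d ?c')) (tn ?g (idm (V c))))) (tn (b a) (idm (V c)))"
    using I by (simp add: beX_def alA_simp beA_simp alB_simp beB_simp)
  also have "\<dots> = cp (cp (tn (idm (V a)) (tn (idm (V e)) (d ?c'))) (tn (idm (V a)) (tn ?g (idm (V c))))) (tn (b a) (idm (V c)))"
    using I gd by (subst idm_tn_cp) simp_all
  also have "\<dots> = cp (tn (idm (V a)) (tn (idm (V e)) (d ?c'))) (cp (tn (idm (V a)) (tn ?g (idm (V c)))) (tn (b a) (idm (V c))))"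
    using I gd by (subst cp_assoc) simp_all
  also have "cp (tn (idm (V a)) (tn ?g (idm (V c)))) (tn (b a) (idm (V c))) = tn (cp (tn (idm (V a)) ?g) (b a)) (idm (V c))"
  proof -
    have "tn (cp (tn (idm (V a)) ?g) (b a)) (idm (V c)) = cp (tn (tn (idm (V a)) ?g) (idm (V c))) (tn (b a) (idm (V c)))"
      by (rule cp_tn_idm) (use I gd in simp)
    then show ?thesis by simp
  qed
  also have "tn (idm (V a)) ?g = cp (tn (idm (V a)) (tn (idm (V e)) f)) (tn (idm (V a)) (tn (b e) (idm (V ?a'))))"
    using I f by (subst idm_tn_cp) simp_all
  also have "cp (cp (tn (idm (V a)) (tn (idm (V e)) f)) (tn (idm (V a)) (tn (b e) (idm (V ?a'))))) (b a) =
     cp (tn (idm (V a)) (tn (idm (V e)) f)) (cp (tn (idm (V a)) (tn (b e) (idm (V ?a')))) (b a))"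
    using I f by (subst cp_assoc) simp_all
  finally show ?thesis by (simp add: tn_idm_ot)
qed

lemma beY_form:
  assumes I: "a \<in> I" "e \<in> I" "c \<in> I" and h: "dm h = ot (V a) (V e)" "cd h = V c"
  shows "beY (st e, st a, st c) h = cp (tn (d (st c)) (idm (ot (V (st e)) (V (st a)))))
     (tn (idm (V (st c))) (cp (tn h (idm (ot (V (st e)) (V (st a))))) (cp (tn (idm (V a)) (tn (b e) (idm (V (st a))))) (b a))))"
proof -
  let ?a' = "st a" and ?e' = "st e" and ?c' = "st c"
  let ?g = "cp (tn h (idm (V ?e'))) (tn (idm (V a)) (b e))"
  have gd: "dm ?g = V a" "cd ?g = ot (V c) (V ?e')" using I h by simp_all
  have "beY (?e', ?a', ?c') h = cp (tn (cp (tn (d ?c') (idm (V ?e'))) (tn (idm (V ?c')) ?g)) (idm (V ?a'))) (tn (idm (V ?c')) (b a))"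
    using I by (simp add: beY_def alA_simp beA_simp alB_simp beB_simp)
  also have "\<dots> = cp (cp (tn (tn (d ?c') (idm (V ?e'))) (idm (V ?a'))) (tn (tn (idm (V ?c')) ?g) (idm (V ?a')))) (tn (idm (V ?c')) (b a))"
    using I gd by (subst cp_tn_idm) simp_all
  also have "\<dots> = cp (cp (tn (d ?c') (idm (ot (V ?e') (V ?a')))) (tn (idm (V ?c')) (tn ?g (idm (V ?a'))))) (tn (idm (V ?c')) (b a))"
    by simp
  also have "\<dots> = cp (tn (d ?c') (idm (ot (V ?e') (V ?a')))) (cp (tn (idm (V ?c')) (tn ?g (idm (V ?a')))) (tn (idm (V ?c')) (b a)))"
    using I gd by (subst cp_assoc) simp_all
  also have "cp (tn (idm (V ?c')) (tn ?g (idm (V ?a')))) (tn (idm (V ?c')) (b a)) = tn (idm (V ?c')) (cp (tn ?g (idm (V ?a'))) (b a))"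
    by (rule idm_tn_cp[symmetric]) (use I gd in simp)
  also have "tn ?g (idm (V ?a')) = cp (tn h (idm (ot (V ?e') (V ?a')))) (tn (idm (V a)) (tn (b e) (idm (V ?a'))))"
  proof -
    have "tn ?g (idm (V ?a')) = cp (tn (tn h (idm (V ?e'))) (idm (V ?a'))) (tn (tn (idm (V a)) (b e)) (idm (V ?a')))"
      by (rule cp_tn_idm) (use I h in simp)
    then show ?thesis by simp
  qed
  also have "cp (cp (tn h (idm (ot (V ?e') (V ?a')))) (tn (idm (V a)) (tn (b e) (idm (V ?a'))))) (b a) =
     cp (tn h (idm (ot (V ?e') (V ?a')))) (cp (tn (idm (V a)) (tn (b e) (idm (V ?a')))) (b a))"
    using I h by (subst cp_assoc) simp_all
  finally show ?thesis .
qed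

text \<open>Componentwise, both pairings below are partial traces of
  the single morphism \<open>(h \<boxtimes> f) \<circ> K : \<one> \<rightarrow> V_c \<boxtimes> V_{c^*}\<close>, where \<open>K\<close> is the nested coevaluation
  \<open>\<one> \<rightarrow> V_a V_e V_{e^*} V_{a^*}\<close>; \<open>trace_eq\<close> then identifies them.\<close>

definition braid_unit :: "'i \<Rightarrow> 'i \<Rightarrow> 'm" where
  "braid_unit a e = cp (tn (idm (V a)) (tn (b e) (idm (V (st a))))) (b a)"

lemma pairing_beX:
  assumes I: "a \<in> I" "e \<in> I" "c \<in> I"
    and f: "dm f = ot (V (st e)) (V (st a))" "cd f = V (st c)"
    and h: "dm h = ot (V a) (V e)" "cd h = V c"
  shows "cp h (beX (a,e,c) f) = cp (tn (idm (V c)) (d (st c))) (tn (cp (tn h f) (braid_unit a e)) (idm (V c)))"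
proof -
  let ?c' = "st c"
  define F where "F = cp (tn (idm (V a)) (tn (idm (V e)) f)) (braid_unit a e)"
  have "cp h (beX (a,e,c) f) = cp h (cp (tn (idm (ot (V a) (V e))) (d ?c')) (tn F (idm (V c))))"
    using beX_form[OF I f] by (simp add: F_def braid_unit_def)
  also have "\<dots> = cp (cp h (tn (idm (ot (V a) (V e))) (d ?c'))) (tn F (idm (V c)))"
    using I h f by (subst cp_assoc) (simp_all add: F_def braid_unit_def)
  also have "cp h (tn (idm (ot (V a) (V e))) (d ?c')) = tn h (d ?c')"
    using slide1[of h "d ?c'"] I h by simp
  also have "tn h (d ?c') = cp (tn (idm (V c)) (d ?c')) (tn h (idm (ot (V ?c') (V c))))"
    using slide2[of h "d ?c'"] I h by simp
  also have "cp (cp (tn (idm (V c)) (d ?c')) (tn h (idm (ot (V ?c') (V c))))) (tn F (idm (V c))) =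
     cp (tn (idm (V c)) (d ?c')) (cp (tn h (idm (ot (V ?c') (V c)))) (tn F (idm (V c))))"
    using I h f by (subst cp_assoc) (simp_all add: F_def braid_unit_def)
  also have "cp (tn h (idm (ot (V ?c') (V c)))) (tn F (idm (V c))) = tn (cp (tn h (idm (V ?c'))) F) (idm (V c))"
    using cp_tn_idm[of F "tn h (idm (V ?c'))" "V c"] I h f by (simp add: F_def braid_unit_def)
  also have "cp (tn h (idm (V ?c'))) F = cp (tn h f) (braid_unit a e)"
    unfolding F_def tn_idm_ot[symmetric] using slide1_cp[of "braid_unit a e" h f] I h f by (simp add: braid_unit_def)
  finally show ?thesis .
qed

lemma pairing_beY:
  assumes I: "a \<in> I" "e \<in> I" "c \<in> I"
    and f: "dm f = ot (V (st e)) (V (st a))" "cd f = V (st c)"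
    and h: "dm h = ot (V a) (V e)" "cd h = V c"
  shows "cp f (beY (st e, st a, st c) h) = cp (tn (d (st c)) (idm (V (st c)))) (tn (idm (V (st c))) (cp (tn h f) (braid_unit a e)))"
proof -
  let ?a' = "st a" and ?e' = "st e" and ?c' = "st c"
  define G where "G = cp (tn h (idm (ot (V (st e)) (V (st a))))) (braid_unit a e)"
  have "cp f (beY (?e', ?a', ?c') h) = cp f (cp (tn (d ?c') (idm (ot (V ?e') (V ?a')))) (tn (idm (V ?c')) G))"
    using beY_form[OF I h] by (simp add: G_def braid_unit_def)
  also have "\<dots> = cp (cp f (tn (d ?c') (idm (ot (V ?e') (V ?a'))))) (tn (idm (V ?c')) G)"
    using I f h by (subst cp_assoc) (simp_all add: G_def braid_unit_def)
  also have "cp f (tn (d ?c') (idm (ot (V ?e') (V ?a')))) = tn (d ?c') f"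
    using slide2[of "d ?c'" f] I f by simp
  also have "tn (d ?c') f = cp (tn (d ?c') (idm (V ?c'))) (tn (idm (ot (V ?c') (V c))) f)"
    using slide1[of "d ?c'" f] I f by simp
  also have "cp (cp (tn (d ?c') (idm (V ?c'))) (tn (idm (ot (V ?c') (V c))) f)) (tn (idm (V ?c')) G) =
     cp (tn (d ?c') (idm (V ?c'))) (cp (tn (idm (ot (V ?c') (V c))) f) (tn (idm (V ?c')) G))"
    using I f h by (subst cp_assoc) (simp_all add: G_def braid_unit_def)
  also have "cp (tn (idm (ot (V ?c') (V c))) f) (tn (idm (V ?c')) G) = tn (idm (V ?c')) (cp (tn (idm (V c)) f) G)"
    unfolding tn_idm_ot by (rule idm_tn_cp[symmetric]) (use I f h in \<open>simp add: G_def braid_unit_def\<close>)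
  also have "cp (tn (idm (V c)) f) G = cp (tn h f) (braid_unit a e)"
    unfolding G_def using slide2_cp[of "braid_unit a e" h f] I h f by (simp add: braid_unit_def)
  finally show ?thesis .
qed

lemma braid_pairing:
  assumes I: "a \<in> I" "e \<in> I" "c \<in> I"
    and f: "dm f = ot (V (st e)) (V (st a))" "cd f = V (st c)"
    and h: "dm h = ot (V a) (V e)" "cd h = V c"
  shows "scal C (V c) (cp h (beX (a,e,c) f)) = scal C (V (st c)) (cp f (beY (st e, st a, st c) h))"
  unfolding pairing_beX[OF I f h] pairing_beY[OF I f h]
  by (rule trace_eq) (use I f h in \<open>simp_all add: braid_unit_def\<close>)

lemma X_def': "piX = (\<lambda>p. piA (piB (piA p)))" "alX = (\<lambda>p g. alA p (beB (piA p) (alA (piB (piA p)) g)))"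
   "beX = (\<lambda>p f. beA p (alB (piA p) (beA (piB (piA p)) f)))"
  by (auto simp: piX_def alX_def beX_def intro!: ext)
lemma Y_def': "piY = (\<lambda>p. piB (piA (piB p)))" "alY = (\<lambda>p g. alB p (beA (piB p) (alB (piA (piB p)) g)))"
   "beY = (\<lambda>p f. beB p (alA (piB p) (beB (piA (piB p)) f)))"
  by (auto simp: piY_def alY_def beY_def intro!: ext)

lemma swap_X: "is_swap piX alX beX" unfolding X_def' by (rule swap_comp3[OF swap_A swap_B])
lemma swap_Y: "is_swap piY alY beY" unfolding Y_def' by (rule swap_comp3[OF swap_B swap_A])
lemma invol_X: "swap_invol piX alX beX" unfolding X_def' by (rule invol_comp3[OF swap_A swap_B invol_A invol_B])
lemma invol_Y: "swap_invol piY alY beY" unfolding Y_def' by (rule invol_comp3[OF swap_B swap_A invol_B invol_A])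

lemma piXY: assumes "p \<in> Trip" shows "piY p = piX p"
proof -
  obtain a e c where pe: "p = (a,e,c)" by (cases p)
  then have "a \<in> I" "e \<in> I" "c \<in> I" using assms by auto
  then show ?thesis using pe by (simp add: piX_simp piY_simp)
qed

lemma swap_cong_pi: assumes sw: "is_swap pi al be" and e: "\<And>p. p \<in> Trip \<Longrightarrow> pi p = pi' p" shows "is_swap pi' al be"
proof -
  have A: "\<forall>p\<in>Trip. pi p \<in> Trip \<and> pi (pi p) = p" and B: "\<forall>p\<in>Trip. \<forall>g. check_mor (pi p) g \<longrightarrow> hat_mor p (al p g)"
    and C: "\<forall>p\<in>Trip. \<forall>f. hat_mor (pi p) f \<longrightarrow> check_mor p (be p f)"
    and D: "\<forall>p\<in>Trip. al p (check_zero (pi p)) = hat_zero p \<and> be p (hat_zero (pi p)) = check_zero p"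
    using sw unfolding is_swap_def by blast+
  have A': "\<forall>p\<in>Trip. pi' p \<in> Trip \<and> pi' (pi' p) = p"
  proof
    fix p assume p: "p \<in> Trip"
    then have "pi' p = pi p" using e by simp
    moreover have "pi p \<in> Trip" using A p by blast
    moreover have "pi' (pi p) = pi (pi p)" using e[OF \<open>pi p \<in> Trip\<close>] by simp
    ultimately show "pi' p \<in> Trip \<and> pi' (pi' p) = p" using A p by metis
  qed
  have B': "\<forall>p\<in>Trip. \<forall>g. check_mor (pi' p) g \<longrightarrow> hat_mor p (al p g)" using B e by simp
  have C': "\<forall>p\<in>Trip. \<forall>f. hat_mor (pi' p) f \<longrightarrow> check_mor p (be p f)" using C e by simp
  have D': "\<forall>p\<in>Trip. al p (check_zero (pi' p)) = hat_zero p \<and> be p (hat_zero (pi' p)) = check_zero p" using D e by simp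
  show ?thesis unfolding is_swap_def using A' B' C' D' by blast
qed

lemma invol_cong_pi: assumes iv: "swap_invol pi al be" and e: "\<And>p. p \<in> Trip \<Longrightarrow> pi p = pi' p" shows "swap_invol pi' al be"
proof -
  have "\<forall>p\<in>Trip. \<forall>f. hat_mor p f \<longrightarrow> al p (be (pi p) f) = f" "\<forall>p\<in>Trip. \<forall>g. check_mor p g \<longrightarrow> be p (al (pi p) g) = g"
    using iv unfolding swap_invol_def by blast+
  then show ?thesis unfolding swap_invol_def using e by simp
qed

lemma swap_Y': "is_swap piX alY beY" using swap_cong_pi[OF swap_Y piXY] .
lemma invol_Y': "swap_invol piX alY beY" using invol_cong_pi[OF invol_Y piXY] .

lemma braid_pairing_swap: "\<forall>p\<in>Trip. \<forall>f h. hat_mor (piX p) f \<longrightarrow> hat_mor p h \<longrightarrow> sc p (cp h (beX p f)) = sc (piX p) (cp f (beY (piX p) h))"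
proof (intro ballI allI impI)
  fix p f h assume p: "p \<in> Trip" and f: "hat_mor (piX p) f" and h: "hat_mor p h"
  obtain a e c where pe: "p = (a,e,c)" by (cases p)
  have I: "a \<in> I" "e \<in> I" "c \<in> I" using p pe by auto
  show "sc p (cp h (beX p f)) = sc (piX p) (cp f (beY (piX p) h))"
    using braid_pairing[OF I] f h I pe by (simp add: piX_simp hat_mor_def)
qed

lemma X_transpose: "x \<in> H \<Longrightarrow> y \<in> H \<Longrightarrow> fm (swap_op piX alX beX x) y = fm x (swap_op piX alY beY y)"
  by (rule swap_op_transpose1[OF swap_X swap_Y' invol_X invol_Y' braid_pairing_swap])

subsection \<open>Duality between \<open>H^k_{ij}\<close> and \<open>H^{ij}_k\<close>\<close>

text \<open>The proof
  uses condition (4) of a Psi-system: when some \<open>H^{ij}_k\<close> is nonzero, \<open>Id_{V_i \<boxtimes> V_j}\<close>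
  decomposes as \<open>\<Sum> x \<circ> y\<close>, and the summands with target \<open>V_k\<close> form a pair of dual bases.\<close>

definition nonzero_fusion :: "'i \<Rightarrow> 'i \<Rightarrow> bool" where
  "nonzero_fusion i j \<longleftrightarrow> (\<exists>k\<in>I. \<exists>g. check_mor (i,j,k) g \<and> g \<noteq> check_zero (i,j,k))"

definition is_id_decomp :: "'i \<Rightarrow> 'i \<Rightarrow> ('i \<times> 'm \<times> 'm) list \<Rightarrow> bool" where
  "is_id_decomp i j ts \<longleftrightarrow> (\<forall>(k,x,y)\<in>set ts. k \<in> I \<and> check_mor (i,j,k) x \<and> hat_mor (i,j,k) y) \<and>
     lsum (ot (V i) (V j)) (ot (V i) (V j)) (\<lambda>(k,x,y). cp x y) ts = idm (ot (V i) (V j))"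

lemma exists_id_decomp:
  assumes I: "i \<in> I" "j \<in> I" and fusion: "nonzero_fusion i j"
  shows "\<exists>ts. is_id_decomp i j ts"
proof -
  obtain k g where k: "k \<in> I" and g: "check_mor (i,j,k) g" "g \<noteq> check_zero (i,j,k)"
    using fusion unfolding nonzero_fusion_def by blast
  have "\<exists>ts. (\<forall>(k,x,y)\<in>set ts. k \<in> I \<and> dm x = V k \<and> cd x = ot (V i) (V j) \<and> dm y = ot (V i) (V j) \<and> cd y = V k) \<and>
      foldr (\<lambda>(k,x,y) acc. ad (cp x y) acc) ts (zr (ot (V i) (V j)) (ot (V i) (V j))) = idm (ot (V i) (V j))"
    by (rule psi_completeness[OF I k]) (use g in \<open>simp_all add: check_mor_def\<close>)
  then obtain ts where
    ts: "\<forall>(k,x,y)\<in>set ts. k \<in> I \<and> dm x = V k \<and> cd x = ot (V i) (V j) \<and> dm y = ot (V i) (V j) \<and> cd y = V k"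
    and sum: "foldr (\<lambda>(k,x,y) acc. ad (cp x y) acc) ts (zr (ot (V i) (V j)) (ot (V i) (V j))) = idm (ot (V i) (V j))"
    by blast
  have "is_id_decomp i j ts"
    unfolding is_id_decomp_def lsum_def using ts sum foldr_lsum[of ts]
    by (auto simp: check_mor_def hat_mor_def)
  then show ?thesis ..
qed

definition id_decomp :: "'i \<Rightarrow> 'i \<Rightarrow> ('i \<times> 'm \<times> 'm) list" where
  "id_decomp i j = (SOME ts. is_id_decomp i j ts)"

lemma id_decomp: "i \<in> I \<Longrightarrow> j \<in> I \<Longrightarrow> nonzero_fusion i j \<Longrightarrow> is_id_decomp i j (id_decomp i j)"
  unfolding id_decomp_def by (rule someI_ex) (rule exists_id_decomp)

definition dual_basis :: "'i triple \<Rightarrow> ('m \<times> 'm) list" where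
  "dual_basis p = (case p of (i,j,k) \<Rightarrow> if nonzero_fusion i j
      then map (\<lambda>(k',x,y). (x,y)) (filter (\<lambda>(k',x,y). k' = k) (id_decomp i j)) else [])"

lemma dual_basis_mor:
  assumes "p \<in> Trip" "t \<in> set (dual_basis p)" shows "check_mor p (fst t) \<and> hat_mor p (snd t)"
proof -
  obtain i j k where p: "p = (i,j,k)" by (cases p)
  show ?thesis
    using assms id_decomp[of i j] unfolding p dual_basis_def is_id_decomp_def
    by (auto split: if_splits)
qed

text \<open>Composing one summand \<open>x \<circ> y\<close> of the decomposition (through \<open>V_{k'}\<close>) with morphisms through
  \<open>V_k\<close>: by simplicity and orthogonality only \<open>k' = k\<close> contributes, by a scalar.\<close>

lemma hat_through_summand:
  assumes p: "(i,j,k) \<in> Trip" and k': "k' \<in> I"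
    and x: "check_mor (i,j,k') x" and y: "hat_mor (i,j,k') y" and f: "hat_mor (i,j,k) f"
  shows "cp f (cp x y) = (if k' = k then tn (sc (i,j,k) (cp f x)) y else zr (ot (V i) (V j)) (V k))"
proof (cases "k' = k")
  case True
  have V: "simple_obj C (V k)" using p simpleV by simp
  have "cp f x = tn (sc (i,j,k) (cp f x)) (idm (V k))"
    using scal_prop(2)[OF V, of "cp f x"] x f True by (simp add: check_mor_def hat_mor_def)
  then have "cp f (cp x y) = cp (tn (sc (i,j,k) (cp f x)) (idm (V k))) y"
    using x y f by (simp add: cp_assoc check_mor_def hat_mor_def)
  also have "\<dots> = tn (sc (i,j,k) (cp f x)) y"
    using cp_scalar_l scal_scalar[OF V] x y f True by (simp add: check_mor_def hat_mor_def)
  finally show ?thesis using True by simp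
next
  case False
  have "cp f x = zr (V k') (V k)" using orth[OF k' _ False] p x f by (simp add: check_mor_def hat_mor_def)
  then show ?thesis using False x y f by (simp add: cp_assoc check_mor_def hat_mor_def)
qed

lemma check_through_summand:
  assumes p: "(i,j,k) \<in> Trip" and k': "k' \<in> I"
    and x: "check_mor (i,j,k') x" and y: "hat_mor (i,j,k') y" and g: "check_mor (i,j,k) g"
  shows "cp (cp x y) g = (if k' = k then tn (sc (i,j,k) (cp y g)) x else zr (V k) (ot (V i) (V j)))"
proof (cases "k' = k")
  case True
  have V: "simple_obj C (V k)" using p simpleV by simp
  have "cp y g = tn (sc (i,j,k) (cp y g)) (idm (V k))"
    using scal_prop(2)[OF V, of "cp y g"] y g True by (simp add: check_mor_def hat_mor_def)
  then have "cp (cp x y) g = cp x (tn (sc (i,j,k) (cp y g)) (idm (V k)))"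
    using x y g by (simp add: cp_assoc check_mor_def hat_mor_def)
  also have "\<dots> = tn (sc (i,j,k) (cp y g)) x"
    using cp_scalar_r scal_scalar[OF V] x y g True by (simp add: check_mor_def hat_mor_def)
  finally show ?thesis using True by simp
next
  case False
  have "cp y g = zr (V k) (V k')" using orth[OF _ k'] False p y g by (simp add: check_mor_def hat_mor_def)
  then show ?thesis using False x y g by (simp add: cp_assoc[symmetric] check_mor_def hat_mor_def)
qed

text \<open>Every \<open>g \<in> H^{ij}_k\<close> is expanded in the dual basis.  Without fusion \<open>H^{ij}_k = 0\<close> by definition.\<close>

lemma check_expansion:
  assumes p: "p \<in> Trip" and g: "check_mor p g"
  shows "g = lsum (obj_k p) (obj_ij p) (\<lambda>t. tn (sc p (cp (snd t) g)) (fst t)) (dual_basis p)"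
proof -
  obtain i j k where pe: "p = (i,j,k)" by (cases p)
  have I: "i \<in> I" "j \<in> I" "k \<in> I" using p pe by auto
  show ?thesis
  proof (cases "nonzero_fusion i j")
    case False
    then have "g = check_zero p" using g I pe unfolding nonzero_fusion_def by auto
    then show ?thesis using False pe by (simp add: dual_basis_def)
  next
    case True
    let ?O = "ot (V i) (V j)" and ?ts = "id_decomp i j" and ?P = "\<lambda>(k',x,y). k' = k"
    have D: "\<forall>(k',x,y)\<in>set ?ts. k' \<in> I \<and> check_mor (i,j,k') x \<and> hat_mor (i,j,k') y"
      "lsum ?O ?O (\<lambda>(k,x,y). cp x y) ?ts = idm ?O"
      using id_decomp[OF I(1,2) True] unfolding is_id_decomp_def by blast+
    have ty: "\<forall>t\<in>set ?ts. dm ((\<lambda>(k,x,y). cp x y) t) = ?O \<and> cd ((\<lambda>(k,x,y). cp x y) t) = ?O"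
      using D(1) by (auto simp: check_mor_def hat_mor_def)
    have summand: "cp ((\<lambda>(k,x,y). cp x y) t) g = (\<lambda>(k',x,y). if k' = k then tn (sc p (cp y g)) x else zr (V k) ?O) t"
      if "t \<in> set ?ts" for t
    proof -
      obtain k' x y where t: "t = (k',x,y)" by (cases t)
      then have "k' \<in> I" "check_mor (i,j,k') x" "hat_mor (i,j,k') y" using that D(1) by auto
      then show ?thesis using check_through_summand[OF p[unfolded pe]] g pe t by simp
    qed
    have "g = cp (lsum ?O ?O (\<lambda>(k,x,y). cp x y) ?ts) g" using D(2) g pe by (simp add: check_mor_def)
    also have "\<dots> = lsum (V k) ?O (\<lambda>t. cp ((\<lambda>(k,x,y). cp x y) t) g) ?ts"
      using lsum_cp_r[OF ty, of g] g pe by (simp add: check_mor_def)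
    also have "\<dots> = lsum (V k) ?O (\<lambda>t. cp ((\<lambda>(k,x,y). cp x y) t) g) (filter ?P ?ts)"
    proof (rule lsum_filter[symmetric])
      show "\<forall>t\<in>set ?ts. dm (cp ((\<lambda>(k,x,y). cp x y) t) g) = V k \<and> cd (cp ((\<lambda>(k,x,y). cp x y) t) g) = ?O"
        using ty g pe by (simp add: check_mor_def)
      show "\<forall>t\<in>set ?ts. \<not> ?P t \<longrightarrow> cp ((\<lambda>(k,x,y). cp x y) t) g = zr (V k) ?O"
        using summand by auto
    qed
    also have "\<dots> = lsum (V k) ?O (\<lambda>(k',x,y). tn (sc p (cp y g)) x) (filter ?P ?ts)"
      by (rule lsum_cong) (use summand in auto)
    finally show ?thesis using True pe by (simp add: dual_basis_def lsum_map split_def)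
  qed
qed

lemma nonzero_check_gives_nonzero_hat:
  assumes p: "p \<in> Trip" and g: "check_mor p g" "g \<noteq> check_zero p"
  shows "\<exists>y. hat_mor p y \<and> y \<noteq> hat_zero p"
proof -
  have "lsum (obj_k p) (obj_ij p) (\<lambda>t. tn (sc p (cp (snd t) g)) (fst t)) (dual_basis p) \<noteq> check_zero p"
    using check_expansion[OF p g(1)] g(2) by simp
  then obtain t where t: "t \<in> set (dual_basis p)" and nz: "tn (sc p (cp (snd t) g)) (fst t) \<noteq> check_zero p"
    using lsum_nz by blast
  have y: "hat_mor p (snd t)" using dual_basis_mor[OF p t] by blast
  have "snd t \<noteq> hat_zero p"
  proof
    assume "snd t = hat_zero p"
    then show False
      using nz g(1) dual_basis_mor[OF p t] scal_zr[OF simple_obj_k[OF p]]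
      by (simp add: check_mor_def hat_mor_def)
  qed
  then show ?thesis using y by blast
qed

text \<open>The component maps of \<open>A\<close> are injective, so they preserve nonvanishing.\<close>

lemma beA_nonzero:
  assumes p: "p \<in> Trip" and f: "hat_mor (piA p) f" "f \<noteq> hat_zero (piA p)"
  shows "check_mor p (beA p f) \<and> beA p f \<noteq> check_zero p"
proof
  show "check_mor p (beA p f)" using swap_A p f(1) unfolding is_swap_def by blast
  have q: "piA p \<in> Trip" "piA (piA p) = p" using swap_pi[OF swap_A p] swap_pipi[OF swap_A p] by auto
  show "beA p f \<noteq> check_zero p"
  proof
    assume "beA p f = check_zero p"
    then have "f = alA (piA p) (check_zero (piA (piA p)))" using A_inv_h[OF q(1) f(1)] q(2) by simp
    also have "\<dots> = hat_zero (piA p)" using swap_zero[OF swap_A q(1)] by simp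
    finally show False using f(2) by simp
  qed
qed

text \<open>If \<open>H^{ij}_k = 0\<close> for all \<open>k\<close>, then also \<open>H^k_{ij} = 0\<close>: a nonzero \<open>f \<in> H^k_{ij}\<close> would be
  carried by \<open>A\<close> to \<open>H^{i^* k}_j\<close>, paired with a nonzero element of \<open>H^j_{i^* k}\<close>, and carried back
  by \<open>A\<close> to a nonzero element of \<open>H^{ij}_k\<close>.\<close>

lemma hat_vanishes_without_fusion:
  assumes p: "(i,j,k) \<in> Trip" and no_fusion: "\<not> nonzero_fusion i j" and f: "hat_mor (i,j,k) f"
  shows "f = hat_zero (i,j,k)"
proof (rule ccontr)
  let ?p = "(i,j,k)" and ?q = "piA (i,j,k)"
  assume "f \<noteq> hat_zero ?p"
  moreover have q: "?q \<in> Trip" "piA ?q = ?p" using p by auto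
  ultimately have "check_mor ?q (beA ?q f) \<and> beA ?q f \<noteq> check_zero ?q"
    using beA_nonzero[of ?q f] f by simp
  then obtain y where "hat_mor ?q y" "y \<noteq> hat_zero ?q"
    using nonzero_check_gives_nonzero_hat[OF q(1)] by blast
  then have "check_mor ?p (beA ?p y) \<and> beA ?p y \<noteq> check_zero ?p"
    using beA_nonzero[OF p] by simp
  then show False using no_fusion p unfolding nonzero_fusion_def by auto
qed

lemma hat_expansion:
  assumes p: "p \<in> Trip" and f: "hat_mor p f"
  shows "f = lsum (obj_ij p) (obj_k p) (\<lambda>t. tn (sc p (cp f (fst t))) (snd t)) (dual_basis p)"
proof -
  obtain i j k where pe: "p = (i,j,k)" by (cases p)
  have I: "i \<in> I" "j \<in> I" "k \<in> I" using p pe by auto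
  show ?thesis
  proof (cases "nonzero_fusion i j")
    case False
    then show ?thesis using hat_vanishes_without_fusion[of i j k f] f p pe by (simp add: dual_basis_def)
  next
    case True
    let ?O = "ot (V i) (V j)" and ?ts = "id_decomp i j" and ?P = "\<lambda>(k',x,y). k' = k"
    have D: "\<forall>(k',x,y)\<in>set ?ts. k' \<in> I \<and> check_mor (i,j,k') x \<and> hat_mor (i,j,k') y"
      "lsum ?O ?O (\<lambda>(k,x,y). cp x y) ?ts = idm ?O"
      using id_decomp[OF I(1,2) True] unfolding is_id_decomp_def by blast+
    have ty: "\<forall>t\<in>set ?ts. dm ((\<lambda>(k,x,y). cp x y) t) = ?O \<and> cd ((\<lambda>(k,x,y). cp x y) t) = ?O"
      using D(1) by (auto simp: check_mor_def hat_mor_def)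
    have summand: "cp f ((\<lambda>(k,x,y). cp x y) t) = (\<lambda>(k',x,y). if k' = k then tn (sc p (cp f x)) y else zr ?O (V k)) t"
      if "t \<in> set ?ts" for t
    proof -
      obtain k' x y where t: "t = (k',x,y)" by (cases t)
      then have "k' \<in> I" "check_mor (i,j,k') x" "hat_mor (i,j,k') y" using that D(1) by auto
      then show ?thesis using hat_through_summand[OF p[unfolded pe]] f pe t by simp
    qed
    have "f = cp f (lsum ?O ?O (\<lambda>(k,x,y). cp x y) ?ts)" using D(2) f pe by (simp add: hat_mor_def)
    also have "\<dots> = lsum ?O (V k) (\<lambda>t. cp f ((\<lambda>(k,x,y). cp x y) t)) ?ts"
      using lsum_cp_l[OF ty, of f] f pe by (simp add: hat_mor_def)
    also have "\<dots> = lsum ?O (V k) (\<lambda>t. cp f ((\<lambda>(k,x,y). cp x y) t)) (filter ?P ?ts)"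
    proof (rule lsum_filter[symmetric])
      show "\<forall>t\<in>set ?ts. dm (cp f ((\<lambda>(k,x,y). cp x y) t)) = ?O \<and> cd (cp f ((\<lambda>(k,x,y). cp x y) t)) = V k"
        using ty f pe by (simp add: hat_mor_def)
      show "\<forall>t\<in>set ?ts. \<not> ?P t \<longrightarrow> cp f ((\<lambda>(k,x,y). cp x y) t) = zr ?O (V k)"
        using summand by auto
    qed
    also have "\<dots> = lsum ?O (V k) (\<lambda>(k',x,y). tn (sc p (cp f x)) y) (filter ?P ?ts)"
      by (rule lsum_cong) (use summand in auto)
    finally show ?thesis using True pe by (simp add: dual_basis_def lsum_map split_def)
  qed
qed

lemma hat_unique:
  assumes p: "p \<in> Trip" and f: "hat_mor p f" and f': "hat_mor p f'"
    and pairing: "\<And>g. check_mor p g \<Longrightarrow> sc p (cp f g) = sc p (cp f' g)"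
  shows "f = f'"
  using hat_expansion[OF p f] hat_expansion[OF p f'] pairing dual_basis_mor[OF p]
  by (metis (no_types, lifting) lsum_cong)

lemma check_unique:
  assumes p: "p \<in> Trip" and g: "check_mor p g" and g': "check_mor p g'"
    and pairing: "\<And>f. hat_mor p f \<Longrightarrow> sc p (cp f g) = sc p (cp f g')"
  shows "g = g'"
  using check_expansion[OF p g] check_expansion[OF p g'] pairing dual_basis_mor[OF p]
  by (metis (no_types, lifting) lsum_cong)

lemma hat_mor_closed: "hat_mor p f \<Longrightarrow> hat_mor p f' \<Longrightarrow> hat_mor p (ad f f')"
  "is_scalar s \<Longrightarrow> hat_mor p f \<Longrightarrow> hat_mor p (tn s f)"
  by (simp_all add: hat_mor_def)

lemma check_mor_closed: "check_mor p g \<Longrightarrow> check_mor p g' \<Longrightarrow> check_mor p (ad g g')"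
  "is_scalar s \<Longrightarrow> check_mor p g \<Longrightarrow> check_mor p (tn s g)"
  by (simp_all add: check_mor_def)

lemma pairing_functional_hat:
  assumes p: "p \<in> Trip" and g: "check_mor p g"
  shows "scalar_functional (hat_mor p) (\<lambda>f. sc p (cp f g))"
  unfolding scalar_functional_def using g
  by (auto simp: hat_mor_def check_mor_def sc_scalar[OF p] cp_ad_l cp_scalar_l
      scal_ad[OF simple_obj_k[OF p]] scal_tn[OF simple_obj_k[OF p]])

lemma pairing_functional_check:
  assumes p: "p \<in> Trip" and f: "hat_mor p f"
  shows "scalar_functional (check_mor p) (\<lambda>g. sc p (cp f g))"
  unfolding scalar_functional_def using f
  by (auto simp: hat_mor_def check_mor_def sc_scalar[OF p] cp_ad_r cp_scalar_r
      scal_ad[OF simple_obj_k[OF p]] scal_tn[OF simple_obj_k[OF p]])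

text \<open>Representability: every scalar functional on \<open>H^k_{ij}\<close> is pairing with an element of
  \<open>H^{ij}_k\<close>, namely \<open>g = \<Sum> \<phi>(y) x\<close> over the dual basis; and symmetrically.\<close>

lemma exists_rep_check:
  assumes p: "p \<in> Trip" and phi: "scalar_functional (hat_mor p) phi"
  shows "\<exists>g. check_mor p g \<and> (\<forall>f. hat_mor p f \<longrightarrow> sc p (cp f g) = phi f)"
proof (intro exI conjI allI impI)
  let ?B = "dual_basis p"
  let ?g = "lsum (obj_k p) (obj_ij p) (\<lambda>t. tn (phi (snd t)) (fst t)) ?B"
  have B: "\<forall>t\<in>set ?B. is_scalar (phi (snd t)) \<and> check_mor p (fst t)"
    using dual_basis_mor[OF p] phi unfolding scalar_functional_def by blast
  show "check_mor p ?g"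
    using B lsum_typ[of ?B "\<lambda>t. tn (phi (snd t)) (fst t)"] by (simp add: check_mor_def)
  fix f assume f: "hat_mor p f"
  have B': "\<forall>t\<in>set ?B. is_scalar (sc p (cp f (fst t))) \<and> hat_mor p (snd t)"
    using dual_basis_mor[OF p] pairing_functional_hat[OF p] f unfolding scalar_functional_def by blast
  have "sc p (cp f ?g) = lsum un un (\<lambda>t. cp (phi (snd t)) (sc p (cp f (fst t)))) ?B"
    by (rule scalar_functional_lsum[OF pairing_functional_check[OF p f]]) (use B in \<open>auto simp: check_mor_closed\<close>)
  also have "\<dots> = lsum un un (\<lambda>t. cp (sc p (cp f (fst t))) (phi (snd t))) ?B"
    by (rule lsum_cong) (use B B' in \<open>simp add: scalar_comm\<close>)
  also have "\<dots> = phi (lsum (obj_ij p) (obj_k p) (\<lambda>t. tn (sc p (cp f (fst t))) (snd t)) ?B)"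
    by (rule scalar_functional_lsum[OF phi, symmetric]) (use B' in \<open>auto simp: hat_mor_closed\<close>)
  also have "\<dots> = phi f" using hat_expansion[OF p f] by simp
  finally show "sc p (cp f ?g) = phi f" .
qed

lemma exists_rep_hat:
  assumes p: "p \<in> Trip" and ps: "scalar_functional (check_mor p) ps"
  shows "\<exists>f. hat_mor p f \<and> (\<forall>g. check_mor p g \<longrightarrow> sc p (cp f g) = ps g)"
proof (intro exI conjI allI impI)
  let ?B = "dual_basis p"
  let ?f = "lsum (obj_ij p) (obj_k p) (\<lambda>t. tn (ps (fst t)) (snd t)) ?B"
  have B: "\<forall>t\<in>set ?B. is_scalar (ps (fst t)) \<and> hat_mor p (snd t)"
    using dual_basis_mor[OF p] ps unfolding scalar_functional_def by blast
  show "hat_mor p ?f"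
    using B lsum_typ[of ?B "\<lambda>t. tn (ps (fst t)) (snd t)"] by (simp add: hat_mor_def)
  fix g assume g: "check_mor p g"
  have B': "\<forall>t\<in>set ?B. is_scalar (sc p (cp (snd t) g)) \<and> check_mor p (fst t)"
    using dual_basis_mor[OF p] pairing_functional_check[OF p] g unfolding scalar_functional_def by blast
  have "sc p (cp ?f g) = lsum un un (\<lambda>t. cp (ps (fst t)) (sc p (cp (snd t) g))) ?B"
    by (rule scalar_functional_lsum[OF pairing_functional_hat[OF p g]]) (use B in \<open>auto simp: hat_mor_closed\<close>)
  also have "\<dots> = lsum un un (\<lambda>t. cp (sc p (cp (snd t) g)) (ps (fst t))) ?B"
    by (rule lsum_cong) (use B B' in \<open>simp add: scalar_comm\<close>)
  also have "\<dots> = ps (lsum (obj_k p) (obj_ij p) (\<lambda>t. tn (sc p (cp (snd t) g)) (fst t)) ?B)"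
    by (rule scalar_functional_lsum[OF ps, symmetric]) (use B' in \<open>auto simp: check_mor_closed\<close>)
  also have "\<dots> = ps g" using check_expansion[OF p g] by simp
  finally show "sc p (cp ?f g) = ps g" .
qed

definition hat_linear where "hat_linear q q' F \<longleftrightarrow> (\<forall>f. hat_mor q f \<longrightarrow> check_mor q' (F f)) \<and>
   (\<forall>f f'. hat_mor q f \<longrightarrow> hat_mor q f' \<longrightarrow> F (ad f f') = ad (F f) (F f')) \<and>
   (\<forall>s f. is_scalar s \<longrightarrow> hat_mor q f \<longrightarrow> F (tn s f) = tn s (F f))"
definition check_linear where "check_linear q q' G \<longleftrightarrow> (\<forall>g. check_mor q g \<longrightarrow> hat_mor q' (G g)) \<and>
   (\<forall>g g'. check_mor q g \<longrightarrow> check_mor q g' \<longrightarrow> G (ad g g') = ad (G g) (G g')) \<and>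
   (\<forall>s g. is_scalar s \<longrightarrow> check_mor q g \<longrightarrow> G (tn s g) = tn s (G g))"

lemma beA_linear: assumes p: "p \<in> Trip" shows "hat_linear (piA p) p (beA p)"
proof -
  obtain a e c where pe: "p = (a,e,c)" by (cases p)
  have I: "a \<in> I" "e \<in> I" "c \<in> I" using p pe by auto
  have ty: "\<forall>f. hat_mor (piA p) f \<longrightarrow> check_mor p (beA p f)" using swap_A p unfolding is_swap_def by blast
  show ?thesis unfolding hat_linear_def
  proof (intro conjI allI impI)
    show "\<And>f. hat_mor (piA p) f \<Longrightarrow> check_mor p (beA p f)" using ty by blast
  next
    fix f f' assume f: "hat_mor (piA p) f" and f': "hat_mor (piA p) f'"
    have fd: "dm f = ot (V (st a)) (V c)" "cd f = V e" "dm f' = ot (V (st a)) (V c)" "cd f' = V e"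
      using f f' pe by (auto simp: hat_mor_def)
    have "tn (idm (V a)) (ad f f') = ad (tn (idm (V a)) f) (tn (idm (V a)) f')" by (rule tn_ad_r) (use fd in simp_all)
    then show "beA p (ad f f') = ad (beA p f) (beA p f')"
      using pe I fd by (simp add: beA_simp cp_ad_l)
  next
    fix s f assume s: "is_scalar s" and f: "hat_mor (piA p) f"
    have fd: "dm f = ot (V (st a)) (V c)" "cd f = V e" using f pe by (auto simp: hat_mor_def)
    show "beA p (tn s f) = tn s (beA p f)"
      using pe I fd s by (simp add: beA_simp tn_scalar_r cp_scalar_l)
  qed
qed

lemma alA_linear: assumes p: "p \<in> Trip" shows "check_linear (piA p) p (alA p)"
proof -
  obtain a e c where pe: "p = (a,e,c)" by (cases p)
  have I: "a \<in> I" "e \<in> I" "c \<in> I" using p pe by auto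
  have ty: "\<forall>g. check_mor (piA p) g \<longrightarrow> hat_mor p (alA p g)" using swap_A p unfolding is_swap_def by blast
  show ?thesis unfolding check_linear_def
  proof (intro conjI allI impI)
    show "\<And>g. check_mor (piA p) g \<Longrightarrow> hat_mor p (alA p g)" using ty by blast
  next
    fix g g' assume g: "check_mor (piA p) g" and g': "check_mor (piA p) g'"
    have gd: "dm g = V e" "cd g = ot (V (st a)) (V c)" "dm g' = V e" "cd g' = ot (V (st a)) (V c)"
      using g g' pe by (auto simp: check_mor_def)
    have "tn (idm (V a)) (ad g g') = ad (tn (idm (V a)) g) (tn (idm (V a)) g')" by (rule tn_ad_r) (use gd in simp_all)
    then show "alA p (ad g g') = ad (alA p g) (alA p g')"
      using pe I gd by (simp add: alA_simp cp_ad_r)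
  next
    fix s g assume s: "is_scalar s" and g: "check_mor (piA p) g"
    have gd: "dm g = V e" "cd g = ot (V (st a)) (V c)" using g pe by (auto simp: check_mor_def)
    show "alA p (tn s g) = tn s (alA p g)"
      using pe I gd s by (simp add: alA_simp tn_scalar_r cp_scalar_r)
  qed
qed

lemma beB_linear: assumes p: "p \<in> Trip" shows "hat_linear (piB p) p (beB p)"
proof -
  obtain a e c where pe: "p = (a,e,c)" by (cases p)
  have I: "a \<in> I" "e \<in> I" "c \<in> I" using p pe by auto
  have ty: "\<forall>f. hat_mor (piB p) f \<longrightarrow> check_mor p (beB p f)" using swap_B p unfolding is_swap_def by blast
  show ?thesis unfolding hat_linear_def
  proof (intro conjI allI impI)
    show "\<And>f. hat_mor (piB p) f \<Longrightarrow> check_mor p (beB p f)" using ty by blast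
  next
    fix f f' assume f: "hat_mor (piB p) f" and f': "hat_mor (piB p) f'"
    have fd: "dm f = ot (V c) (V (st e))" "cd f = V a" "dm f' = ot (V c) (V (st e))" "cd f' = V a"
      using f f' pe by (auto simp: hat_mor_def)
    have "tn (ad f f') (idm (V e)) = ad (tn f (idm (V e))) (tn f' (idm (V e)))" by (rule tn_ad_l) (use fd in simp_all)
    then show "beB p (ad f f') = ad (beB p f) (beB p f')"
      using pe I fd by (simp add: beB_simp cp_ad_l)
  next
    fix s f assume s: "is_scalar s" and f: "hat_mor (piB p) f"
    have fd: "dm f = ot (V c) (V (st e))" "cd f = V a" using f pe by (auto simp: hat_mor_def)
    show "beB p (tn s f) = tn s (beB p f)"
      using pe I fd s by (simp add: beB_simp cp_scalar_l)
  qed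
qed

lemma alB_linear: assumes p: "p \<in> Trip" shows "check_linear (piB p) p (alB p)"
proof -
  obtain a e c where pe: "p = (a,e,c)" by (cases p)
  have I: "a \<in> I" "e \<in> I" "c \<in> I" using p pe by auto
  have ty: "\<forall>g. check_mor (piB p) g \<longrightarrow> hat_mor p (alB p g)" using swap_B p unfolding is_swap_def by blast
  show ?thesis unfolding check_linear_def
  proof (intro conjI allI impI)
    show "\<And>g. check_mor (piB p) g \<Longrightarrow> hat_mor p (alB p g)" using ty by blast
  next
    fix g g' assume g: "check_mor (piB p) g" and g': "check_mor (piB p) g'"
    have gd: "dm g = V a" "cd g = ot (V c) (V (st e))" "dm g' = V a" "cd g' = ot (V c) (V (st e))"
      using g g' pe by (auto simp: check_mor_def)
    have "tn (ad g g') (idm (V e)) = ad (tn g (idm (V e))) (tn g' (idm (V e)))" by (rule tn_ad_l) (use gd in simp_all)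
    then show "alB p (ad g g') = ad (alB p g) (alB p g')"
      using pe I gd by (simp add: alB_simp cp_ad_r)
  next
    fix s g assume s: "is_scalar s" and g: "check_mor (piB p) g"
    have gd: "dm g = V a" "cd g = ot (V c) (V (st e))" using g pe by (auto simp: check_mor_def)
    show "alB p (tn s g) = tn s (alB p g)"
      using pe I gd s by (simp add: alB_simp cp_scalar_r)
  qed
qed

text \<open>Transposed component maps are defined by representing the functionals
  \<open>f \<mapsto> \<langle>h \<circ> be f\<rangle>\<close> and \<open>g \<mapsto> \<langle>al g \<circ> g'\<rangle>\<close>; by uniqueness they vanish on zero.\<close>

definition rep_check where "rep_check q phi = (SOME g. check_mor q g \<and> (\<forall>f. hat_mor q f \<longrightarrow> sc q (cp f g) = phi f))"
definition rep_hat where "rep_hat q ps = (SOME f. hat_mor q f \<and> (\<forall>g. check_mor q g \<longrightarrow> sc q (cp f g) = ps g))"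

lemma rep_check_spec: assumes q: "q \<in> Trip" and l: "scalar_functional (hat_mor q) phi"
  shows "check_mor q (rep_check q phi)" "\<And>f. hat_mor q f \<Longrightarrow> sc q (cp f (rep_check q phi)) = phi f"
proof -
  have "\<exists>g. check_mor q g \<and> (\<forall>f. hat_mor q f \<longrightarrow> sc q (cp f g) = phi f)"
    by (rule exists_rep_check[OF q l])
  from someI_ex[OF this] show "check_mor q (rep_check q phi)" "\<And>f. hat_mor q f \<Longrightarrow> sc q (cp f (rep_check q phi)) = phi f"
    unfolding rep_check_def by blast+
qed

lemma rep_hat_spec: assumes q: "q \<in> Trip" and l: "scalar_functional (check_mor q) ps"
  shows "hat_mor q (rep_hat q ps)" "\<And>g. check_mor q g \<Longrightarrow> sc q (cp (rep_hat q ps) g) = ps g"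
proof -
  have "\<exists>f. hat_mor q f \<and> (\<forall>g. check_mor q g \<longrightarrow> sc q (cp f g) = ps g)"
    by (rule exists_rep_hat[OF q l])
  from someI_ex[OF this] show "hat_mor q (rep_hat q ps)" "\<And>g. check_mor q g \<Longrightarrow> sc q (cp (rep_hat q ps) g) = ps g"
    unfolding rep_hat_def by blast+
qed

lemma sc_zr: "q \<in> Trip \<Longrightarrow> sc q (zr (obj_k q) (obj_k q)) = zr un un"
  using scal_zr[OF simple_obj_k] by blast

lemma rep_check_zero: assumes q: "q \<in> Trip" and l: "scalar_functional (hat_mor q) phi" and z: "\<And>f. hat_mor q f \<Longrightarrow> phi f = zr un un"
  shows "rep_check q phi = check_zero q"
proof (rule check_unique[OF q rep_check_spec(1)[OF q l] check_mor_zr])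
  fix f assume f: "hat_mor q f"
  have "cp f (check_zero q) = zr (obj_k q) (obj_k q)" using f by (simp add: hat_mor_def)
  then show "sc q (cp f (rep_check q phi)) = sc q (cp f (check_zero q))"
    using rep_check_spec(2)[OF q l f] z[OF f] sc_zr[OF q] by simp
qed

lemma rep_hat_zero: assumes q: "q \<in> Trip" and l: "scalar_functional (check_mor q) ps" and z: "\<And>g. check_mor q g \<Longrightarrow> ps g = zr un un"
  shows "rep_hat q ps = hat_zero q"
proof (rule hat_unique[OF q rep_hat_spec(1)[OF q l] hat_mor_zr])
  fix g assume g: "check_mor q g"
  have "cp (hat_zero q) g = zr (obj_k q) (obj_k q)" using g by (simp add: check_mor_def)
  then show "sc q (cp (rep_hat q ps) g) = sc q (cp (hat_zero q) g)"
    using rep_hat_spec(2)[OF q l g] z[OF g] sc_zr[OF q] by simp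
qed

lemma hat_functional_from: assumes q': "q' \<in> Trip" and F: "hat_linear q q' F" and h: "hat_mor q' h"
  shows "scalar_functional (hat_mor q) (\<lambda>f. sc q' (cp h (F f)))"
proof -
  have F1: "\<And>f. hat_mor q f \<Longrightarrow> check_mor q' (F f)"
   and F2: "\<And>f f'. hat_mor q f \<Longrightarrow> hat_mor q f' \<Longrightarrow> F (ad f f') = ad (F f) (F f')"
   and F3: "\<And>s f. is_scalar s \<Longrightarrow> hat_mor q f \<Longrightarrow> F (tn s f) = tn s (F f)" using F unfolding hat_linear_def by blast+
  have hd: "dm h = obj_ij q'" "cd h = obj_k q'" using h by (auto simp: hat_mor_def)
  show ?thesis unfolding scalar_functional_def
  proof (intro conjI allI impI)
    fix f assume f: "hat_mor q f"
    show "is_scalar (sc q' (cp h (F f)))" using sc_pairing_scalar[OF q' h F1[OF f]] .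
  next
    fix f f' assume f: "hat_mor q f" and f': "hat_mor q f'"
    have t: "dm (F f) = obj_k q'" "cd (F f) = obj_ij q'" "dm (F f') = obj_k q'" "cd (F f') = obj_ij q'"
      using F1[OF f] F1[OF f'] by (auto simp: check_mor_def)
    have "cp h (F (ad f f')) = ad (cp h (F f)) (cp h (F f'))"
      using F2[OF f f'] t hd by (simp add: cp_ad_r)
    then show "sc q' (cp h (F (ad f f'))) = ad (sc q' (cp h (F f))) (sc q' (cp h (F f')))"
      using scal_ad[OF simple_obj_k[OF q']] t hd by simp
  next
    fix s f assume s: "is_scalar s" and f: "hat_mor q f"
    have t: "dm (F f) = obj_k q'" "cd (F f) = obj_ij q'" using F1[OF f] by (auto simp: check_mor_def)
    have "cp h (F (tn s f)) = tn s (cp h (F f))" using F3[OF s f] cp_scalar_r[OF s] t hd by simp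
    then show "sc q' (cp h (F (tn s f))) = cp s (sc q' (cp h (F f)))"
      using scal_tn[OF simple_obj_k[OF q']] s t hd by simp
  qed
qed

lemma check_functional_from: assumes q': "q' \<in> Trip" and G: "check_linear q q' G" and g': "check_mor q' g'"
  shows "scalar_functional (check_mor q) (\<lambda>g. sc q' (cp (G g) g'))"
proof -
  have G1: "\<And>g. check_mor q g \<Longrightarrow> hat_mor q' (G g)"
   and G2: "\<And>g g''. check_mor q g \<Longrightarrow> check_mor q g'' \<Longrightarrow> G (ad g g'') = ad (G g) (G g'')"
   and G3: "\<And>s g. is_scalar s \<Longrightarrow> check_mor q g \<Longrightarrow> G (tn s g) = tn s (G g)" using G unfolding check_linear_def by blast+
  have gd: "dm g' = obj_k q'" "cd g' = obj_ij q'" using g' by (auto simp: check_mor_def)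
  show ?thesis unfolding scalar_functional_def
  proof (intro conjI allI impI)
    fix g assume g: "check_mor q g"
    show "is_scalar (sc q' (cp (G g) g'))" using sc_pairing_scalar[OF q' G1[OF g] g'] .
  next
    fix g g'' assume g: "check_mor q g" and g'': "check_mor q g''"
    have t: "dm (G g) = obj_ij q'" "cd (G g) = obj_k q'" "dm (G g'') = obj_ij q'" "cd (G g'') = obj_k q'"
      using G1[OF g] G1[OF g''] by (auto simp: hat_mor_def)
    have "cp (G (ad g g'')) g' = ad (cp (G g) g') (cp (G g'') g')"
      using G2[OF g g''] t gd by (simp add: cp_ad_l)
    then show "sc q' (cp (G (ad g g'')) g') = ad (sc q' (cp (G g) g')) (sc q' (cp (G g'') g'))"
      using scal_ad[OF simple_obj_k[OF q']] t gd by simp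
  next
    fix s g assume s: "is_scalar s" and g: "check_mor q g"
    have t: "dm (G g) = obj_ij q'" "cd (G g) = obj_k q'" using G1[OF g] by (auto simp: hat_mor_def)
    have "cp (G (tn s g)) g' = tn s (cp (G g) g')" using G3[OF s g] cp_scalar_l[OF s] t gd by simp
    then show "sc q' (cp (G (tn s g)) g') = cp s (sc q' (cp (G g) g'))"
      using scal_tn[OF simple_obj_k[OF q']] s t gd by simp
  qed
qed

definition alT where "alT pi al q g' = rep_hat q (\<lambda>g. sc (pi q) (cp (al (pi q) g) g'))"
definition beT where "beT pi be q h = rep_check q (\<lambda>f. sc (pi q) (cp h (be (pi q) f)))"

definition linear_swap where
  "linear_swap pi al be \<longleftrightarrow> (\<forall>p\<in>Trip. hat_linear (pi p) p (be p) \<and> check_linear (pi p) p (al p))"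

lemma transposed_functionals:
  assumes sw: "is_swap pi al be" and lin: "linear_swap pi al be"
    and q: "q \<in> Trip"
  shows "hat_mor (pi q) h \<Longrightarrow> scalar_functional (hat_mor q) (\<lambda>f. sc (pi q) (cp h (be (pi q) f)))"
    and "check_mor (pi q) g' \<Longrightarrow> scalar_functional (check_mor q) (\<lambda>g. sc (pi q) (cp (al (pi q) g) g'))"
proof -
  have pq: "pi q \<in> Trip" "pi (pi q) = q" using swap_pi[OF sw q] swap_pipi[OF sw q] by auto
  have "hat_linear q (pi q) (be (pi q)) \<and> check_linear q (pi q) (al (pi q))"
    using lin pq unfolding linear_swap_def by force
  then show "hat_mor (pi q) h \<Longrightarrow> scalar_functional (hat_mor q) (\<lambda>f. sc (pi q) (cp h (be (pi q) f)))"
    and "check_mor (pi q) g' \<Longrightarrow> scalar_functional (check_mor q) (\<lambda>g. sc (pi q) (cp (al (pi q) g) g'))"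
    using hat_functional_from[OF pq(1)] check_functional_from[OF pq(1)] by blast+
qed

lemma transposed_swap:
  assumes sw: "is_swap pi al be" and lin: "linear_swap pi al be"
  shows "is_swap pi (alT pi al) (beT pi be)"
  unfolding is_swap_def
proof (intro conjI ballI allI impI)
  note FH = transposed_functionals(1)[OF sw lin] and FC = transposed_functionals(2)[OF sw lin]
  fix p assume p: "p \<in> Trip"
  show "pi p \<in> Trip" "pi (pi p) = p" using swap_pi[OF sw p] swap_pipi[OF sw p] by auto
  show "alT pi al p (check_zero (pi p)) = hat_zero p"
    unfolding alT_def
  proof (rule rep_hat_zero[OF p FC[OF p check_mor_zr]])
    fix g assume g: "check_mor p g"
    have "hat_mor (pi p) (al (pi p) g)"
      using lin swap_pi[OF sw p] g swap_pipi[OF sw p] unfolding linear_swap_def check_linear_def by force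
    then show "sc (pi p) (cp (al (pi p) g) (check_zero (pi p))) = zr un un"
      using sc_zr[OF swap_pi[OF sw p]] by (simp add: hat_mor_def)
  qed
  show "beT pi be p (hat_zero (pi p)) = check_zero p"
    unfolding beT_def
  proof (rule rep_check_zero[OF p FH[OF p hat_mor_zr]])
    fix f assume f: "hat_mor p f"
    have "check_mor (pi p) (be (pi p) f)"
      using lin swap_pi[OF sw p] f swap_pipi[OF sw p] unfolding linear_swap_def hat_linear_def by force
    then show "sc (pi p) (cp (hat_zero (pi p)) (be (pi p) f)) = zr un un"
      using sc_zr[OF swap_pi[OF sw p]] by (simp add: check_mor_def)
  qed
next
  note FH = transposed_functionals(1)[OF sw lin] and FC = transposed_functionals(2)[OF sw lin]
  fix p g f assume p: "p \<in> Trip"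
  show "check_mor (pi p) g \<Longrightarrow> hat_mor p (alT pi al p g)" unfolding alT_def using rep_hat_spec(1)[OF p FC[OF p]] .
  show "hat_mor (pi p) f \<Longrightarrow> check_mor p (beT pi be p f)" unfolding beT_def using rep_check_spec(1)[OF p FH[OF p]] .
qed

lemma transposed_adjoint:
  assumes sw: "is_swap pi al be" and lin: "linear_swap pi al be"
  shows "\<forall>p\<in>Trip. \<forall>f h. hat_mor (pi p) f \<longrightarrow> hat_mor p h \<longrightarrow> sc p (cp h (be p f)) = sc (pi p) (cp f (beT pi be (pi p) h))"
    and "\<forall>p\<in>Trip. \<forall>g g'. check_mor (pi p) g \<longrightarrow> check_mor p g' \<longrightarrow> sc p (cp (al p g) g') = sc (pi p) (cp (alT pi al (pi p) g') g)"
proof -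
  note FH = transposed_functionals(1)[OF sw lin] and FC = transposed_functionals(2)[OF sw lin]
  have q: "pi p \<in> Trip" "pi (pi p) = p" if "p \<in> Trip" for p using swap_pi[OF sw that] swap_pipi[OF sw that] by auto
  show "\<forall>p\<in>Trip. \<forall>f h. hat_mor (pi p) f \<longrightarrow> hat_mor p h \<longrightarrow> sc p (cp h (be p f)) = sc (pi p) (cp f (beT pi be (pi p) h))"
  proof (intro ballI allI impI)
    fix p f h assume p: "p \<in> Trip" and f: "hat_mor (pi p) f" and h: "hat_mor p h"
    have "sc (pi p) (cp f (beT pi be (pi p) h)) = sc (pi (pi p)) (cp h (be (pi (pi p)) f))"
      unfolding beT_def using rep_check_spec(2)[OF q(1)[OF p] FH[OF q(1)[OF p]] f] h q(2)[OF p] by simp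
    then show "sc p (cp h (be p f)) = sc (pi p) (cp f (beT pi be (pi p) h))" using q(2)[OF p] by simp
  qed
  show "\<forall>p\<in>Trip. \<forall>g g'. check_mor (pi p) g \<longrightarrow> check_mor p g' \<longrightarrow> sc p (cp (al p g) g') = sc (pi p) (cp (alT pi al (pi p) g') g)"
  proof (intro ballI allI impI)
    fix p g g' assume p: "p \<in> Trip" and g: "check_mor (pi p) g" and g': "check_mor p g'"
    have "sc (pi p) (cp (alT pi al (pi p) g') g) = sc (pi (pi p)) (cp (al (pi (pi p)) g) g')"
      unfolding alT_def using rep_hat_spec(2)[OF q(1)[OF p] FC[OF q(1)[OF p]] g] g' q(2)[OF p] by simp
    then show "sc p (cp (al p g) g') = sc (pi p) (cp (alT pi al (pi p) g') g)" using q(2)[OF p] by simp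
  qed
qed

lemma transposed_swap_transpose:
  assumes sw: "is_swap pi al be" and lin: "linear_swap pi al be"
    and x: "x \<in> H" and y: "y \<in> H"
  shows "fm (swap_op pi al be x) y = fm x (swap_op pi (alT pi al) (beT pi be) y)"
  by (rule swap_op_transpose[OF sw transposed_swap[OF sw lin] transposed_adjoint[OF sw lin] x y])

lemma linear_A: "linear_swap piA alA beA" unfolding linear_swap_def using beA_linear alA_linear by blast
lemma linear_B: "linear_swap piB alB beB" unfolding linear_swap_def using beB_linear alB_linear by blast

subsection \<open>Nondegeneracy of the form\<close>

text \<open>Elements of \<open>H\<close> concentrated in a single summand; pairing with them extracts components,
  which gives nondegeneracy of the form.\<close>

definition hat_unit where "hat_unit p0 f = ((\<lambda>a e c. if a \<in> I \<and> e \<in> I \<and> c \<in> I then (if (a,e,c) = p0 then f else hat_zero (a,e,c)) else undefined),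
   (\<lambda>a e c. if a \<in> I \<and> e \<in> I \<and> c \<in> I then check_zero (a,e,c) else undefined))"
definition check_unit where "check_unit p0 g = ((\<lambda>a e c. if a \<in> I \<and> e \<in> I \<and> c \<in> I then hat_zero (a,e,c) else undefined),
   (\<lambda>a e c. if a \<in> I \<and> e \<in> I \<and> c \<in> I then (if (a,e,c) = p0 then g else check_zero (a,e,c)) else undefined))"

lemma hat_unit_hat_comp: "q \<in> Trip \<Longrightarrow> hat_comp (hat_unit p0 f) q = (if q = p0 then f else hat_zero q)"
  and hat_unit_check_comp: "q \<in> Trip \<Longrightarrow> check_comp (hat_unit p0 f) q = check_zero q"
  and check_unit_hat_comp: "q \<in> Trip \<Longrightarrow> hat_comp (check_unit p0 g) q = hat_zero q"
  and check_unit_check_comp: "q \<in> Trip \<Longrightarrow> check_comp (check_unit p0 g) q = (if q = p0 then g else check_zero q)"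
  by (cases q, simp add: hat_unit_def check_unit_def)+

lemma hat_unit_supp: "supp (hat_unit p0 f) \<subseteq> {p0}"
proof
  fix q assume q: "q \<in> supp (hat_unit p0 f)"
  then have qT: "q \<in> Trip" using supp_Trip by blast
  show "q \<in> {p0}"
  proof (rule ccontr)
    assume "q \<notin> {p0}"
    then have "hat_comp (hat_unit p0 f) q = hat_zero q" "check_comp (hat_unit p0 f) q = check_zero q" using hat_unit_hat_comp[OF qT] hat_unit_check_comp[OF qT] by auto
    then show False using q unfolding supp_alt by blast
  qed
qed
lemma check_unit_supp: "supp (check_unit p0 g) \<subseteq> {p0}"
proof
  fix q assume q: "q \<in> supp (check_unit p0 g)"
  then have qT: "q \<in> Trip" using supp_Trip by blast
  show "q \<in> {p0}"
  proof (rule ccontr)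
    assume "q \<notin> {p0}"
    then have "hat_comp (check_unit p0 g) q = hat_zero q" "check_comp (check_unit p0 g) q = check_zero q" using check_unit_hat_comp[OF qT] check_unit_check_comp[OF qT] by auto
    then show False using q unfolding supp_alt by blast
  qed
qed

lemma hat_unit_H: assumes "p0 \<in> Trip" "hat_mor p0 f" shows "hat_unit p0 f \<in> H"
  unfolding H_iff
proof (intro conjI ballI allI impI)
  fix p assume p: "p \<in> Trip"
  show "hat_mor p (hat_comp (hat_unit p0 f) p)" using assms hat_unit_hat_comp[OF p] by auto
  show "check_mor p (check_comp (hat_unit p0 f) p)" using hat_unit_check_comp[OF p] by simp
next
  fix i j k assume n: "\<not> (i \<in> I \<and> j \<in> I \<and> k \<in> I)"
  show "fst (hat_unit p0 f) i j k = undefined" "snd (hat_unit p0 f) i j k = undefined"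
    unfolding hat_unit_def by (simp_all only: fst_conv snd_conv if_not_P[OF n])
next
  show "finite (supp (hat_unit p0 f))" using hat_unit_supp finite_subset by blast
qed

lemma check_unit_H: assumes "p0 \<in> Trip" "check_mor p0 g" shows "check_unit p0 g \<in> H"
  unfolding H_iff
proof (intro conjI ballI allI impI)
  fix p assume p: "p \<in> Trip"
  show "hat_mor p (hat_comp (check_unit p0 g) p)" using check_unit_hat_comp[OF p] by simp
  show "check_mor p (check_comp (check_unit p0 g) p)" using assms check_unit_check_comp[OF p] by auto
next
  fix i j k assume n: "\<not> (i \<in> I \<and> j \<in> I \<and> k \<in> I)"
  show "fst (check_unit p0 g) i j k = undefined" "snd (check_unit p0 g) i j k = undefined"
    unfolding check_unit_def by (simp_all only: fst_conv snd_conv if_not_P[OF n])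
next
  show "finite (supp (check_unit p0 g))" using check_unit_supp finite_subset by blast
qed

lemma msum_single: assumes "finite S" "p \<in> S" "\<forall>q\<in>S - {p}. g q = zr un un" "typed un un (g p)"
  shows "msum C un un g S = g p"
proof -
  have "msum C un un g S = msum C un un g {p}"
    by (rule msum_zero_ext) (use assms in auto)
  also have "\<dots> = ad (g p) (msum C un un g {})"
    by (rule msum_insert) (use assms in auto)
  finally show ?thesis using assms(4) by (simp add: typed_def)
qed

lemma fm_hat_unit: assumes p0: "p0 \<in> Trip" and f: "hat_mor p0 f" and x: "x \<in> H"
  shows "fm (hat_unit p0 f) x = sc p0 (cp f (check_comp x p0))"
proof -
  let ?S = "insert p0 (supp x)"
  have fS: "finite ?S" using H_fin[OF x] by simp
  have ST: "?S \<subseteq> Trip" using p0 supp_Trip by blast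
  have "fm (hat_unit p0 f) x = msum C un un (form_term (hat_unit p0 f) x) ?S"
    by (rule fm_over[OF hat_unit_H[OF p0 f] x fS ST]) (use hat_unit_supp in blast)
  also have "\<dots> = form_term (hat_unit p0 f) x p0"
  proof (rule msum_single[OF fS])
    show "p0 \<in> ?S" by simp
    show "\<forall>q\<in>?S - {p0}. form_term (hat_unit p0 f) x q = zr un un"
    proof
      fix q assume q: "q \<in> ?S - {p0}"
      then have qT: "q \<in> Trip" using ST by blast
      have t: "hat_mor q (hat_comp x q)" "check_mor q (check_comp x q)" using H_hat_mor[OF x qT] H_check_mor[OF x qT] .
      have "cp (hat_zero q) (check_comp x q) = zr (obj_k q) (obj_k q)" "cp (hat_comp x q) (check_zero q) = zr (obj_k q) (obj_k q)"
        using t by (simp_all add: hat_mor_def check_mor_def)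
      then show "form_term (hat_unit p0 f) x q = zr un un"
        unfolding form_term_alt using hat_unit_hat_comp[OF qT] hat_unit_check_comp[OF qT] q sc_zr[OF qT] by simp
    qed
    show "typed un un (form_term (hat_unit p0 f) x p0)" using form_term_scalar[OF hat_unit_H[OF p0 f] x p0] unfolding typed_def is_scalar_def by blast
  qed
  also have "\<dots> = sc p0 (cp f (check_comp x p0))"
  proof -
    have t: "hat_mor p0 (hat_comp x p0)" "check_mor p0 (check_comp x p0)" using H_hat_mor[OF x p0] H_check_mor[OF x p0] .
    have "cp (hat_comp x p0) (check_zero p0) = zr (obj_k p0) (obj_k p0)" using t by (simp add: hat_mor_def check_mor_def)
    moreover have "is_scalar (sc p0 (cp f (check_comp x p0)))" using sc_pairing_scalar[OF p0 f t(2)] .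
    ultimately show ?thesis unfolding form_term_alt using hat_unit_hat_comp[OF p0] hat_unit_check_comp[OF p0] sc_zr[OF p0] by simp
  qed
  finally show ?thesis .
qed

lemma fm_check_unit: assumes p0: "p0 \<in> Trip" and g: "check_mor p0 g" and x: "x \<in> H"
  shows "fm (check_unit p0 g) x = sc p0 (cp (hat_comp x p0) g)"
proof -
  let ?S = "insert p0 (supp x)"
  have fS: "finite ?S" using H_fin[OF x] by simp
  have ST: "?S \<subseteq> Trip" using p0 supp_Trip by blast
  have "fm (check_unit p0 g) x = msum C un un (form_term (check_unit p0 g) x) ?S"
    by (rule fm_over[OF check_unit_H[OF p0 g] x fS ST]) (use check_unit_supp in blast)
  also have "\<dots> = form_term (check_unit p0 g) x p0"
  proof (rule msum_single[OF fS])
    show "p0 \<in> ?S" by simp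
    show "\<forall>q\<in>?S - {p0}. form_term (check_unit p0 g) x q = zr un un"
    proof
      fix q assume q: "q \<in> ?S - {p0}"
      then have qT: "q \<in> Trip" using ST by blast
      have t: "hat_mor q (hat_comp x q)" "check_mor q (check_comp x q)" using H_hat_mor[OF x qT] H_check_mor[OF x qT] .
      have "cp (hat_zero q) (check_comp x q) = zr (obj_k q) (obj_k q)" "cp (hat_comp x q) (check_zero q) = zr (obj_k q) (obj_k q)"
        using t by (simp_all add: hat_mor_def check_mor_def)
      then show "form_term (check_unit p0 g) x q = zr un un"
        unfolding form_term_alt using check_unit_hat_comp[OF qT] check_unit_check_comp[OF qT] q sc_zr[OF qT] by simp
    qed
    show "typed un un (form_term (check_unit p0 g) x p0)" using form_term_scalar[OF check_unit_H[OF p0 g] x p0] unfolding typed_def is_scalar_def by blast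
  qed
  also have "\<dots> = sc p0 (cp (hat_comp x p0) g)"
  proof -
    have t: "hat_mor p0 (hat_comp x p0)" "check_mor p0 (check_comp x p0)" using H_hat_mor[OF x p0] H_check_mor[OF x p0] .
    have "cp (hat_zero p0) (check_comp x p0) = zr (obj_k p0) (obj_k p0)" using t by (simp add: hat_mor_def check_mor_def)
    moreover have "is_scalar (sc p0 (cp (hat_comp x p0) g))" using sc_pairing_scalar[OF p0 t(1) g] .
    ultimately show ?thesis unfolding form_term_alt using check_unit_hat_comp[OF p0] check_unit_check_comp[OF p0] sc_zr[OF p0] by (simp add: ad_comm)
  qed
  finally show ?thesis .
qed

lemma fm_nondegenerate: assumes x: "x \<in> H" and x': "x' \<in> H" and e: "\<And>y. y \<in> H \<Longrightarrow> fm y x = fm y x'"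
  shows "x = x'"
proof (rule H_eqI[OF x x'], intro ballI conjI)
  fix p assume p: "p \<in> Trip"
  show "hat_comp x p = hat_comp x' p"
  proof (rule hat_unique[OF p H_hat_mor[OF x p] H_hat_mor[OF x' p]])
    fix g assume g: "check_mor p g"
    show "sc p (cp (hat_comp x p) g) = sc p (cp (hat_comp x' p) g)"
      using e[OF check_unit_H[OF p g]] fm_check_unit[OF p g x] fm_check_unit[OF p g x'] by simp
  qed
  show "check_comp x p = check_comp x' p"
  proof (rule check_unique[OF p H_check_mor[OF x p] H_check_mor[OF x' p]])
    fix f assume f: "hat_mor p f"
    show "sc p (cp f (check_comp x p)) = sc p (cp f (check_comp x' p))"
      using e[OF hat_unit_H[OF p f]] fm_hat_unit[OF p f x] fm_hat_unit[OF p f x'] by simp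
  qed
qed

abbreviation "Aop \<equiv> swap_op piA alA beA"
abbreviation "Bop \<equiv> swap_op piB alB beB"
abbreviation "Atr \<equiv> swap_op piA (alT piA alA) (beT piA beA)"
abbreviation "Btr \<equiv> swap_op piB (alT piB alB) (beT piB beB)"

lemma opA_is_Aop: "opA C I V st b d = Aop" using opA_eq by (intro ext) simp
lemma opB_is_Bop: "opB C I V st b d = Bop" using opB_eq by (intro ext) simp

lemma swap_Atr: "is_swap piA (alT piA alA) (beT piA beA)" using transposed_swap[OF swap_A linear_A] .
lemma swap_Btr: "is_swap piB (alT piB alB) (beT piB beB)" using transposed_swap[OF swap_B linear_B] .

lemma Aop_Bop_Aop: "Aop (Bop (Aop x)) = swap_op piX alX beX x"
  unfolding X_def' by (rule swap_op_comp3) (simp_all add: swap_pi[OF swap_A] swap_pi[OF swap_B])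

lemma Bop_Aop_Bop: "Bop (Aop (Bop x)) = swap_op piX alY beY x"
proof -
  have "Bop (Aop (Bop x)) = swap_op piY alY beY x"
    unfolding Y_def' by (rule swap_op_comp3) (simp_all add: swap_pi[OF swap_A] swap_pi[OF swap_B])
  also have "\<dots> = swap_op piX alY beY x" by (rule swap_op_cong_pi) (rule piXY)
  finally show ?thesis .
qed

theorem involutive_pair: "involutive_pair H fm Aop Bop Atr Btr"
proof unfold_locales
  fix x y assume x: "x \<in> H"
  show "Aop x \<in> H" "Bop x \<in> H" "Atr x \<in> H" "Btr x \<in> H"
    using x swap_H swap_A swap_B swap_Atr swap_Btr by blast+
  show "Aop (Aop x) = x" using swap_op_invol[OF swap_A invol_A x] .
  show "Bop (Bop x) = x" using swap_op_invol[OF swap_B invol_B x] .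
  assume y: "y \<in> H"
  show "fm x y = fm y x" using fm_sym[OF x y] .
  show "fm (Aop x) y = fm x (Atr y)" using transposed_swap_transpose[OF swap_A linear_A x y] .
  show "fm (Bop x) y = fm x (Btr y)" using transposed_swap_transpose[OF swap_B linear_B x y] .
  show "fm (Aop (Bop (Aop x))) y = fm x (Bop (Aop (Bop y)))"
    unfolding Aop_Bop_Aop Bop_Aop_Bop using X_transpose[OF x y] .
next
  fix x x' assume "x \<in> H" "x' \<in> H" "\<And>y. y \<in> H \<Longrightarrow> fm y x = fm y x'"
  then show "x = x'" by (rule fm_nondegenerate)
qed

subsection \<open>Grading\<close>

definition in_hat_part where "in_hat_part p x \<longleftrightarrow> x \<in> H \<and>
   (\<forall>q\<in>Trip. check_comp x q = check_zero q \<and> (q \<noteq> p \<longrightarrow> hat_comp x q = hat_zero q))"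
definition in_check_part where "in_check_part p x \<longleftrightarrow> x \<in> H \<and>
   (\<forall>q\<in>Trip. hat_comp x q = hat_zero q \<and> (q \<noteq> p \<longrightarrow> check_comp x q = check_zero q))"

lemma hat_part_iff: "i \<in> I \<Longrightarrow> j \<in> I \<Longrightarrow> k \<in> I \<Longrightarrow> x \<in> hat_part C I V i j k \<longleftrightarrow> in_hat_part (i,j,k) x"
  unfolding hat_part_def in_hat_part_def by (auto simp: hz_def cz_def)
lemma check_part_iff: "i \<in> I \<Longrightarrow> j \<in> I \<Longrightarrow> k \<in> I \<Longrightarrow> x \<in> check_part C I V i j k \<longleftrightarrow> in_check_part (i,j,k) x"
  unfolding check_part_def in_check_part_def by (auto simp: hz_def cz_def)

lemma swap_hat_to_check: assumes sw: "is_swap pi al be" and x: "in_hat_part p x"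
  shows "in_check_part (pi p) (swap_op pi al be x)"
  unfolding in_check_part_def
proof (intro conjI ballI impI)
  show "swap_op pi al be x \<in> H" using swap_H[OF sw] x by (simp add: in_hat_part_def)
next
  fix q assume q: "q \<in> Trip"
  have z: "al q (check_zero (pi q)) = hat_zero q" "be q (hat_zero (pi q)) = check_zero q"
    using sw q unfolding is_swap_def by blast+
  have "check_comp x (pi q) = check_zero (pi q)"
    using x swap_pi[OF sw q] unfolding in_hat_part_def by auto
  moreover have "pi q \<noteq> p \<Longrightarrow> hat_comp x (pi q) = hat_zero (pi q)"
    using x swap_pi[OF sw q] unfolding in_hat_part_def by auto
  moreover have "q \<noteq> pi p \<Longrightarrow> pi q \<noteq> p" using swap_pipi[OF sw q] by auto
  ultimately show "hat_comp (swap_op pi al be x) q = hat_zero q"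
    and "q \<noteq> pi p \<Longrightarrow> check_comp (swap_op pi al be x) q = check_zero q"
    using z by (simp_all add: swap_op_hat_comp[OF q] swap_op_check_comp[OF q])
qed

lemma swap_check_to_hat: assumes sw: "is_swap pi al be" and x: "in_check_part p x"
  shows "in_hat_part (pi p) (swap_op pi al be x)"
  unfolding in_hat_part_def
proof (intro conjI ballI impI)
  show "swap_op pi al be x \<in> H" using swap_H[OF sw] x by (simp add: in_check_part_def)
next
  fix q assume q: "q \<in> Trip"
  have z: "al q (check_zero (pi q)) = hat_zero q" "be q (hat_zero (pi q)) = check_zero q"
    using sw q unfolding is_swap_def by blast+
  have "hat_comp x (pi q) = hat_zero (pi q)"
    using x swap_pi[OF sw q] unfolding in_check_part_def by auto
  moreover have "pi q \<noteq> p \<Longrightarrow> check_comp x (pi q) = check_zero (pi q)"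
    using x swap_pi[OF sw q] unfolding in_check_part_def by auto
  moreover have "q \<noteq> pi p \<Longrightarrow> pi q \<noteq> p" using swap_pipi[OF sw q] by auto
  ultimately show "check_comp (swap_op pi al be x) q = check_zero q"
    and "q \<noteq> pi p \<Longrightarrow> hat_comp (swap_op pi al be x) q = hat_zero q"
    using z by (simp_all add: swap_op_hat_comp[OF q] swap_op_check_comp[OF q])
qed

text \<open>Two consecutive swaps over the same involutive permutation return every summand to itself;
  \<open>L\<close>, \<open>R\<close> and \<open>C = ABA \<circ> BAB\<close> are of this form.\<close>

lemma grading_two_swaps:
  assumes sw: "is_swap pi al be" and sw': "is_swap pi al' be'"
    and F: "\<And>x. x \<in> H \<Longrightarrow> F x = swap_op pi al' be' (swap_op pi al be x)"
  shows "grading_preserving C I V F"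
  unfolding grading_preserving_def
proof (intro ballI conjI subsetI)
  fix i j k y assume I: "i \<in> I" "j \<in> I" "k \<in> I"
  have pi_pi: "pi (pi (i,j,k)) = (i,j,k)" using swap_pipi[OF sw] I by simp
  show "y \<in> check_part C I V i j k" if "y \<in> F ` check_part C I V i j k"
  proof -
    from that obtain x where x: "in_check_part (i,j,k) x" "y = F x" using check_part_iff[OF I] by blast
    then have "in_check_part (pi (pi (i,j,k))) y"
      using swap_hat_to_check[OF sw' swap_check_to_hat[OF sw x(1)]] F by (simp add: in_check_part_def)
    then show ?thesis using pi_pi check_part_iff[OF I] by simp
  qed
  show "y \<in> hat_part C I V i j k" if "y \<in> F ` hat_part C I V i j k"
  proof -
    from that obtain x where x: "in_hat_part (i,j,k) x" "y = F x" using hat_part_iff[OF I] by blast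
    then have "in_hat_part (pi (pi (i,j,k))) y"
      using swap_check_to_hat[OF sw' swap_hat_to_check[OF sw x(1)]] F by (simp add: in_hat_part_def)
    then show ?thesis using pi_pi hat_part_iff[OF I] by simp
  qed
qed

lemma grading_L: "grading_preserving C I V (op_transpose H fm Aop \<circ> Aop)"
proof (rule grading_two_swaps[OF swap_A swap_Atr])
  fix x assume "x \<in> H"
  then show "(op_transpose H fm Aop \<circ> Aop) x = Atr (Aop x)"
    using involutive_pair.transpose_A[OF involutive_pair] swap_H[OF swap_A] by simp
qed

lemma grading_R: "grading_preserving C I V (op_transpose H fm Bop \<circ> Bop)"
proof (rule grading_two_swaps[OF swap_B swap_Btr])
  fix x assume "x \<in> H"
  then show "(op_transpose H fm Bop \<circ> Bop) x = Btr (Bop x)"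
    using involutive_pair.transpose_B[OF involutive_pair] swap_H[OF swap_B] by simp
qed

lemma grading_C: "grading_preserving C I V (Aop \<circ> Bop \<circ> Aop \<circ> Bop \<circ> Aop \<circ> Bop)"
  by (rule grading_two_swaps[OF swap_Y' swap_X]) (simp add: Aop_Bop_Aop[symmetric] Bop_Aop_Bop[symmetric])

theorem operator_identities:
  defines "A \<equiv> opA C I V st b d" and "B \<equiv> opB C I V st b d"
  defines "L \<equiv> op_transpose H fm A \<circ> A"
      and "R \<equiv> op_transpose H fm B \<circ> B"
      and "Cop \<equiv> A \<circ> B \<circ> A \<circ> B \<circ> A \<circ> B"
  shows "(\<forall>F\<in>{L, R, Cop}. bij_betw F H H \<and> symmetric_op H fm F \<and> grading_preserving C I V F)
    \<and> (\<forall>x\<in>H. A (Cop (A x)) = the_inv_into H Cop x)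
    \<and> (\<forall>x\<in>H. B (Cop (B x)) = the_inv_into H Cop x)
    \<and> (\<forall>x\<in>H. L (Cop (the_inv_into H L x)) = Cop x)
    \<and> (\<forall>x\<in>H. R (Cop (the_inv_into H R x)) = Cop x)
    \<and> (\<forall>x\<in>H. A (L (A x)) = the_inv_into H L x)
    \<and> (\<forall>x\<in>H. B (R (B x)) = the_inv_into H R x)
    \<and> (\<forall>x\<in>H. A (R (A x)) = the_inv_into H L (R (the_inv_into H Cop x)))
    \<and> (\<forall>x\<in>H. B (L (B x)) = the_inv_into H R (L (Cop x)))"
proof -
  interpret pair: involutive_pair H fm Aop Bop Atr Btr by (rule involutive_pair)
  have ops: "A = Aop" "B = Bop" "L = pair.Lop" "R = pair.Rop" "Cop = pair.Cop"
    unfolding A_def B_def L_def R_def Cop_def pair.Lop_def pair.Rop_def pair.Cop_def opA_is_Aop opB_is_Bop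
    by simp_all
  have grading: "grading_preserving C I V pair.Lop" "grading_preserving C I V pair.Rop"
      "grading_preserving C I V pair.Cop"
    unfolding pair.Lop_def pair.Rop_def pair.Cop_def by (fact grading_L grading_R grading_C)+
  show ?thesis unfolding ops
    using pair.bij_Lop pair.bij_Rop pair.bij_Cop pair.symmetric_Lop pair.symmetric_Rop
      pair.symmetric_Cop grading pair.A_Cop_A pair.B_Cop_B pair.Lop_conj_Cop pair.Rop_conj_Cop
      pair.A_Lop_A pair.B_Rop_B pair.A_Rop_A pair.B_Lop_B
    by blast
qed

end

theorem lemma5p1:
  fixes Cat :: "('o,'m) mcat" and I :: "'i set" and V :: "'i \<Rightarrow> 'o"
    and st :: "'i \<Rightarrow> 'i" and b d :: "'i \<Rightarrow> 'm"
  assumes psi: "psi_system Cat I V st b d"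
  defines "H \<equiv> Hsp Cat I V"
      and "A \<equiv> opA Cat I V st b d"
      and "B \<equiv> opB Cat I V st b d"
      and "fm \<equiv> hform Cat I V"
  defines "L \<equiv> op_transpose H fm A \<circ> A"
      and "R \<equiv> op_transpose H fm B \<circ> B"
      and "C \<equiv> A \<circ> B \<circ> A \<circ> B \<circ> A \<circ> B"
  shows "(\<forall>F\<in>{L, R, C}. bij_betw F H H \<and> symmetric_op H fm F \<and> grading_preserving Cat I V F)
    \<and> (\<forall>x\<in>H. A (C (A x)) = the_inv_into H C x)
    \<and> (\<forall>x\<in>H. B (C (B x)) = the_inv_into H C x)
    \<and> (\<forall>x\<in>H. L (C (the_inv_into H L x)) = C x)
    \<and> (\<forall>x\<in>H. R (C (the_inv_into H R x)) = C x)
    \<and> (\<forall>x\<in>H. A (L (A x)) = the_inv_into H L x)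
    \<and> (\<forall>x\<in>H. B (R (B x)) = the_inv_into H R x)
    \<and> (\<forall>x\<in>H. A (R (A x)) = the_inv_into H L (R (the_inv_into H C x)))
    \<and> (\<forall>x\<in>H. B (L (B x)) = the_inv_into H R (L (C x)))"
proof -
  interpret P: psi Cat I V st b d
    using psi by unfold_locales (simp_all add: psi_system_def)
  show ?thesis
    unfolding L_def R_def C_def H_def A_def B_def fm_def by (rule P.operator_identities)
qed

end
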